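(* Let $(\mathcal{A},\mathcal{B},\mathcal{C})$ be a recollement of extriangulated categories. If either $i^!$ or $i^*$ is an exact functor, then $$\max\{\operatorname{ext.dim}\mathcal{A},\operatorname{ext.dim}\mathcal{C}\}\le\operatorname{ext.dim}\mathcal{B}\le\operatorname{ext.dim}\mathcal{A}+\operatorname{ext.dim}\mathcal{C}+1$$ (with $n+\infty=\infty$).
   Context: Extriangulated categories $(\mathcal{C},\mathbb{E},\mathfrak{s})$ are in the sense of Nakaoka–Palu: $\mathcal{C}$ additive, $\mathbb{E}:\mathcal{C}^{op}\times\mathcal{C}\to\mathrm{Ab}$ biadditive, $\mathfrak{s}$ an additive realization sending $\delta\in\mathbb{E}(C,A)$ to a class of sequences $[A\xrightarrow{x}B\xrightarrow{y}C]$, satisfying (ET1)–(ET4), (ET3)$^{op}$, (ET4)$^{op}$. Such a sequence is an $\mathbb{E}$-triangle $A\xrightarrow{x}B\xrightarrow{y}C\overset{\delta}{\dashrightarrow}$; $x$ is an inflation, $y$ a deflation. Standing assumptions: every extriangulated category is Krull–Schmidt, Hom-finite, $k$-linear, has enough projectives and injectives, and satisfies (WIC): if $gf$ is an inflation then $f$ is an inflation; if $gf$ is a deflation then $g$ is a deflation. A morphism $f$ is compatible if ($f$ is both an inflation and a deflation) implies $f$ is an isomorphism. A sequence $A\xrightarrow{f}B\xrightarrow{g}C$ is right exact if there is an $\mathbb{E}$-triangle $K\xrightarrow{h_2}B\xrightarrow{g}C\dashrightarrow$ and a compatible deflation $h_1:A\to K$ with $f=h_2h_1$ (left exact dually). A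 4-term sequence $A\xrightarrow{f}B\xrightarrow{g}C\xrightarrow{h}D$ is right (resp. left) exact if there are $\mathbb{E}$-triangles $A\xrightarrow{f}B\xrightarrow{g_1}K\dashrightarrow$ and $K\xrightarrow{g_2}C\xrightarrow{h}D\dashrightarrow$ with $g=g_2g_1$ and $g_1$ (resp. $g_2$) compatible. An additive functor $F:\mathcal{A}\to\mathcal{B}$ is right exact if (1) it sends compatible morphisms to compatible morphisms; (2) it sends right exact sequences to right exact sequences (so for each $\mathbb{E}_{\mathcal{A}}$-triangle $A\xrightarrow{f}B\xrightarrow{g}C\overset{\delta}{\dashrightarrow}$ there is an $\mathbb{E}_{\mathcal{B}}$-triangle $A'\xrightarrow{x}FB\xrightarrow{Fg}FC\dashrightarrow$ with $Ff=xy$, $y:FA\to A'$ a compatible deflation); (3) there is a natural transformation $\eta_{(C,A)}:\mathbb{E}_{\mathcal{A}}(C,A)\to\mathbb{E}_{\mathcal{B}}(FC,A')$ with $\mathfrak{s}_{\mathcal{B}}(\eta(\delta))=[A'\xrightarrow{x}FB\xrightarrow{Fg}FC]$. Left exact functors are defined dually. $F$ is exact if it preserves compatible morphisms and there is a natural transformation $\eta:\mathbb{E}_{\mathcal{A}}(-,-)\Rightarrow\mathbb{E}_{\mathcal{B}}(F-,F-)$ with $\mathfrak{s}_{\mathcal{B}}(\eta(\delta))=[FA\xrightarrow{Fx}FB\xrightarrow{Fy}FC]$ whenever $\mathfrak{s}_{\mathcal{A}}(\delta)=[A\xrightarrow{x}B\xrightarrow{y}C]$. A recollement $(\mathcal{A},\mathcal{B},\mathcal{C})$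 of extriangulated categories consists of exact functors $i_*:\mathcal{A}\to\mathcal{B}$, $j^*:\mathcal{B}\to\mathcal{C}$, right exact functors $i^*:\mathcal{B}\to\mathcal{A}$, $j_!:\mathcal{C}\to\mathcal{B}$, and left exact functors $i^!:\mathcal{B}\to\mathcal{A}$, $j_*:\mathcal{C}\to\mathcal{B}$ such that: (R1) $(i^*,i_*,i^!)$ and $(j_!,j^*,j_* )$ are adjoint triples; (R2) the essential image of $i_*$ equals the kernel of $j^*$; (R3) $i_*,j_!,j_*$ are fully faithful; (R4) for each $B\in\mathcal{B}$ there is a left exact 4-term $\mathbb{E}$-triangle sequence $i_*i^!(B)\xrightarrow{\theta_B}B\xrightarrow{\vartheta_B}j_*j^*(B)\to i_*(A)$ with $A\in\mathcal{A}$ and $\theta_B,\vartheta_B$ the adjunction morphisms; (R5) for each $B\in\mathcal{B}$ there is a right exact 4-term $\mathbb{E}$-triangle sequence $i_*(A')\to j_!j^*(B)\xrightarrow{\upsilon_B}B\xrightarrow{\nu_B}i_*i^*(B)$ with $A'\in\mathcal{A}$ and $\upsilon_B,\nu_B$ the adjunction morphisms. $\operatorname{add}\mathcal{U}$ denotes direct summands of finite direct sums of objects of $\mathcal{U}$. $\mathcal{U}_1\diamond\mathcal{U}_2:=\operatorname{add}\{A\mid\exists\ \mathbb{E}\text{-triangle }U_1\to A\to U_2\dashrightarrow,\ U_i\in\mathcal{U}_i\}$. For an object $T$: $\langle T\rangle_0=0$, $\langle T\rangle_1=\operatorname{add}T$, $\langle T\rangle_n=\langle T\rangle_1\diamond\langle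 T\rangle_{n-1}$ ($n\ge2$). The extension dimension is $\operatorname{ext.dim}\mathcal{C}:=\inf\{n\ge0\mid\exists\,T\in\mathcal{C}\text{ with }\langle T\rangle_{n+1}=\mathcal{C}\}$ ($\inf\emptyset=\infty$). *)

theory Defs
  imports Main "HOL-Library.Extended_Nat"
begin

section \<open>Extriangulated categories (Nakaoka--Palu), concretely encoded\<close>

text \<open>An extriangulated category is encoded by one record:
  objects and Hom-sets (with composition, identities, k-linear structure),
  the bifunctor E given by sets Ex C A (= E(C,A)) with group operations and
  the actions push C a (= a_* on E(C,-)) and pull A c (= c^* on E(-,A)),
  and the realization s as a relation: rlz C A d B x y means that the
  sequence A --x--> B --y--> C belongs to the class s(d), d in E(C,A).
  cmp g f denotes the composite g o f.\<close>

record ('o, 'm, 'e, 'k) ecat =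
  Obj   :: "'o set"
  Hom   :: "'o \<Rightarrow> 'o \<Rightarrow> 'm set"
  cmp   :: "'m \<Rightarrow> 'm \<Rightarrow> 'm"
  idm   :: "'o \<Rightarrow> 'm"
  madd  :: "'m \<Rightarrow> 'm \<Rightarrow> 'm"
  mzero :: "'o \<Rightarrow> 'o \<Rightarrow> 'm"
  smult :: "'k \<Rightarrow> 'm \<Rightarrow> 'm"
  Ex    :: "'o \<Rightarrow> 'o \<Rightarrow> 'e set"
  eadd  :: "'o \<Rightarrow> 'o \<Rightarrow> 'e \<Rightarrow> 'e \<Rightarrow> 'e"
  ezero :: "'o \<Rightarrow> 'o \<Rightarrow> 'e"
  epush :: "'o \<Rightarrow> 'm \<Rightarrow> 'e \<Rightarrow> 'e"
  epull :: "'o \<Rightarrow> 'm \<Rightarrow> 'e \<Rightarrow> 'e"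
  rlz   :: "'o \<Rightarrow> 'o \<Rightarrow> 'e \<Rightarrow> 'o \<Rightarrow> 'm \<Rightarrow> 'm \<Rightarrow> bool"

definition is_iso :: "('o,'m,'e,'k) ecat \<Rightarrow> 'o \<Rightarrow> 'o \<Rightarrow> 'm \<Rightarrow> bool" where
  "is_iso X A B f \<longleftrightarrow> f \<in> Hom X A B \<and>
     (\<exists>g \<in> Hom X B A. cmp X g f = idm X A \<and> cmp X f g = idm X B)"

definition isomorphic :: "('o,'m,'e,'k) ecat \<Rightarrow> 'o \<Rightarrow> 'o \<Rightarrow> bool" where
  "isomorphic X A B \<longleftrightarrow> A \<in> Obj X \<and> B \<in> Obj X \<and> (\<exists>f. is_iso X A B f)"

definition is_zero_obj :: "('o,'m,'e,'k) ecat \<Rightarrow> 'o \<Rightarrow> bool" where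
  "is_zero_obj X Z \<longleftrightarrow> Z \<in> Obj X \<and> idm X Z = mzero X Z Z"

definition is_biprod ::
  "('o,'m,'e,'k) ecat \<Rightarrow> 'o \<Rightarrow> 'o \<Rightarrow> 'o \<Rightarrow> 'm \<Rightarrow> 'm \<Rightarrow> 'm \<Rightarrow> 'm \<Rightarrow> bool" where
  "is_biprod X A B P i1 i2 p1 p2 \<longleftrightarrow>
     A \<in> Obj X \<and> B \<in> Obj X \<and> P \<in> Obj X \<and>
     i1 \<in> Hom X A P \<and> i2 \<in> Hom X B P \<and> p1 \<in> Hom X P A \<and> p2 \<in> Hom X P B \<and>
     cmp X p1 i1 = idm X A \<and> cmp X p2 i2 = idm X B \<and>
     cmp X p1 i2 = mzero X B A \<and> cmp X p2 i1 = mzero X A B \<and>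
     madd X (cmp X i1 p1) (cmp X i2 p2) = idm X P"

fun lincomb :: "('o,'m,'e,'k) ecat \<Rightarrow> 'o \<Rightarrow> 'o \<Rightarrow> ('k \<times> 'm) list \<Rightarrow> 'm" where
  "lincomb X A B [] = mzero X A B"
| "lincomb X A B ((c, f) # r) = madd X (smult X c f) (lincomb X A B r)"

text \<open>A k-linear (hence additive) category, with each morphism having a unique
  domain and codomain (Hom-sets pairwise disjoint).\<close>

definition klinear_additive_cat :: "('o,'m,'e,'k::field) ecat \<Rightarrow> bool" where
  "klinear_additive_cat X \<longleftrightarrow>
    (\<forall>A B A' B' f. f \<in> Hom X A B \<and> f \<in> Hom X A' B' \<longrightarrow> A = A' \<and> B = B') \<and>
    (\<forall>A B. Hom X A B \<noteq> {} \<longrightarrow> A \<in> Obj X \<and> B \<in> Obj X) \<and>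
    (\<forall>A \<in> Obj X. idm X A \<in> Hom X A A) \<and>
    (\<forall>A B C f g. f \<in> Hom X A B \<and> g \<in> Hom X B C \<longrightarrow> cmp X g f \<in> Hom X A C) \<and>
    (\<forall>A B C D f g h. f \<in> Hom X A B \<and> g \<in> Hom X B C \<and> h \<in> Hom X C D \<longrightarrow>
        cmp X h (cmp X g f) = cmp X (cmp X h g) f) \<and>
    (\<forall>A B f. f \<in> Hom X A B \<longrightarrow> cmp X f (idm X A) = f \<and> cmp X (idm X B) f = f) \<and>
    (\<forall>A \<in> Obj X. \<forall>B \<in> Obj X.
        mzero X A B \<in> Hom X A B \<and>
        (\<forall>f \<in> Hom X A B. \<forall>g \<in> Hom X A B. madd X f g \<in> Hom X A B \<and> madd X f g = madd X g f) \<and>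
        (\<forall>f \<in> Hom X A B. \<forall>g \<in> Hom X A B. \<forall>h \<in> Hom X A B.
            madd X (madd X f g) h = madd X f (madd X g h)) \<and>
        (\<forall>f \<in> Hom X A B. madd X f (mzero X A B) = f) \<and>
        (\<forall>f \<in> Hom X A B. \<forall>c. smult X c f \<in> Hom X A B) \<and>
        (\<forall>f \<in> Hom X A B. smult X 1 f = f \<and> smult X 0 f = mzero X A B) \<and>
        (\<forall>f \<in> Hom X A B. \<forall>a b. smult X a (smult X b f) = smult X (a * b) f) \<and>
        (\<forall>f \<in> Hom X A B. \<forall>a b. smult X (a + b) f = madd X (smult X a f) (smult X b f)) \<and>
        (\<forall>f \<in> Hom X A B. \<forall>g \<in> Hom X A B. \<forall>a.
            smult X a (madd X f g) = madd X (smult X a f) (smult X a g))) \<and>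
    (\<forall>A B C f f' g g'. f \<in> Hom X A B \<and> f' \<in> Hom X A B \<and> g \<in> Hom X B C \<and> g' \<in> Hom X B C \<longrightarrow>
        cmp X (madd X g g') f = madd X (cmp X g f) (cmp X g' f) \<and>
        cmp X g (madd X f f') = madd X (cmp X g f) (cmp X g f') \<and>
        (\<forall>a. cmp X (smult X a g) f = smult X a (cmp X g f) \<and>
             cmp X g (smult X a f) = smult X a (cmp X g f))) \<and>
    (\<exists>Z. is_zero_obj X Z) \<and>
    (\<forall>A \<in> Obj X. \<forall>B \<in> Obj X. \<exists>P i1 i2 p1 p2. is_biprod X A B P i1 i2 p1 p2)"

definition biadditive_E :: "('o,'m,'e,'k::field) ecat \<Rightarrow> bool" where
  "biadditive_E X \<longleftrightarrow>
    (\<forall>C \<in> Obj X. \<forall>A \<in> Obj X.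
       ezero X C A \<in> Ex X C A \<and>
       (\<forall>d \<in> Ex X C A. \<forall>d' \<in> Ex X C A. eadd X C A d d' \<in> Ex X C A \<and> eadd X C A d d' = eadd X C A d' d) \<and>
       (\<forall>d \<in> Ex X C A. \<forall>d' \<in> Ex X C A. \<forall>d'' \<in> Ex X C A.
          eadd X C A (eadd X C A d d') d'' = eadd X C A d (eadd X C A d' d'')) \<and>
       (\<forall>d \<in> Ex X C A. eadd X C A d (ezero X C A) = d) \<and>
       (\<forall>d \<in> Ex X C A. \<exists>d' \<in> Ex X C A. eadd X C A d d' = ezero X C A) \<and>
       (\<forall>d \<in> Ex X C A. epush X C (idm X A) d = d \<and> epull X A (idm X C) d = d)) \<and>
    (\<forall>C A A' a. C \<in> Obj X \<and> a \<in> Hom X A A' \<longrightarrow>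
       (\<forall>d \<in> Ex X C A. epush X C a d \<in> Ex X C A') \<and>
       (\<forall>d \<in> Ex X C A. \<forall>d' \<in> Ex X C A.
          epush X C a (eadd X C A d d') = eadd X C A' (epush X C a d) (epush X C a d')) \<and>
       (\<forall>a' \<in> Hom X A A'. \<forall>d \<in> Ex X C A.
          epush X C (madd X a a') d = eadd X C A' (epush X C a d) (epush X C a' d))) \<and>
    (\<forall>A C C' c. A \<in> Obj X \<and> c \<in> Hom X C' C \<longrightarrow>
       (\<forall>d \<in> Ex X C A. epull X A c d \<in> Ex X C' A) \<and>
       (\<forall>d \<in> Ex X C A. \<forall>d' \<in> Ex X C A.
          epull X A c (eadd X C A d d') = eadd X C' A (epull X A c d) (epull X A c d')) \<and>
       (\<forall>c' \<in> Hom X C' C. \<forall>d \<in> Ex X C A.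
          epull X A (madd X c c') d = eadd X C' A (epull X A c d) (epull X A c' d))) \<and>
    (\<forall>C A A' A'' a b. C \<in> Obj X \<and> a \<in> Hom X A A' \<and> b \<in> Hom X A' A'' \<longrightarrow>
       (\<forall>d \<in> Ex X C A. epush X C (cmp X b a) d = epush X C b (epush X C a d))) \<and>
    (\<forall>A C C' C'' c e. A \<in> Obj X \<and> c \<in> Hom X C' C \<and> e \<in> Hom X C'' C' \<longrightarrow>
       (\<forall>d \<in> Ex X C A. epull X A (cmp X c e) d = epull X A e (epull X A c d))) \<and>
    (\<forall>A A' C C' a c. a \<in> Hom X A A' \<and> c \<in> Hom X C' C \<longrightarrow>
       (\<forall>d \<in> Ex X C A. epush X C' a (epull X A c d) = epull X A' c (epush X C a d)))"

definition seq_equiv :: "('o,'m,'e,'k) ecat \<Rightarrow> 'o \<Rightarrow> 'm \<Rightarrow> 'm \<Rightarrow> 'o \<Rightarrow> 'm \<Rightarrow> 'm \<Rightarrow> bool" where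
  "seq_equiv X B x y B' x' y' \<longleftrightarrow>
     (\<exists>b. is_iso X B B' b \<and> cmp X b x = x' \<and> cmp X y' b = y)"

definition etri :: "('o,'m,'e,'k) ecat \<Rightarrow> 'o \<Rightarrow> 'm \<Rightarrow> 'o \<Rightarrow> 'm \<Rightarrow> 'o \<Rightarrow> 'e \<Rightarrow> bool" where
  "etri X A x B y C d \<longleftrightarrow> A \<in> Obj X \<and> B \<in> Obj X \<and> C \<in> Obj X \<and>
     x \<in> Hom X A B \<and> y \<in> Hom X B C \<and> d \<in> Ex X C A \<and> rlz X C A d B x y"

definition esum :: "('o,'m,'e,'k) ecat \<Rightarrow> 'o \<Rightarrow> 'o \<Rightarrow> 'o \<Rightarrow> 'o \<Rightarrow> 'o \<Rightarrow> 'o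
     \<Rightarrow> 'm \<Rightarrow> 'm \<Rightarrow> 'm \<Rightarrow> 'm \<Rightarrow> 'e \<Rightarrow> 'e \<Rightarrow> 'e" where
  "esum X C C' PC A A' PA iA1 iA2 pC1 pC2 d d' =
     eadd X PC PA (epush X PC iA1 (epull X A pC1 d)) (epush X PC iA2 (epull X A' pC2 d'))"

definition realization_axioms :: "('o,'m,'e,'k::field) ecat \<Rightarrow> bool" where
  "realization_axioms X \<longleftrightarrow>
    \<comment> \<open>domain of rlz\<close>
    (\<forall>C A d B x y. rlz X C A d B x y \<longrightarrow> etri X A x B y C d) \<and>
    \<comment> \<open>s(d) is an equivalence class of sequences\<close>
    (\<forall>C \<in> Obj X. \<forall>A \<in> Obj X. \<forall>d \<in> Ex X C A. \<exists>B x y. rlz X C A d B x y) \<and>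
    (\<forall>C A d B x y B' x' y'. rlz X C A d B x y \<and> x' \<in> Hom X A B' \<and> y' \<in> Hom X B' C \<longrightarrow>
        (rlz X C A d B' x' y' \<longleftrightarrow> seq_equiv X B x y B' x' y')) \<and>
    \<comment> \<open>realization condition (morphisms of extensions lift)\<close>
    (\<forall>A B C x y d A' B' C' x' y' d' a c.
        etri X A x B y C d \<and> etri X A' x' B' y' C' d' \<and> a \<in> Hom X A A' \<and> c \<in> Hom X C C' \<and>
        epush X C a d = epull X A' c d' \<longrightarrow>
        (\<exists>b \<in> Hom X B B'. cmp X b x = cmp X x' a \<and> cmp X y' b = cmp X c y)) \<and>
    \<comment> \<open>additivity: s(0) is the split sequence\<close>
    (\<forall>A C P i1 i2 p1 p2. is_biprod X A C P i1 i2 p1 p2 \<longrightarrow> rlz X C A (ezero X C A) P i1 p2) \<and>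
    \<comment> \<open>additivity: s(d + d') = s(d) + s(d')\<close>
    (\<forall>A x B y C d A' x' B' y' C' d' PA iA1 iA2 pA1 pA2 PB iB1 iB2 pB1 pB2 PC iC1 iC2 pC1 pC2.
        etri X A x B y C d \<and> etri X A' x' B' y' C' d' \<and>
        is_biprod X A A' PA iA1 iA2 pA1 pA2 \<and> is_biprod X B B' PB iB1 iB2 pB1 pB2 \<and>
        is_biprod X C C' PC iC1 iC2 pC1 pC2 \<longrightarrow>
        rlz X PC PA (esum X C C' PC A A' PA iA1 iA2 pC1 pC2 d d') PB
          (madd X (cmp X iB1 (cmp X x pA1)) (cmp X iB2 (cmp X x' pA2)))
          (madd X (cmp X iC1 (cmp X y pB1)) (cmp X iC2 (cmp X y' pB2))))"

definition ET3_axioms :: "('o,'m,'e,'k) ecat \<Rightarrow> bool" where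
  "ET3_axioms X \<longleftrightarrow>
    (\<forall>A x B y C d A' x' B' y' C' d' a b.
        etri X A x B y C d \<and> etri X A' x' B' y' C' d' \<and> a \<in> Hom X A A' \<and> b \<in> Hom X B B' \<and>
        cmp X x' a = cmp X b x \<longrightarrow>
        (\<exists>c \<in> Hom X C C'. cmp X c y = cmp X y' b \<and> epush X C a d = epull X A' c d')) \<and>
    (\<forall>A x B y C d A' x' B' y' C' d' b c.
        etri X A x B y C d \<and> etri X A' x' B' y' C' d' \<and> b \<in> Hom X B B' \<and> c \<in> Hom X C C' \<and>
        cmp X c y = cmp X y' b \<longrightarrow>
        (\<exists>a \<in> Hom X A A'. cmp X x' a = cmp X b x \<and> epush X C a d = epull X A' c d'))"

definition ET4_axioms :: "('o,'m,'e,'k) ecat \<Rightarrow> bool" where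
  "ET4_axioms X \<longleftrightarrow>
    (\<forall>A f B f' D d g C g' F d'.
        etri X A f B f' D d \<and> etri X B g C g' F d' \<longrightarrow>
        (\<exists>E h' dd e d''.
           etri X A (cmp X g f) C h' E d'' \<and>
           etri X D dd E e F (epush X F f' d') \<and>
           cmp X h' g = cmp X dd f' \<and> cmp X e h' = g' \<and>
           epull X A dd d'' = d \<and> epush X E f d'' = epull X B e d')) \<and>
    (\<forall>D f A f' B d F g g' C d'.
        etri X D f A f' B d \<and> etri X F g B g' C d' \<longrightarrow>
        (\<exists>E dd e h d''.
           etri X E h A (cmp X g' f') C d'' \<and>
           etri X D dd E e F (epull X D g d) \<and>
           cmp X h dd = f \<and> cmp X f' h = cmp X g e \<and>
           epush X C e d'' = d' \<and> epush X B dd d = epull X E g' d''))"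

definition inflation :: "('o,'m,'e,'k) ecat \<Rightarrow> 'm \<Rightarrow> bool" where
  "inflation X f \<longleftrightarrow> (\<exists>A B y C d. etri X A f B y C d)"

definition deflation :: "('o,'m,'e,'k) ecat \<Rightarrow> 'm \<Rightarrow> bool" where
  "deflation X f \<longleftrightarrow> (\<exists>A x B C d. etri X A x B f C d)"

definition WIC :: "('o,'m,'e,'k) ecat \<Rightarrow> bool" where
  "WIC X \<longleftrightarrow> (\<forall>A B C f g. f \<in> Hom X A B \<and> g \<in> Hom X B C \<longrightarrow>
     (inflation X (cmp X g f) \<longrightarrow> inflation X f) \<and> (deflation X (cmp X g f) \<longrightarrow> deflation X g))"

inductive_set fsums :: "('o,'m,'e,'k) ecat \<Rightarrow> 'o set \<Rightarrow> 'o set" for X S where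
  zero: "is_zero_obj X Z \<Longrightarrow> Z \<in> fsums X S"
| step: "Z \<in> fsums X S \<Longrightarrow> U \<in> S \<Longrightarrow> is_biprod X Z U P i1 i2 p1 p2 \<Longrightarrow> P \<in> fsums X S"

definition local_obj :: "('o,'m,'e,'k::field) ecat \<Rightarrow> 'o \<Rightarrow> bool" where
  "local_obj X U \<longleftrightarrow> U \<in> Obj X \<and> \<not> is_zero_obj X U \<and>
     (\<forall>f \<in> Hom X U U. is_iso X U U f \<or> is_iso X U U (madd X (idm X U) (smult X (-1) f)))"

definition krull_schmidt :: "('o,'m,'e,'k::field) ecat \<Rightarrow> bool" where
  "krull_schmidt X \<longleftrightarrow> (\<forall>A \<in> Obj X. A \<in> fsums X {U. local_obj X U})"

definition hom_finite :: "('o,'m,'e,'k::field) ecat \<Rightarrow> bool" where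
  "hom_finite X \<longleftrightarrow> (\<forall>A \<in> Obj X. \<forall>B \<in> Obj X. \<exists>fs. set fs \<subseteq> Hom X A B \<and>
     (\<forall>f \<in> Hom X A B. \<exists>cs. length cs = length fs \<and> f = lincomb X A B (zip cs fs)))"

definition projective_obj :: "('o,'m,'e,'k) ecat \<Rightarrow> 'o \<Rightarrow> bool" where
  "projective_obj X P \<longleftrightarrow> P \<in> Obj X \<and> (\<forall>A \<in> Obj X. Ex X P A = {ezero X P A})"

definition injective_obj :: "('o,'m,'e,'k) ecat \<Rightarrow> 'o \<Rightarrow> bool" where
  "injective_obj X I \<longleftrightarrow> I \<in> Obj X \<and> (\<forall>C \<in> Obj X. Ex X C I = {ezero X C I})"

definition enough_proj_inj :: "('o,'m,'e,'k) ecat \<Rightarrow> bool" where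
  "enough_proj_inj X \<longleftrightarrow>
     (\<forall>C \<in> Obj X. \<exists>A x P y d. etri X A x P y C d \<and> projective_obj X P) \<and>
     (\<forall>A \<in> Obj X. \<exists>x I y C d. etri X A x I y C d \<and> injective_obj X I)"

definition extri_cat :: "('o,'m,'e,'k::field) ecat \<Rightarrow> bool" where
  "extri_cat X \<longleftrightarrow> klinear_additive_cat X \<and> biadditive_E X \<and> realization_axioms X \<and>
     ET3_axioms X \<and> ET4_axioms X \<and> krull_schmidt X \<and> hom_finite X \<and>
     enough_proj_inj X \<and> WIC X"

definition compatible :: "('o,'m,'e,'k) ecat \<Rightarrow> 'o \<Rightarrow> 'o \<Rightarrow> 'm \<Rightarrow> bool" where
  "compatible X A B f \<longleftrightarrow> f \<in> Hom X A B \<and>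
     (inflation X f \<and> deflation X f \<longrightarrow> is_iso X A B f)"

definition right_exact_seq :: "('o,'m,'e,'k) ecat \<Rightarrow> 'o \<Rightarrow> 'm \<Rightarrow> 'o \<Rightarrow> 'm \<Rightarrow> 'o \<Rightarrow> bool" where
  "right_exact_seq X A f B g C \<longleftrightarrow> f \<in> Hom X A B \<and> g \<in> Hom X B C \<and>
     (\<exists>K h2 d h1. etri X K h2 B g C d \<and> compatible X A K h1 \<and> deflation X h1 \<and> f = cmp X h2 h1)"

definition left_exact_seq :: "('o,'m,'e,'k) ecat \<Rightarrow> 'o \<Rightarrow> 'm \<Rightarrow> 'o \<Rightarrow> 'm \<Rightarrow> 'o \<Rightarrow> bool" where
  "left_exact_seq X A f B g C \<longleftrightarrow> f \<in> Hom X A B \<and> g \<in> Hom X B C \<and>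
     (\<exists>K h1 d h2. etri X A f B h1 K d \<and> compatible X K C h2 \<and> inflation X h2 \<and> g = cmp X h2 h1)"

definition right_exact_4seq ::
  "('o,'m,'e,'k) ecat \<Rightarrow> 'o \<Rightarrow> 'm \<Rightarrow> 'o \<Rightarrow> 'm \<Rightarrow> 'o \<Rightarrow> 'm \<Rightarrow> 'o \<Rightarrow> bool" where
  "right_exact_4seq X A f B g C h D \<longleftrightarrow>
     (\<exists>K g1 g2 d1 d2. etri X A f B g1 K d1 \<and> etri X K g2 C h D d2 \<and>
        g = cmp X g2 g1 \<and> compatible X B K g1)"

definition left_exact_4seq ::
  "('o,'m,'e,'k) ecat \<Rightarrow> 'o \<Rightarrow> 'm \<Rightarrow> 'o \<Rightarrow> 'm \<Rightarrow> 'o \<Rightarrow> 'm \<Rightarrow> 'o \<Rightarrow> bool" where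
  "left_exact_4seq X A f B g C h D \<longleftrightarrow>
     (\<exists>K g1 g2 d1 d2. etri X A f B g1 K d1 \<and> etri X K g2 C h D d2 \<and>
        g = cmp X g2 g1 \<and> compatible X K C g2)"

definition additive_functor ::
  "('o1,'m1,'e1,'k) ecat \<Rightarrow> ('o2,'m2,'e2,'k) ecat \<Rightarrow> ('o1 \<Rightarrow> 'o2) \<Rightarrow> ('m1 \<Rightarrow> 'm2) \<Rightarrow> bool" where
  "additive_functor X Y Fo Fm \<longleftrightarrow>
     (\<forall>A \<in> Obj X. Fo A \<in> Obj Y \<and> Fm (idm X A) = idm Y (Fo A)) \<and>
     (\<forall>A B f. f \<in> Hom X A B \<longrightarrow> Fm f \<in> Hom Y (Fo A) (Fo B)) \<and>
     (\<forall>A B C f g. f \<in> Hom X A B \<and> g \<in> Hom X B C \<longrightarrow> Fm (cmp X g f) = cmp Y (Fm g) (Fm f)) \<and>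
     (\<forall>A B f g. f \<in> Hom X A B \<and> g \<in> Hom X A B \<longrightarrow> Fm (madd X f g) = madd Y (Fm f) (Fm g))"

definition preserves_compatible ::
  "('o1,'m1,'e1,'k) ecat \<Rightarrow> ('o2,'m2,'e2,'k) ecat \<Rightarrow> ('o1 \<Rightarrow> 'o2) \<Rightarrow> ('m1 \<Rightarrow> 'm2) \<Rightarrow> bool" where
  "preserves_compatible X Y Fo Fm \<longleftrightarrow>
     (\<forall>A B f. compatible X A B f \<longrightarrow> compatible Y (Fo A) (Fo B) (Fm f))"

definition exact_functor ::
  "('o1,'m1,'e1,'k) ecat \<Rightarrow> ('o2,'m2,'e2,'k) ecat \<Rightarrow> ('o1 \<Rightarrow> 'o2) \<Rightarrow> ('m1 \<Rightarrow> 'm2) \<Rightarrow> bool" where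
  "exact_functor X Y Fo Fm \<longleftrightarrow> additive_functor X Y Fo Fm \<and> preserves_compatible X Y Fo Fm \<and>
     (\<exists>\<eta> :: 'o1 \<Rightarrow> 'o1 \<Rightarrow> 'e1 \<Rightarrow> 'e2.
        (\<forall>C \<in> Obj X. \<forall>A \<in> Obj X. \<forall>d \<in> Ex X C A. \<eta> C A d \<in> Ex Y (Fo C) (Fo A)) \<and>
        (\<forall>C \<in> Obj X. \<forall>A \<in> Obj X. \<forall>d \<in> Ex X C A. \<forall>d' \<in> Ex X C A.
           \<eta> C A (eadd X C A d d') = eadd Y (Fo C) (Fo A) (\<eta> C A d) (\<eta> C A d')) \<and>
        (\<forall>C A A' a d. C \<in> Obj X \<and> a \<in> Hom X A A' \<and> d \<in> Ex X C A \<longrightarrow>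
           \<eta> C A' (epush X C a d) = epush Y (Fo C) (Fm a) (\<eta> C A d)) \<and>
        (\<forall>A C C' c d. A \<in> Obj X \<and> c \<in> Hom X C' C \<and> d \<in> Ex X C A \<longrightarrow>
           \<eta> C' A (epull X A c d) = epull Y (Fo A) (Fm c) (\<eta> C A d)) \<and>
        (\<forall>A x B y C d. etri X A x B y C d \<longrightarrow>
           rlz Y (Fo C) (Fo A) (\<eta> C A d) (Fo B) (Fm x) (Fm y)))"

definition right_exact_functor ::
  "('o1,'m1,'e1,'k) ecat \<Rightarrow> ('o2,'m2,'e2,'k) ecat \<Rightarrow> ('o1 \<Rightarrow> 'o2) \<Rightarrow> ('m1 \<Rightarrow> 'm2) \<Rightarrow> bool" where
  "right_exact_functor X Y Fo Fm \<longleftrightarrow> additive_functor X Y Fo Fm \<and> preserves_compatible X Y Fo Fm \<and>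
     (\<forall>A f B g C. right_exact_seq X A f B g C \<longrightarrow>
        right_exact_seq Y (Fo A) (Fm f) (Fo B) (Fm g) (Fo C)) \<and>
     (\<exists>\<eta> :: 'o1 \<Rightarrow> 'o1 \<Rightarrow> 'e1 \<Rightarrow> 'e2.
        \<forall>A f B g C d. etri X A f B g C d \<longrightarrow>
          (\<exists>A' x y. x \<in> Hom Y A' (Fo B) \<and> compatible Y (Fo A) A' y \<and> deflation Y y \<and>
             Fm f = cmp Y x y \<and> \<eta> C A d \<in> Ex Y (Fo C) A' \<and>
             etri Y A' x (Fo B) (Fm g) (Fo C) (\<eta> C A d)))"

definition left_exact_functor ::
  "('o1,'m1,'e1,'k) ecat \<Rightarrow> ('o2,'m2,'e2,'k) ecat \<Rightarrow> ('o1 \<Rightarrow> 'o2) \<Rightarrow> ('m1 \<Rightarrow> 'm2) \<Rightarrow> bool" where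
  "left_exact_functor X Y Fo Fm \<longleftrightarrow> additive_functor X Y Fo Fm \<and> preserves_compatible X Y Fo Fm \<and>
     (\<forall>A f B g C. left_exact_seq X A f B g C \<longrightarrow>
        left_exact_seq Y (Fo A) (Fm f) (Fo B) (Fm g) (Fo C)) \<and>
     (\<exists>\<eta> :: 'o1 \<Rightarrow> 'o1 \<Rightarrow> 'e1 \<Rightarrow> 'e2.
        \<forall>A f B g C d. etri X A f B g C d \<longrightarrow>
          (\<exists>C' x y. x \<in> Hom Y (Fo B) C' \<and> compatible Y C' (Fo C) y \<and> inflation Y y \<and>
             Fm g = cmp Y y x \<and> \<eta> C A d \<in> Ex Y C' (Fo A) \<and>
             etri Y (Fo A) (Fm f) (Fo B) x C' (\<eta> C A d)))"

definition fully_faithful ::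
  "('o1,'m1,'e1,'k) ecat \<Rightarrow> ('o2,'m2,'e2,'k) ecat \<Rightarrow> ('o1 \<Rightarrow> 'o2) \<Rightarrow> ('m1 \<Rightarrow> 'm2) \<Rightarrow> bool" where
  "fully_faithful X Y Fo Fm \<longleftrightarrow>
     (\<forall>A \<in> Obj X. \<forall>B \<in> Obj X. bij_betw Fm (Hom X A B) (Hom Y (Fo A) (Fo B)))"

definition adjunction ::
  "('o1,'m1,'e1,'k) ecat \<Rightarrow> ('o2,'m2,'e2,'k) ecat \<Rightarrow> ('o1 \<Rightarrow> 'o2) \<Rightarrow> ('m1 \<Rightarrow> 'm2)
     \<Rightarrow> ('o2 \<Rightarrow> 'o1) \<Rightarrow> ('m2 \<Rightarrow> 'm1) \<Rightarrow> ('o1 \<Rightarrow> 'm1) \<Rightarrow> ('o2 \<Rightarrow> 'm2) \<Rightarrow> bool" where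
  "adjunction X Y Fo Fm Go Gm unit counit \<longleftrightarrow>
     (\<forall>A \<in> Obj X. unit A \<in> Hom X A (Go (Fo A))) \<and>
     (\<forall>B \<in> Obj Y. counit B \<in> Hom Y (Fo (Go B)) B) \<and>
     (\<forall>A A' f. f \<in> Hom X A A' \<longrightarrow> cmp X (unit A') f = cmp X (Gm (Fm f)) (unit A)) \<and>
     (\<forall>B B' g. g \<in> Hom Y B B' \<longrightarrow> cmp Y g (counit B) = cmp Y (counit B') (Fm (Gm g))) \<and>
     (\<forall>A \<in> Obj X. cmp Y (counit (Fo A)) (Fm (unit A)) = idm Y (Fo A)) \<and>
     (\<forall>B \<in> Obj Y. cmp X (Gm (counit B)) (unit (Go B)) = idm X (Go B))"

definition recollement ::
  "('a,'am,'ae,'k) ecat \<Rightarrow> ('b,'bm,'be,'k) ecat \<Rightarrow> ('c,'cm,'ce,'k) ecat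
   \<Rightarrow> ('b \<Rightarrow> 'a) \<Rightarrow> ('bm \<Rightarrow> 'am) \<Rightarrow> ('a \<Rightarrow> 'b) \<Rightarrow> ('am \<Rightarrow> 'bm) \<Rightarrow> ('b \<Rightarrow> 'a) \<Rightarrow> ('bm \<Rightarrow> 'am)
   \<Rightarrow> ('c \<Rightarrow> 'b) \<Rightarrow> ('cm \<Rightarrow> 'bm) \<Rightarrow> ('b \<Rightarrow> 'c) \<Rightarrow> ('bm \<Rightarrow> 'cm) \<Rightarrow> ('c \<Rightarrow> 'b) \<Rightarrow> ('cm \<Rightarrow> 'bm)
   \<Rightarrow> bool" where
  "recollement A B C iUo iUm iLo iLm iSo iSm jUo jUm jLo jLm jSo jSm \<longleftrightarrow>
     \<comment> \<open>iUo,iUm = i^*; iLo,iLm = i_*; iSo,iSm = i^!; jUo,jUm = j_!; jLo,jLm = j^*; jSo,jSm = j_* (object part, morphism part)\<close>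
     exact_functor A B iLo iLm \<and> exact_functor B C jLo jLm \<and>
     right_exact_functor B A iUo iUm \<and> right_exact_functor C B jUo jUm \<and>
     left_exact_functor B A iSo iSm \<and> left_exact_functor C B jSo jSm \<and>
     (\<exists>u1 c1 u2 c2 u3 c3 u4 c4.
        \<comment> \<open>(R1) adjoint triples i^* -| i_* -| i^! and j_! -| j^* -| j_*\<close>
        adjunction B A iUo iUm iLo iLm u1 c1 \<and> adjunction A B iLo iLm iSo iSm u2 c2 \<and>
        adjunction C B jUo jUm jLo jLm u3 c3 \<and> adjunction B C jLo jLm jSo jSm u4 c4 \<and>
        \<comment> \<open>(R4)\<close>
        (\<forall>X \<in> Obj B. \<exists>Y \<in> Obj A. \<exists>h.
            left_exact_4seq B (iLo (iSo X)) (c2 X) X (u4 X) (jSo (jLo X)) h (iLo Y)) \<and>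
        \<comment> \<open>(R5)\<close>
        (\<forall>X \<in> Obj B. \<exists>Y \<in> Obj A. \<exists>h.
            right_exact_4seq B (iLo Y) h (jUo (jLo X)) (c3 X) X (u1 X) (iLo (iUo X)))) \<and>
     \<comment> \<open>(R2) essential image of i_* = kernel of j^*\<close>
     {X \<in> Obj B. \<exists>Y \<in> Obj A. isomorphic B (iLo Y) X} = {X \<in> Obj B. is_zero_obj C (jLo X)} \<and>
     \<comment> \<open>(R3)\<close>
     fully_faithful A B iLo iLm \<and> fully_faithful C B jUo jUm \<and> fully_faithful C B jSo jSm"

definition addc :: "('o,'m,'e,'k) ecat \<Rightarrow> 'o set \<Rightarrow> 'o set" where
  "addc X S = {A \<in> Obj X. \<exists>Z \<in> fsums X (S \<inter> Obj X). \<exists>s r.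
      s \<in> Hom X A Z \<and> r \<in> Hom X Z A \<and> cmp X r s = idm X A}"

definition diamond :: "('o,'m,'e,'k) ecat \<Rightarrow> 'o set \<Rightarrow> 'o set \<Rightarrow> 'o set" where
  "diamond X U1 U2 = addc X {A \<in> Obj X. \<exists>V1 \<in> U1. \<exists>V2 \<in> U2. \<exists>x y d. etri X V1 x A y V2 d}"

fun gen :: "('o,'m,'e,'k) ecat \<Rightarrow> 'o \<Rightarrow> nat \<Rightarrow> 'o set" where
  "gen X T 0 = {}"
| "gen X T (Suc n) = (if n = 0 then addc X {T} else diamond X (addc X {T}) (gen X T n))"

definition ext_dim :: "('o,'m,'e,'k) ecat \<Rightarrow> enat" where
  "ext_dim X = Inf {enat n | n. \<exists>T \<in> Obj X. gen X T (n + 1) = Obj X}"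

end

theory Submission
  imports Defs
begin

(* A functor F that sends E-triangles to E-triangles, up to isomorphism of the outer terms,
   maps the level gen T n into gen (F T) n.  If moreover every object of the target is
   isomorphic to some F B, then ext.dim of the target is at most ext.dim of the source.
   Applied to j^* (as j^* j_! ~= id) and to whichever of i^!, i^* is exact (as i^! i_* ~= id
   and i^* i_* ~= id), this gives the lower bound.

   For the upper bound assume i^! exact (the case of i^* is dual).  Applying i^! to the
   four-term sequence (R4) of X kills its cone term, so every X sits in an E-triangle
   i_* i^! X --> X --> j_* j^* X; the same argument shows that j_* sends E-triangles to
   E-triangles up to isomorphism.  Hence with T = i_* T_A (+) j_* T_C every object of B lies
   in gen T (m+1) diamond gen T (n+1), which is contained in gen T (m+n+2) by (ET4). *)

section \<open>Additive $k$-linear categories\<close>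

locale additive_kcat =
  fixes X :: "('o,'m,'e,'k::field) ecat"
  assumes kl: "klinear_additive_cat X"
begin

lemmas klinear = kl[unfolded klinear_additive_cat_def]

lemma hom_uniq: "f \<in> Hom X A B \<Longrightarrow> f \<in> Hom X A' B' \<Longrightarrow> A = A' \<and> B = B'"
  using klinear[THEN conjunct1] by blast
lemma hom_obj: "f \<in> Hom X A B \<Longrightarrow> A \<in> Obj X \<and> B \<in> Obj X"
  using klinear[THEN conjunct2, THEN conjunct1] by blast
lemma id_hom[simp]: "A \<in> Obj X \<Longrightarrow> idm X A \<in> Hom X A A"
  using klinear[THEN conjunct2, THEN conjunct2, THEN conjunct1] by blast
lemma comp_hom: "f \<in> Hom X A B \<Longrightarrow> g \<in> Hom X B C \<Longrightarrow> cmp X g f \<in> Hom X A C"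
  using klinear[THEN conjunct2, THEN conjunct2, THEN conjunct2, THEN conjunct1] by blast
lemma cmp_assoc: "f \<in> Hom X A B \<Longrightarrow> g \<in> Hom X B C \<Longrightarrow> h \<in> Hom X C D \<Longrightarrow>
    cmp X h (cmp X g f) = cmp X (cmp X h g) f"
  using klinear[THEN conjunct2, THEN conjunct2, THEN conjunct2, THEN conjunct2, THEN conjunct1] by blast

lemmas klinear_rest = klinear[THEN conjunct2, THEN conjunct2, THEN conjunct2, THEN conjunct2, THEN conjunct2]

lemma id_r: "f \<in> Hom X A B \<Longrightarrow> cmp X f (idm X A) = f"
  using klinear_rest[THEN conjunct1] by blast
lemma id_l: "f \<in> Hom X A B \<Longrightarrow> cmp X (idm X B) f = f"
  using klinear_rest[THEN conjunct1] by blast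

lemma hom_kspace: "A \<in> Obj X \<Longrightarrow> B \<in> Obj X \<Longrightarrow> mzero X A B \<in> Hom X A B \<and>
    (\<forall>f \<in> Hom X A B. \<forall>g \<in> Hom X A B. madd X f g \<in> Hom X A B \<and> madd X f g = madd X g f) \<and>
    (\<forall>f \<in> Hom X A B. \<forall>g \<in> Hom X A B. \<forall>h \<in> Hom X A B.
        madd X (madd X f g) h = madd X f (madd X g h)) \<and>
    (\<forall>f \<in> Hom X A B. madd X f (mzero X A B) = f) \<and>
    (\<forall>f \<in> Hom X A B. \<forall>c. smult X c f \<in> Hom X A B) \<and>
    (\<forall>f \<in> Hom X A B. smult X 1 f = f \<and> smult X 0 f = mzero X A B) \<and>
    (\<forall>f \<in> Hom X A B. \<forall>a b. smult X a (smult X b f) = smult X (a * b) f) \<and>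
    (\<forall>f \<in> Hom X A B. \<forall>a b. smult X (a + b) f = madd X (smult X a f) (smult X b f)) \<and>
    (\<forall>f \<in> Hom X A B. \<forall>g \<in> Hom X A B. \<forall>a.
        smult X a (madd X f g) = madd X (smult X a f) (smult X a g))"
  using klinear_rest[THEN conjunct2, THEN conjunct1] by blast

lemma hom_kspace_of: "f \<in> Hom X A B \<Longrightarrow> mzero X A B \<in> Hom X A B \<and>
    (\<forall>f \<in> Hom X A B. \<forall>g \<in> Hom X A B. madd X f g \<in> Hom X A B \<and> madd X f g = madd X g f) \<and>
    (\<forall>f \<in> Hom X A B. \<forall>g \<in> Hom X A B. \<forall>h \<in> Hom X A B.
        madd X (madd X f g) h = madd X f (madd X g h)) \<and>
    (\<forall>f \<in> Hom X A B. madd X f (mzero X A B) = f) \<and>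
    (\<forall>f \<in> Hom X A B. \<forall>c. smult X c f \<in> Hom X A B) \<and>
    (\<forall>f \<in> Hom X A B. smult X 1 f = f \<and> smult X 0 f = mzero X A B) \<and>
    (\<forall>f \<in> Hom X A B. \<forall>a b. smult X a (smult X b f) = smult X (a * b) f) \<and>
    (\<forall>f \<in> Hom X A B. \<forall>a b. smult X (a + b) f = madd X (smult X a f) (smult X b f)) \<and>
    (\<forall>f \<in> Hom X A B. \<forall>g \<in> Hom X A B. \<forall>a.
        smult X a (madd X f g) = madd X (smult X a f) (smult X a g))"
  by (rule hom_kspace[OF hom_obj[THEN conjunct1] hom_obj[THEN conjunct2]])

lemma zero_hom: "A \<in> Obj X \<Longrightarrow> B \<in> Obj X \<Longrightarrow> mzero X A B \<in> Hom X A B"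
  using hom_kspace by blast
lemma add_hom: "f \<in> Hom X A B \<Longrightarrow> g \<in> Hom X A B \<Longrightarrow> madd X f g \<in> Hom X A B"
  by (frule hom_kspace_of) blast
lemma add_comm: "f \<in> Hom X A B \<Longrightarrow> g \<in> Hom X A B \<Longrightarrow> madd X f g = madd X g f"
  by (frule hom_kspace_of) blast
lemma add_assoc: "f \<in> Hom X A B \<Longrightarrow> g \<in> Hom X A B \<Longrightarrow> h \<in> Hom X A B \<Longrightarrow>
    madd X (madd X f g) h = madd X f (madd X g h)"
  by (frule hom_kspace_of) blast
lemma add_zero: "f \<in> Hom X A B \<Longrightarrow> madd X f (mzero X A B) = f"
  by (frule hom_kspace_of) blast
lemma smult_hom: "f \<in> Hom X A B \<Longrightarrow> smult X c f \<in> Hom X A B"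
  by (frule hom_kspace_of) blast
lemma smult_one: "f \<in> Hom X A B \<Longrightarrow> smult X 1 f = f"
  by (frule hom_kspace_of) blast
lemma smult_zero: "f \<in> Hom X A B \<Longrightarrow> smult X 0 f = mzero X A B"
  by (frule hom_kspace_of) blast
lemma smult_smult: "f \<in> Hom X A B \<Longrightarrow> smult X a (smult X b f) = smult X (a * b) f"
  by (frule hom_kspace_of) blast
lemma smult_distr: "f \<in> Hom X A B \<Longrightarrow> smult X (a + b) f = madd X (smult X a f) (smult X b f)"
  by (frule hom_kspace_of) blast

lemma cmp_bilinear: "f \<in> Hom X A B \<Longrightarrow> f' \<in> Hom X A B \<Longrightarrow> g \<in> Hom X B C \<Longrightarrow> g' \<in> Hom X B C \<Longrightarrow>
    cmp X (madd X g g') f = madd X (cmp X g f) (cmp X g' f) \<and>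
    cmp X g (madd X f f') = madd X (cmp X g f) (cmp X g f') \<and>
    (\<forall>a. cmp X (smult X a g) f = smult X a (cmp X g f) \<and>
         cmp X g (smult X a f) = smult X a (cmp X g f))"
  using klinear_rest[THEN conjunct2, THEN conjunct2, THEN conjunct1] by blast

lemma distr_l: "f \<in> Hom X A B \<Longrightarrow> g \<in> Hom X B C \<Longrightarrow> g' \<in> Hom X B C \<Longrightarrow>
    cmp X (madd X g g') f = madd X (cmp X g f) (cmp X g' f)"
  using cmp_bilinear[of f A B f] by blast
lemma distr_r: "f \<in> Hom X A B \<Longrightarrow> f' \<in> Hom X A B \<Longrightarrow> g \<in> Hom X B C \<Longrightarrow>
    cmp X g (madd X f f') = madd X (cmp X g f) (cmp X g f')"
  using cmp_bilinear[of f A B f' g C g] by blast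
lemma smult_cmp_l: "f \<in> Hom X A B \<Longrightarrow> g \<in> Hom X B C \<Longrightarrow> cmp X (smult X a g) f = smult X a (cmp X g f)"
  using cmp_bilinear[of f A B f g C g] by blast
lemma smult_cmp_r: "f \<in> Hom X A B \<Longrightarrow> g \<in> Hom X B C \<Longrightarrow> cmp X g (smult X a f) = smult X a (cmp X g f)"
  using cmp_bilinear[of f A B f g C g] by blast

lemma has_zero: "\<exists>Z. is_zero_obj X Z"
  using klinear_rest[THEN conjunct2, THEN conjunct2, THEN conjunct2, THEN conjunct1] by blast
lemma has_biprod: "A \<in> Obj X \<Longrightarrow> B \<in> Obj X \<Longrightarrow> \<exists>P i1 i2 p1 p2. is_biprod X A B P i1 i2 p1 p2"
  using klinear_rest[THEN conjunct2, THEN conjunct2, THEN conjunct2, THEN conjunct2] by blast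

lemma zero_smult: "A \<in> Obj X \<Longrightarrow> B \<in> Obj X \<Longrightarrow> smult X 0 (mzero X A B) = mzero X A B"
  using smult_zero zero_hom by blast

lemma cmp_zero_r: "g \<in> Hom X B C \<Longrightarrow> A \<in> Obj X \<Longrightarrow> cmp X g (mzero X A B) = mzero X A C"
proof -
  assume g: "g \<in> Hom X B C" and A: "A \<in> Obj X"
  have B: "B \<in> Obj X" "C \<in> Obj X" using g hom_obj by auto
  have "cmp X g (mzero X A B) = cmp X g (smult X 0 (mzero X A B))" using zero_smult A B by simp
  also have "\<dots> = smult X 0 (cmp X g (mzero X A B))" using smult_cmp_r zero_hom A B g by blast
  also have "\<dots> = mzero X A C" using smult_zero comp_hom zero_hom A B g by blast
  finally show ?thesis .
qed

lemma cmp_zero_l: "f \<in> Hom X A B \<Longrightarrow> C \<in> Obj X \<Longrightarrow> cmp X (mzero X B C) f = mzero X A C"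
proof -
  assume f: "f \<in> Hom X A B" and C: "C \<in> Obj X"
  have B: "A \<in> Obj X" "B \<in> Obj X" using f hom_obj by auto
  have "cmp X (mzero X B C) f = cmp X (smult X 0 (mzero X B C)) f" using zero_smult C B by simp
  also have "\<dots> = smult X 0 (cmp X (mzero X B C) f)" using smult_cmp_l zero_hom C B f by blast
  also have "\<dots> = mzero X A C" using smult_zero comp_hom zero_hom C B f by blast
  finally show ?thesis .
qed

definition neg :: "'m \<Rightarrow> 'm" where "neg f = smult X (-1) f"

lemma neg_hom: "f \<in> Hom X A B \<Longrightarrow> neg f \<in> Hom X A B"
  unfolding neg_def by (rule smult_hom)

lemma add_neg: "f \<in> Hom X A B \<Longrightarrow> madd X f (neg f) = mzero X A B"
proof -
  assume f: "f \<in> Hom X A B"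
  have "smult X (1 + -1) f = madd X (smult X 1 f) (smult X (-1) f)" by (rule smult_distr[OF f])
  then have "mzero X A B = madd X f (neg f)" unfolding neg_def using smult_one[OF f] smult_zero[OF f] by simp
  then show ?thesis by simp
qed

lemma zero_add: "f \<in> Hom X A B \<Longrightarrow> madd X (mzero X A B) f = f"
proof -
  assume f: "f \<in> Hom X A B"
  have z: "mzero X A B \<in> Hom X A B" using zero_hom hom_obj[OF f] by blast
  show ?thesis using add_comm[OF z f] add_zero[OF f] by simp
qed

lemma add_cancel: "f \<in> Hom X A B \<Longrightarrow> g \<in> Hom X A B \<Longrightarrow> h \<in> Hom X A B \<Longrightarrow>
   madd X f h = madd X g h \<Longrightarrow> f = g"
proof -
  assume f: "f \<in> Hom X A B" and g: "g \<in> Hom X A B" and h: "h \<in> Hom X A B" and e: "madd X f h = madd X g h"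
  have nh: "neg h \<in> Hom X A B" using neg_hom[OF h] .
  have "f = madd X f (madd X h (neg h))" using add_neg[OF h] add_zero[OF f] by simp
  also have "\<dots> = madd X (madd X f h) (neg h)" using add_assoc[OF f h nh] by simp
  also have "\<dots> = madd X (madd X g h) (neg h)" using e by simp
  also have "\<dots> = madd X g (madd X h (neg h))" using add_assoc[OF g h nh] by simp
  also have "\<dots> = g" using add_neg[OF h] add_zero[OF g] by simp
  finally show ?thesis .
qed

lemma neg_cmp_l: "f \<in> Hom X A B \<Longrightarrow> g \<in> Hom X B C \<Longrightarrow> cmp X (neg g) f = neg (cmp X g f)"
  unfolding neg_def by (rule smult_cmp_l)
lemma neg_cmp_r: "f \<in> Hom X A B \<Longrightarrow> g \<in> Hom X B C \<Longrightarrow> cmp X g (neg f) = neg (cmp X g f)"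
  unfolding neg_def by (rule smult_cmp_r)
lemma neg_neg: "f \<in> Hom X A B \<Longrightarrow> neg (neg f) = f"
  unfolding neg_def using smult_smult[of f A B "-1" "-1"] smult_one[of f A B] by simp

lemma neg_zero: "A \<in> Obj X \<Longrightarrow> B \<in> Obj X \<Longrightarrow> neg (mzero X A B) = mzero X A B"
  unfolding neg_def using smult_smult[of "mzero X A B" A B "-1" 0] smult_zero[of "mzero X A B" A B] zero_hom
  by (metis mult_zero_right)

lemma zero_obj: "is_zero_obj X Z \<Longrightarrow> Z \<in> Obj X" unfolding is_zero_obj_def by simp

lemma zero_out: "is_zero_obj X Z \<Longrightarrow> f \<in> Hom X Z B \<Longrightarrow> f = mzero X Z B"
proof -
  assume z: "is_zero_obj X Z" and f: "f \<in> Hom X Z B"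
  have "f = cmp X f (idm X Z)" using id_r f by simp
  also have "\<dots> = cmp X f (mzero X Z Z)" using z unfolding is_zero_obj_def by simp
  also have "\<dots> = mzero X Z B" using cmp_zero_r f z zero_obj by blast
  finally show ?thesis .
qed

lemma zero_in: "is_zero_obj X Z \<Longrightarrow> f \<in> Hom X A Z \<Longrightarrow> f = mzero X A Z"
proof -
  assume z: "is_zero_obj X Z" and f: "f \<in> Hom X A Z"
  have "f = cmp X (idm X Z) f" using id_l f by simp
  also have "\<dots> = cmp X (mzero X Z Z) f" using z unfolding is_zero_obj_def by simp
  also have "\<dots> = mzero X A Z" using cmp_zero_l f z zero_obj by blast
  finally show ?thesis .
qed

lemma zero_by_id: "A \<in> Obj X \<Longrightarrow> idm X A = mzero X A A \<Longrightarrow> is_zero_obj X A"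
  unfolding is_zero_obj_def by simp

lemma iso_hom: "is_iso X A B f \<Longrightarrow> f \<in> Hom X A B" unfolding is_iso_def by simp

lemma id_iso: "A \<in> Obj X \<Longrightarrow> is_iso X A A (idm X A)"
  unfolding is_iso_def using id_hom id_l by metis

lemma iso_inv: "is_iso X A B f \<Longrightarrow> \<exists>g. is_iso X B A g \<and> cmp X g f = idm X A \<and> cmp X f g = idm X B"
  unfolding is_iso_def by blast

lemma iso_comp: "is_iso X A B f \<Longrightarrow> is_iso X B C g \<Longrightarrow> is_iso X A C (cmp X g f)"
proof -
  assume f: "is_iso X A B f" and g: "is_iso X B C g"
  obtain f' where f': "f' \<in> Hom X B A" "cmp X f' f = idm X A" "cmp X f f' = idm X B"
    using f unfolding is_iso_def by blast
  obtain g' where g': "g' \<in> Hom X C B" "cmp X g' g = idm X B" "cmp X g g' = idm X C"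
    using g unfolding is_iso_def by blast
  have fh: "f \<in> Hom X A B" and gh: "g \<in> Hom X B C" using f g iso_hom by auto
  have "cmp X (cmp X f' g') (cmp X g f) = cmp X f' (cmp X g' (cmp X g f))"
    using cmp_assoc[OF comp_hom[OF fh gh] g'(1) f'(1)] by simp
  also have "cmp X g' (cmp X g f) = f" using cmp_assoc[OF fh gh g'(1)] g'(2) id_l[OF fh] by simp
  finally have 1: "cmp X (cmp X f' g') (cmp X g f) = idm X A" using f'(2) by simp
  have "cmp X (cmp X g f) (cmp X f' g') = cmp X g (cmp X f (cmp X f' g'))"
    using cmp_assoc[OF comp_hom[OF g'(1) f'(1)] fh gh] by simp
  also have "cmp X f (cmp X f' g') = g'" using cmp_assoc[OF g'(1) f'(1) fh] f'(3) id_l[OF g'(1)] by simp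
  finally have 2: "cmp X (cmp X g f) (cmp X f' g') = idm X C" using g'(3) by simp
  show ?thesis unfolding is_iso_def using comp_hom f'(1) g'(1) fh gh 1 2 by blast
qed

lemma iso_from_inverses: "f \<in> Hom X A B \<Longrightarrow> g \<in> Hom X B A \<Longrightarrow> h \<in> Hom X B A \<Longrightarrow>
   cmp X g f = idm X A \<Longrightarrow> cmp X f h = idm X B \<Longrightarrow> is_iso X A B f"
proof -
  assume f: "f \<in> Hom X A B" and g: "g \<in> Hom X B A" and h: "h \<in> Hom X B A"
    and l: "cmp X g f = idm X A" and r: "cmp X f h = idm X B"
  have "g = cmp X g (cmp X f h)" using r id_r g by simp
  also have "\<dots> = cmp X (cmp X g f) h" using cmp_assoc f g h by blast
  also have "\<dots> = h" using l id_l h by simp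
  finally have "g = h" .
  then show ?thesis unfolding is_iso_def using f g l r by blast
qed

lemma iso_of_left_inverse: "is_iso X B A g \<Longrightarrow> f \<in> Hom X A B \<Longrightarrow> cmp X g f = idm X A \<Longrightarrow> is_iso X A B f"
proof -
  assume g: "is_iso X B A g" and f: "f \<in> Hom X A B" and gf: "cmp X g f = idm X A"
  obtain g' where g': "g' \<in> Hom X A B" "cmp X g' g = idm X B" "cmp X g g' = idm X A" using g unfolding is_iso_def by blast
  have gh: "g \<in> Hom X B A" using iso_hom g .
  have "f = cmp X (cmp X g' g) f" using g' id_l f by simp
  also have "\<dots> = g'" using cmp_assoc[OF f gh g'(1)] gf id_r g' by simp
  finally show ?thesis using g' gh iso_from_inverses[of f A B g g] f by simp
qed

lemma iso_of_right_inverse: "is_iso X A B g \<Longrightarrow> f \<in> Hom X B A \<Longrightarrow> cmp X f g = idm X A \<Longrightarrow> is_iso X B A f"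
proof -
  assume g: "is_iso X A B g" and f: "f \<in> Hom X B A" and fg: "cmp X f g = idm X A"
  obtain g' where g': "g' \<in> Hom X B A" "cmp X g' g = idm X A" "cmp X g g' = idm X B" using g unfolding is_iso_def by blast
  have gh: "g \<in> Hom X A B" using iso_hom g .
  have "f = cmp X f (cmp X g g')" using g' id_r f by simp
  also have "\<dots> = g'" using cmp_assoc[OF g'(1) gh f] fg id_l g' by simp
  finally show ?thesis using g' gh iso_from_inverses[of f B A g g] f by simp
qed

lemma isomorphic_refl: "A \<in> Obj X \<Longrightarrow> isomorphic X A A"
  unfolding isomorphic_def using id_iso by blast
lemma isomorphic_sym: "isomorphic X A B \<Longrightarrow> isomorphic X B A"
  unfolding isomorphic_def using iso_inv by blast
lemma isomorphic_trans: "isomorphic X A B \<Longrightarrow> isomorphic X B C \<Longrightarrow> isomorphic X A C"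
  unfolding isomorphic_def using iso_comp by blast

lemma zero_iso_to: "is_zero_obj X Z \<Longrightarrow> is_iso X Z A f \<Longrightarrow> is_zero_obj X A"
proof -
  assume z: "is_zero_obj X Z" and f: "is_iso X Z A f"
  obtain g where g: "g \<in> Hom X A Z" "cmp X f g = idm X A" using f unfolding is_iso_def by blast
  have fh: "f \<in> Hom X Z A" using f iso_hom by blast
  have "g = mzero X A Z" using zero_in z g by blast
  then have "idm X A = mzero X A A" using g cmp_zero_r fh hom_obj by metis
  then show ?thesis using zero_by_id hom_obj fh by blast
qed

lemma zero_iso_from: "is_zero_obj X Z \<Longrightarrow> is_iso X A Z f \<Longrightarrow> is_zero_obj X A"
  using zero_iso_to iso_inv by blast

lemma id_minus_nilpotent_iso: assumes f: "f \<in> Hom X A A" and n: "cmp X f f = mzero X A A"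
  shows "is_iso X A A (madd X (idm X A) (neg f))"
proof -
  have A: "A \<in> Obj X" using f hom_obj by blast
  have i: "idm X A \<in> Hom X A A" using A by simp
  have nf: "neg f \<in> Hom X A A" using neg_hom[OF f] .
  define u where "u = madd X (idm X A) (neg f)"
  define v where "v = madd X (idm X A) f"
  have uh: "u \<in> Hom X A A" unfolding u_def using add_hom[OF i nf] .
  have vh: "v \<in> Hom X A A" unfolding v_def using add_hom[OF i f] .
  have nz: "neg (mzero X A A) = mzero X A A" using neg_zero A by blast
  have nff: "cmp X (neg f) f = mzero X A A" using neg_cmp_l[OF f f] n nz by simp
  have fnf: "cmp X f (neg f) = mzero X A A" using neg_cmp_r[OF f f] n nz by simp
  have "cmp X u v = madd X (cmp X u (idm X A)) (cmp X u f)" unfolding v_def using distr_r[OF i f uh] .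
  also have "cmp X u f = madd X (cmp X (idm X A) f) (cmp X (neg f) f)" unfolding u_def using distr_l[OF f i nf] .
  also have "\<dots> = f" using id_l[OF f] nff add_zero[OF f] by simp
  also have "cmp X u (idm X A) = u" using id_r[OF uh] .
  also have "madd X u f = idm X A" unfolding u_def using add_assoc[OF i nf f] add_comm[OF nf f] add_neg[OF f] add_zero[OF i] by simp
  finally have 1: "cmp X u v = idm X A" .
  have "cmp X v u = madd X (cmp X v (idm X A)) (cmp X v (neg f))" unfolding u_def using distr_r[OF i nf vh] .
  also have "cmp X v (neg f) = madd X (cmp X (idm X A) (neg f)) (cmp X f (neg f))" unfolding v_def using distr_l[OF nf i f] .
  also have "\<dots> = neg f" using id_l[OF nf] fnf add_zero[OF nf] by simp
  also have "cmp X v (idm X A) = v" using id_r[OF vh] .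
  also have "madd X v (neg f) = idm X A" unfolding v_def using add_assoc[OF i f nf] add_neg[OF f] add_zero[OF i] by simp
  finally have 2: "cmp X v u = idm X A" .
  show ?thesis using iso_from_inverses[OF uh vh vh 2 1] unfolding u_def .
qed

(* Hom-membership is recast through the partial maps mdom, mcod and the predicate marr,
   so that the simplifier discharges the typing side conditions of composites. *)
definition mdom :: "'m \<Rightarrow> 'o" where "mdom f = (SOME A. \<exists>B. f \<in> Hom X A B)"
definition mcod :: "'m \<Rightarrow> 'o" where "mcod f = (SOME B. \<exists>A. f \<in> Hom X A B)"
definition marr :: "'m \<Rightarrow> bool" where "marr f \<longleftrightarrow> (\<exists>A B. f \<in> Hom X A B)"

lemma hom_mdom: "f \<in> Hom X A B \<Longrightarrow> mdom f = A"
  unfolding mdom_def by (rule some_equality) (auto dest: hom_uniq)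
lemma hom_mcod: "f \<in> Hom X A B \<Longrightarrow> mcod f = B"
  unfolding mcod_def by (rule some_equality) (auto dest: hom_uniq)

lemma Hom_iff: "f \<in> Hom X A B \<longleftrightarrow> marr f \<and> mdom f = A \<and> mcod f = B"
proof
  assume "f \<in> Hom X A B" then show "marr f \<and> mdom f = A \<and> mcod f = B" using hom_mdom hom_mcod marr_def by blast
next
  assume a: "marr f \<and> mdom f = A \<and> mcod f = B"
  then obtain A' B' where "f \<in> Hom X A' B'" unfolding marr_def by blast
  then show "f \<in> Hom X A B" using a hom_mdom hom_mcod by blast
qed

lemma marr_hom: "marr f \<Longrightarrow> f \<in> Hom X (mdom f) (mcod f)" using Hom_iff by blast

lemma mdom_obj[simp]: "marr f \<Longrightarrow> mdom f \<in> Obj X" using marr_hom hom_obj by blast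
lemma mcod_obj[simp]: "marr f \<Longrightarrow> mcod f \<in> Obj X" using marr_hom hom_obj by blast

lemma marr_cmp[simp]: "marr f \<Longrightarrow> marr g \<Longrightarrow> mdom g = mcod f \<Longrightarrow> marr (cmp X g f)"
  using comp_hom[OF marr_hom[of f]] marr_hom[of g] Hom_iff by metis
lemma mdom_cmp[simp]: "marr f \<Longrightarrow> marr g \<Longrightarrow> mdom g = mcod f \<Longrightarrow> mdom (cmp X g f) = mdom f"
  using comp_hom[OF marr_hom[of f]] marr_hom[of g] Hom_iff by metis
lemma mcod_cmp[simp]: "marr f \<Longrightarrow> marr g \<Longrightarrow> mdom g = mcod f \<Longrightarrow> mcod (cmp X g f) = mcod g"
  using comp_hom[OF marr_hom[of f]] marr_hom[of g] Hom_iff by metis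
lemma marr_idm[simp]: "A \<in> Obj X \<Longrightarrow> marr (idm X A)" using Hom_iff id_hom by blast
lemma mdom_idm[simp]: "A \<in> Obj X \<Longrightarrow> mdom (idm X A) = A" using Hom_iff id_hom by blast
lemma mcod_idm[simp]: "A \<in> Obj X \<Longrightarrow> mcod (idm X A) = A" using Hom_iff id_hom by blast
lemma marr_zero[simp]: "A \<in> Obj X \<Longrightarrow> B \<in> Obj X \<Longrightarrow> marr (mzero X A B)" using Hom_iff zero_hom by blast
lemma mdom_zero[simp]: "A \<in> Obj X \<Longrightarrow> B \<in> Obj X \<Longrightarrow> mdom (mzero X A B) = A" using Hom_iff zero_hom by blast
lemma mcod_zero[simp]: "A \<in> Obj X \<Longrightarrow> B \<in> Obj X \<Longrightarrow> mcod (mzero X A B) = B" using Hom_iff zero_hom by blast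
lemma marr_add[simp]: "marr f \<Longrightarrow> marr g \<Longrightarrow> mdom g = mdom f \<Longrightarrow> mcod g = mcod f \<Longrightarrow> marr (madd X f g)"
  using add_hom Hom_iff by metis
lemma mdom_add[simp]: "marr f \<Longrightarrow> marr g \<Longrightarrow> mdom g = mdom f \<Longrightarrow> mcod g = mcod f \<Longrightarrow> mdom (madd X f g) = mdom f"
  using add_hom Hom_iff by metis
lemma mcod_add[simp]: "marr f \<Longrightarrow> marr g \<Longrightarrow> mdom g = mdom f \<Longrightarrow> mcod g = mcod f \<Longrightarrow> mcod (madd X f g) = mcod f"
  using add_hom Hom_iff by metis
lemma marr_neg[simp]: "marr f \<Longrightarrow> marr (neg f)" using neg_hom Hom_iff by metis
lemma mdom_neg[simp]: "marr f \<Longrightarrow> mdom (neg f) = mdom f" using neg_hom Hom_iff by metis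
lemma mcod_neg[simp]: "marr f \<Longrightarrow> mcod (neg f) = mcod f" using neg_hom Hom_iff by metis

lemma cmp_assoc'[simp]: "marr f \<Longrightarrow> marr g \<Longrightarrow> marr h \<Longrightarrow> mdom g = mcod f \<Longrightarrow> mdom h = mcod g \<Longrightarrow>
   cmp X h (cmp X g f) = cmp X (cmp X h g) f"
  using cmp_assoc marr_hom by metis
lemma id_l'[simp]: "marr f \<Longrightarrow> mcod f = B \<Longrightarrow> cmp X (idm X B) f = f" using id_l marr_hom by blast
lemma id_r'[simp]: "marr f \<Longrightarrow> mdom f = A \<Longrightarrow> cmp X f (idm X A) = f" using id_r marr_hom by blast
lemma distr_l'[simp]: "marr f \<Longrightarrow> marr g \<Longrightarrow> marr g' \<Longrightarrow> mdom g = mcod f \<Longrightarrow> mdom g' = mcod f \<Longrightarrow> mcod g' = mcod g \<Longrightarrow>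
   cmp X (madd X g g') f = madd X (cmp X g f) (cmp X g' f)"
  using distr_l marr_hom by metis
lemma distr_r'[simp]: "marr f \<Longrightarrow> marr f' \<Longrightarrow> marr g \<Longrightarrow> mdom g = mcod f \<Longrightarrow> mdom f' = mdom f \<Longrightarrow> mcod f' = mcod f \<Longrightarrow>
   cmp X g (madd X f f') = madd X (cmp X g f) (cmp X g f')"
  using distr_r marr_hom by metis
lemma zero_r'[simp]: "marr g \<Longrightarrow> A \<in> Obj X \<Longrightarrow> mdom g = B \<Longrightarrow> cmp X g (mzero X A B) = mzero X A (mcod g)"
  using cmp_zero_r marr_hom by blast
lemma zero_l'[simp]: "marr f \<Longrightarrow> C \<in> Obj X \<Longrightarrow> mcod f = B \<Longrightarrow> cmp X (mzero X B C) f = mzero X (mdom f) C"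
  using cmp_zero_l marr_hom by blast
lemma add_zero'[simp]: "marr f \<Longrightarrow> mdom f = A \<Longrightarrow> mcod f = B \<Longrightarrow> madd X f (mzero X A B) = f"
  using add_zero marr_hom by blast
lemma zero_add'[simp]: "marr f \<Longrightarrow> mdom f = A \<Longrightarrow> mcod f = B \<Longrightarrow> madd X (mzero X A B) f = f"
  using zero_add marr_hom by blast
lemma neg_cmp_l'[simp]: "marr f \<Longrightarrow> marr g \<Longrightarrow> mdom g = mcod f \<Longrightarrow> cmp X (neg g) f = neg (cmp X g f)"
  using neg_cmp_l marr_hom by metis
lemma neg_cmp_r'[simp]: "marr f \<Longrightarrow> marr g \<Longrightarrow> mdom g = mcod f \<Longrightarrow> cmp X g (neg f) = neg (cmp X g f)"
  using neg_cmp_r marr_hom by metis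
lemma add_assoc'[simp]: "marr f \<Longrightarrow> marr g \<Longrightarrow> marr h \<Longrightarrow> mdom g = mdom f \<Longrightarrow> mcod g = mcod f \<Longrightarrow> mdom h = mdom f \<Longrightarrow> mcod h = mcod f \<Longrightarrow>
   madd X (madd X f g) h = madd X f (madd X g h)"
  using add_assoc marr_hom by metis
lemma add_neg'[simp]: "marr f \<Longrightarrow> madd X f (neg f) = mzero X (mdom f) (mcod f)"
  using add_neg marr_hom by blast
lemma neg_zero'[simp]: "A \<in> Obj X \<Longrightarrow> B \<in> Obj X \<Longrightarrow> neg (mzero X A B) = mzero X A B" using neg_zero by blast
lemma neg_neg'[simp]: "marr f \<Longrightarrow> neg (neg f) = f" using neg_neg marr_hom by blast

lemma cmp_assoc_eq: "cmp X g f = e \<Longrightarrow> marr f \<Longrightarrow> marr g \<Longrightarrow> mdom g = mcod f \<Longrightarrow> marr h \<Longrightarrow> mdom h = mcod g \<Longrightarrow>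
   cmp X (cmp X h g) f = cmp X h e"
  using cmp_assoc' by metis

lemma iso_cancel_zero: "is_iso X B C f \<Longrightarrow> g \<in> Hom X A B \<Longrightarrow> cmp X f g = mzero X A C \<Longrightarrow> g = mzero X A B"
proof -
  assume f: "is_iso X B C f" and g: "g \<in> Hom X A B" and e: "cmp X f g = mzero X A C"
  obtain f' where f': "f' \<in> Hom X C B" "cmp X f' f = idm X B" using f unfolding is_iso_def by blast
  have fh: "f \<in> Hom X B C" using iso_hom f .
  have "g = cmp X (cmp X f' f) g" using f' g by (simp add: Hom_iff)
  also have "\<dots> = cmp X f' (cmp X f g)" using cmp_assoc'[of g f f'] f' g fh by (simp add: Hom_iff)
  finally show ?thesis using e f' g fh hom_obj[OF g] by (simp add: Hom_iff)
qed

lemma cmp_right_inverse: "b' \<in> Hom X B2 B \<Longrightarrow> b \<in> Hom X B B2 \<Longrightarrow> cmp X b b' = idm X B2 \<Longrightarrow> g \<in> Hom X B2 W \<Longrightarrow>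
   cmp X g b = h \<Longrightarrow> g = cmp X h b'"
proof -
  assume a: "b' \<in> Hom X B2 B" "b \<in> Hom X B B2" "cmp X b b' = idm X B2" "g \<in> Hom X B2 W" "cmp X g b = h"
  have "g = cmp X g (cmp X b b')" using a by (simp add: Hom_iff)
  also have "\<dots> = cmp X (cmp X g b) b'" using a cmp_assoc'[of b' b g] by (simp add: Hom_iff)
  finally show ?thesis using a by simp
qed

lemma iso_of_iso_cmps: assumes a: "a \<in> Hom X A B" and a': "a' \<in> Hom X B A"
  and l: "is_iso X A A (cmp X a' a)" and r: "is_iso X B B (cmp X a a')" shows "is_iso X A B a"
proof -
  obtain u where u: "u \<in> Hom X A A" "cmp X u (cmp X a' a) = idm X A" using l unfolding is_iso_def by blast
  obtain v where v: "v \<in> Hom X B B" "cmp X (cmp X a a') v = idm X B" using r unfolding is_iso_def by blast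
  have "cmp X (cmp X u a') a = idm X A" using u a a' cmp_assoc'[of a a' u] by (simp add: Hom_iff)
  moreover have "cmp X a (cmp X a' v) = idm X B" using v a a' cmp_assoc'[of v a' a] by (simp add: Hom_iff)
  ultimately show ?thesis using iso_from_inverses[of a A B "cmp X u a'" "cmp X a' v"] a a' u v
    by (simp add: Hom_iff)
qed

lemma biprodD: "is_biprod X A B P i1 i2 p1 p2 \<Longrightarrow>
     A \<in> Obj X \<and> B \<in> Obj X \<and> P \<in> Obj X \<and>
     i1 \<in> Hom X A P \<and> i2 \<in> Hom X B P \<and> p1 \<in> Hom X P A \<and> p2 \<in> Hom X P B \<and>
     cmp X p1 i1 = idm X A \<and> cmp X p2 i2 = idm X B \<and>
     cmp X p1 i2 = mzero X B A \<and> cmp X p2 i1 = mzero X A B \<and>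
     madd X (cmp X i1 p1) (cmp X i2 p2) = idm X P"
  unfolding is_biprod_def by simp

lemma biprod_simps:
  assumes "is_biprod X A B P i1 i2 p1 p2"
  shows "A \<in> Obj X" "B \<in> Obj X" "P \<in> Obj X" "marr i1" "marr i2" "marr p1" "marr p2"
    "mdom i1 = A" "mcod i1 = P" "mdom i2 = B" "mcod i2 = P" "mdom p1 = P" "mcod p1 = A" "mdom p2 = P" "mcod p2 = B"
    "cmp X p1 i1 = idm X A" "cmp X p2 i2 = idm X B"
    "cmp X p1 i2 = mzero X B A" "cmp X p2 i1 = mzero X A B"
    "madd X (cmp X i1 p1) (cmp X i2 p2) = idm X P"
    "\<And>h. marr h \<Longrightarrow> mdom h = A \<Longrightarrow> cmp X (cmp X h p1) i1 = h"
    "\<And>h. marr h \<Longrightarrow> mdom h = B \<Longrightarrow> cmp X (cmp X h p2) i2 = h"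
    "\<And>h. marr h \<Longrightarrow> mdom h = A \<Longrightarrow> cmp X (cmp X h p1) i2 = mzero X B (mcod h)"
    "\<And>h. marr h \<Longrightarrow> mdom h = B \<Longrightarrow> cmp X (cmp X h p2) i1 = mzero X A (mcod h)"
    "\<And>h. marr h \<Longrightarrow> mdom h = P \<Longrightarrow> madd X (cmp X (cmp X h i1) p1) (cmp X (cmp X h i2) p2) = h"
proof -
  note b = biprodD[OF assms, unfolded Hom_iff]
  show "A \<in> Obj X" "B \<in> Obj X" "P \<in> Obj X" "marr i1" "marr i2" "marr p1" "marr p2"
    "mdom i1 = A" "mcod i1 = P" "mdom i2 = B" "mcod i2 = P" "mdom p1 = P" "mcod p1 = A" "mdom p2 = P" "mcod p2 = B"
    "cmp X p1 i1 = idm X A" "cmp X p2 i2 = idm X B"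
    "cmp X p1 i2 = mzero X B A" "cmp X p2 i1 = mzero X A B"
    "madd X (cmp X i1 p1) (cmp X i2 p2) = idm X P" using b by auto
  fix h
  show "marr h \<Longrightarrow> mdom h = A \<Longrightarrow> cmp X (cmp X h p1) i1 = h"
    using b cmp_assoc'[of i1 p1 h, symmetric] by simp
  show "marr h \<Longrightarrow> mdom h = B \<Longrightarrow> cmp X (cmp X h p2) i2 = h"
    using b cmp_assoc'[of i2 p2 h, symmetric] by simp
  show "marr h \<Longrightarrow> mdom h = A \<Longrightarrow> cmp X (cmp X h p1) i2 = mzero X B (mcod h)"
    using b cmp_assoc'[of i2 p1 h, symmetric] by simp
  show "marr h \<Longrightarrow> mdom h = B \<Longrightarrow> cmp X (cmp X h p2) i1 = mzero X A (mcod h)"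
    using b cmp_assoc'[of i1 p2 h, symmetric] by simp
  show "marr h \<Longrightarrow> mdom h = P \<Longrightarrow> madd X (cmp X (cmp X h i1) p1) (cmp X (cmp X h i2) p2) = h"
    using b cmp_assoc'[of p1 i1 h, symmetric] cmp_assoc'[of p2 i2 h, symmetric] distr_r'[of "cmp X i1 p1" "cmp X i2 p2" h, symmetric]
    by simp
qed

definition summand :: "'o \<Rightarrow> 'o \<Rightarrow> bool" where
  "summand A Z \<longleftrightarrow> (\<exists>s r. s \<in> Hom X A Z \<and> r \<in> Hom X Z A \<and> cmp X r s = idm X A)"

lemma summand_refl: "A \<in> Obj X \<Longrightarrow> summand A A"
  unfolding summand_def by (intro exI[of _ "idm X A"]) (simp add: Hom_iff)

lemma summand_trans: "summand A B \<Longrightarrow> summand B C \<Longrightarrow> summand A C"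
proof -
  assume "summand A B" "summand B C"
  then obtain s r s' r' where a: "s \<in> Hom X A B" "r \<in> Hom X B A" "cmp X r s = idm X A"
     "s' \<in> Hom X B C" "r' \<in> Hom X C B" "cmp X r' s' = idm X B" unfolding summand_def by blast
  have "cmp X (cmp X r r') (cmp X s' s) = idm X A"
    using a cmp_assoc_eq[OF a(6)] by (simp add: Hom_iff)
  then show ?thesis unfolding summand_def using a by (intro exI[of _ "cmp X s' s"] exI[of _ "cmp X r r'"]) (simp add: Hom_iff)
qed

lemma summand_iso: "is_iso X A B f \<Longrightarrow> summand A B"
  unfolding summand_def is_iso_def by blast

lemma isomorphic_summand: "isomorphic X A B \<Longrightarrow> summand A B"
  unfolding isomorphic_def using summand_iso by blast

lemma summand_obj: "summand A B \<Longrightarrow> A \<in> Obj X \<and> B \<in> Obj X"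
  unfolding summand_def using hom_obj by blast

lemma biprod_summand:
  assumes s1: "s1 \<in> Hom X A1 B1" "r1 \<in> Hom X B1 A1" "cmp X r1 s1 = idm X A1"
    and s2: "s2 \<in> Hom X A2 B2" "r2 \<in> Hom X B2 A2" "cmp X r2 s2 = idm X A2"
    and PA: "is_biprod X A1 A2 PA i1 i2 p1 p2"
    and PB: "is_biprod X B1 B2 PB j1 j2 q1 q2"
  shows "summand PA PB"
proof -
  note a = biprod_simps[OF PA] and b = biprod_simps[OF PB]
  define s where "s = madd X (cmp X j1 (cmp X s1 p1)) (cmp X j2 (cmp X s2 p2))"
  define r where "r = madd X (cmp X i1 (cmp X r1 q1)) (cmp X i2 (cmp X r2 q2))"
  have "cmp X r s = idm X PA" unfolding r_def s_def using a b s1 s2 cmp_assoc_eq[OF s1(3)] cmp_assoc_eq[OF s2(3)] by (simp add: Hom_iff)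
  moreover have "s \<in> Hom X PA PB" "r \<in> Hom X PB PA" unfolding r_def s_def using a b s1 s2 by (simp_all add: Hom_iff)
  ultimately show ?thesis unfolding summand_def by blast
qed

lemma biprod_zero_r: "is_zero_obj X Z \<Longrightarrow> A \<in> Obj X \<Longrightarrow>
   is_biprod X A Z A (idm X A) (mzero X Z A) (idm X A) (mzero X A Z)"
  unfolding is_biprod_def using zero_obj[of Z] zero_in[of Z "idm X Z" Z] unfolding is_zero_obj_def
  by (simp add: Hom_iff)

lemma biprod_zero_l: "is_zero_obj X Z \<Longrightarrow> A \<in> Obj X \<Longrightarrow>
   is_biprod X Z A A (mzero X Z A) (idm X A) (mzero X A Z) (idm X A)"
  unfolding is_biprod_def using zero_obj[of Z] unfolding is_zero_obj_def
  by (simp add: Hom_iff)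

lemma biprod_assoc:
  assumes Q: "is_biprod X Z1 Z2 Q k1 k2 k1' k2'"
    and R: "is_biprod X Q U R j1 j2 j1' j2'"
    and P: "is_biprod X Z2 U P2 e1 e2 q1 q2"
  shows "is_biprod X Z1 P2 R (cmp X j1 k1) (madd X (cmp X j1 (cmp X k2 q1)) (cmp X j2 q2))
          (cmp X k1' j1') (madd X (cmp X e1 (cmp X k2' j1')) (cmp X e2 j2'))"
proof -
  note a = biprod_simps[OF Q] and b = biprod_simps[OF R] and c = biprod_simps[OF P]
  have e: "madd X (cmp X (cmp X j1 k1) k1') (cmp X (cmp X j1 k2) k2') = j1" using a b by simp
  have e2: "madd X (cmp X (cmp X (cmp X j1 k1) k1') j1') (cmp X (cmp X (cmp X j1 k2) k2') j1') = cmp X j1 j1'"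
    using distr_l'[of j1' "cmp X (cmp X j1 k1) k1'" "cmp X (cmp X j1 k2) k2'"] e a b by (simp add: Hom_iff)
  have 1: "madd X (cmp X (cmp X (cmp X j1 k1) k1') j1')
         (madd X (cmp X (cmp X (cmp X j1 k2) k2') j1') (cmp X j2 j2')) = idm X R"
    using add_assoc'[of "cmp X (cmp X (cmp X j1 k1) k1') j1'" "cmp X (cmp X (cmp X j1 k2) k2') j1'" "cmp X j2 j2'"] e2 a b
    by (simp add: Hom_iff)
  show ?thesis unfolding is_biprod_def using a b c 1 by (simp add: Hom_iff)
qed

lemma fsums_obj: "Z \<in> fsums X S \<Longrightarrow> Z \<in> Obj X"
  by (induction rule: fsums.induct) (auto simp: zero_obj biprodD)

lemma fsums_biprod: "Z2 \<in> fsums X S \<Longrightarrow> Z1 \<in> fsums X S \<Longrightarrow>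
    \<exists>Q k1 k2 k1' k2'. is_biprod X Z1 Z2 Q k1 k2 k1' k2' \<and> Q \<in> fsums X S"
proof (induction Z2 rule: fsums.induct)
  case (zero Z)
  then show ?case using biprod_zero_r[OF zero(1) fsums_obj[OF zero(2)]] by blast
next
  case (step Z U P i1 i2 p1 p2)
  obtain Q k1 k2 k1' k2' where Q: "is_biprod X Z1 Z Q k1 k2 k1' k2'" "Q \<in> fsums X S" using step by blast
  obtain R j1 j2 j1' j2' where R: "is_biprod X Q U R j1 j2 j1' j2'"
    using has_biprod fsums_obj[OF Q(2)] biprodD[OF step(3)] by blast
  have "R \<in> fsums X S" using fsums.step[OF Q(2) step(2) R] .
  then show ?case using biprod_assoc[OF Q(1) R step(3)] by blast
qed

lemma addc_iff: "A \<in> addc X S \<longleftrightarrow> A \<in> Obj X \<and> (\<exists>Z \<in> fsums X (S \<inter> Obj X). summand A Z)"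
  unfolding addc_def summand_def by blast

lemma addc_obj: "A \<in> addc X S \<Longrightarrow> A \<in> Obj X" unfolding addc_iff by blast

lemma addc_summand: "summand A B \<Longrightarrow> B \<in> addc X S \<Longrightarrow> A \<in> addc X S"
proof -
  assume s: "summand A B" and B: "B \<in> addc X S"
  obtain Z where Z: "Z \<in> fsums X (S \<inter> Obj X)" "summand B Z" using B unfolding addc_iff by blast
  have "summand A Z" using summand_trans[OF s Z(2)] .
  then show ?thesis unfolding addc_iff using Z(1) summand_obj[OF s] by blast
qed

lemma addc_iso: "isomorphic X A B \<Longrightarrow> B \<in> addc X S \<Longrightarrow> A \<in> addc X S"
  using addc_summand[OF isomorphic_summand] .

lemma addc_zero: "is_zero_obj X Z \<Longrightarrow> Z \<in> addc X S"
  unfolding addc_iff using fsums.zero[of X Z] summand_refl[OF zero_obj] zero_obj by blast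

lemma addc_base: "A \<in> S \<Longrightarrow> A \<in> Obj X \<Longrightarrow> A \<in> addc X S"
proof -
  assume A: "A \<in> S" "A \<in> Obj X"
  obtain Z where Z: "is_zero_obj X Z" using has_zero by blast
  have "A \<in> fsums X (S \<inter> Obj X)" using fsums.step[OF fsums.zero[OF Z] _ biprod_zero_l[OF Z A(2)]] A by blast
  then show ?thesis unfolding addc_iff using A summand_refl by blast
qed

lemma biprod_in_addc:
  assumes "is_biprod X A B U i1 i2 p1 p2" shows "A \<in> addc X {U}" "B \<in> addc X {U}"
proof -
  note b = biprodD[OF assms]
  have U: "U \<in> addc X {U}" using addc_base b by blast
  show "A \<in> addc X {U}" "B \<in> addc X {U}" using addc_summand[OF _ U] b unfolding summand_def by blast+
qed

lemma addc_biprod: "A1 \<in> addc X S \<Longrightarrow> A2 \<in> addc X S \<Longrightarrow> is_biprod X A1 A2 P i1 i2 p1 p2 \<Longrightarrow> P \<in> addc X S"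
proof -
  assume a1: "A1 \<in> addc X S" and a2: "A2 \<in> addc X S" and P: "is_biprod X A1 A2 P i1 i2 p1 p2"
  obtain Z1 s1 r1 where z1: "Z1 \<in> fsums X (S \<inter> Obj X)" "s1 \<in> Hom X A1 Z1" "r1 \<in> Hom X Z1 A1" "cmp X r1 s1 = idm X A1"
    using a1 unfolding addc_def by blast
  obtain Z2 s2 r2 where z2: "Z2 \<in> fsums X (S \<inter> Obj X)" "s2 \<in> Hom X A2 Z2" "r2 \<in> Hom X Z2 A2" "cmp X r2 s2 = idm X A2"
    using a2 unfolding addc_def by blast
  obtain Q k1 k2 k1' k2' where Q: "is_biprod X Z1 Z2 Q k1 k2 k1' k2'" "Q \<in> fsums X (S \<inter> Obj X)"
    using fsums_biprod[OF z2(1) z1(1)] by blast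
  have "summand P Q" using biprod_summand[OF z1(2-4) z2(2-4) P Q(1)] .
  then show ?thesis unfolding addc_iff using Q(2) biprodD[OF P] by blast
qed

lemma fsums_addc: "Z \<in> fsums X S' \<Longrightarrow> S' \<subseteq> addc X S \<Longrightarrow> Z \<in> addc X S"
proof (induction rule: fsums.induct)
  case (zero Z) then show ?case using addc_zero by blast
next
  case (step Z U P i1 i2 p1 p2)
  have "Z \<in> addc X S" "U \<in> addc X S" using step by auto
  then show ?case using addc_biprod step(3) by blast
qed

lemma addc_addc: "S' \<subseteq> addc X S \<Longrightarrow> addc X S' \<subseteq> addc X S"
proof
  fix A assume S': "S' \<subseteq> addc X S" and A: "A \<in> addc X S'"
  obtain Z where Z: "Z \<in> fsums X (S' \<inter> Obj X)" "summand A Z" using A unfolding addc_iff by blast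
  have "S' \<inter> Obj X \<subseteq> addc X S" using S' by blast
  then have "Z \<in> addc X S" using fsums_addc[OF Z(1)] by blast
  then show "A \<in> addc X S" using addc_summand Z(2) by blast
qed

lemma addc_mono: "S' \<subseteq> S \<Longrightarrow> addc X S' \<subseteq> addc X S"
proof -
  assume "S' \<subseteq> S"
  then have "S' \<inter> Obj X \<subseteq> addc X S" using addc_base by blast
  then have "addc X (S' \<inter> Obj X) \<subseteq> addc X S" by (rule addc_addc)
  moreover have "addc X S' = addc X (S' \<inter> Obj X)" unfolding addc_def by simp
  ultimately show ?thesis by simp
qed

definition ext_set :: "'o set \<Rightarrow> 'o set \<Rightarrow> 'o set" where
  "ext_set U1 U2 = {A \<in> Obj X. \<exists>V1 \<in> U1. \<exists>V2 \<in> U2. \<exists>x y d. etri X V1 x A y V2 d}"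

lemma diamond_ext_set: "diamond X U1 U2 = addc X (ext_set U1 U2)"
  unfolding diamond_def ext_set_def by simp

lemma gen_addc: "n \<ge> 1 \<Longrightarrow> \<exists>S. gen X T n = addc X S"
proof -
  assume n: "n \<ge> 1"
  then obtain m where m: "n = Suc m" by (cases n) auto
  show ?thesis
  proof (cases "m = 0")
    case True then show ?thesis using m by auto
  next
    case False then show ?thesis using m diamond_ext_set by auto
  qed
qed

lemma gen_obj: "gen X T n \<subseteq> Obj X"
proof (cases n)
  case 0 then show ?thesis by simp
next
  case (Suc m) then obtain S where "gen X T n = addc X S" using gen_addc[of n T] by auto
  then show ?thesis using addc_obj by blast
qed

lemma gen_summand: "n \<ge> 1 \<Longrightarrow> summand A B \<Longrightarrow> B \<in> gen X T n \<Longrightarrow> A \<in> gen X T n"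
  using gen_addc addc_summand by metis
lemma gen_iso: "n \<ge> 1 \<Longrightarrow> isomorphic X A B \<Longrightarrow> B \<in> gen X T n \<Longrightarrow> A \<in> gen X T n"
  using gen_summand isomorphic_summand by blast
lemma gen_zero: "n \<ge> 1 \<Longrightarrow> is_zero_obj X Z \<Longrightarrow> Z \<in> gen X T n"
  using gen_addc addc_zero by metis
lemma gen_biprod: "n \<ge> 1 \<Longrightarrow> A1 \<in> gen X T n \<Longrightarrow> A2 \<in> gen X T n \<Longrightarrow> is_biprod X A1 A2 P i1 i2 p1 p2 \<Longrightarrow> P \<in> gen X T n"
  using gen_addc addc_biprod by metis

lemma diamond_mono: "U1 \<subseteq> U1' \<Longrightarrow> U2 \<subseteq> U2' \<Longrightarrow> diamond X U1 U2 \<subseteq> diamond X U1' U2'"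
proof -
  assume "U1 \<subseteq> U1'" "U2 \<subseteq> U2'"
  then have "ext_set U1 U2 \<subseteq> ext_set U1' U2'" unfolding ext_set_def by blast
  then show ?thesis unfolding diamond_ext_set by (rule addc_mono)
qed

lemma gen_mono_generator: "T \<in> addc X {U} \<Longrightarrow> gen X T n \<subseteq> gen X U n"
proof (induction n)
  case 0 then show ?case by simp
next
  case (Suc n)
  have a: "addc X {T} \<subseteq> addc X {U}" using addc_addc Suc.prems by blast
  show ?case
  proof (cases "n = 0")
    case True then show ?thesis using a by simp
  next
    case False
    then have "gen X T (Suc n) = diamond X (addc X {T}) (gen X T n)" "gen X U (Suc n) = diamond X (addc X {U}) (gen X U n)"
      by simp_all
    then show ?thesis using diamond_mono[OF a Suc.IH[OF Suc.prems]] by simp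
  qed
qed

lemma ext_dim_le_enat: "T \<in> Obj X \<Longrightarrow> gen X T (Suc n) = Obj X \<Longrightarrow> ext_dim X \<le> enat n"
  unfolding ext_dim_def by (rule Inf_lower) (auto simp del: gen.simps)

lemma ext_dim_enat_gen: "ext_dim X = enat n \<Longrightarrow> \<exists>T \<in> Obj X. gen X T (Suc n) = Obj X"
proof -
  assume e: "ext_dim X = enat n"
  let ?S = "{enat n | n. \<exists>T \<in> Obj X. gen X T (n + 1) = Obj X}"
  have ne: "?S \<noteq> {}"
  proof
    assume "?S = {}" then have "ext_dim X = \<infinity>" unfolding ext_dim_def Inf_enat_def by (simp del: gen.simps)
    then show False using e by simp
  qed
  then have "ext_dim X = (LEAST x. x \<in> ?S)" unfolding ext_dim_def Inf_enat_def by (simp only: if_False)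
  moreover have "(LEAST x. x \<in> ?S) \<in> ?S" using ne by (metis (no_types, lifting) LeastI ex_in_conv)
  ultimately have "enat n \<in> ?S" using e by (simp del: gen.simps)
  then show ?thesis by (auto simp del: gen.simps)
qed

end

section \<open>Extriangulated categories\<close>

locale extriangulated = additive_kcat X for X :: "('o,'m,'e,'k::field) ecat" +
  assumes ec: "extri_cat X"
begin

lemma biadditive: "biadditive_E X" using ec unfolding extri_cat_def by blast
lemma realization: "realization_axioms X" using ec unfolding extri_cat_def by blast
lemma ET3: "ET3_axioms X" using ec unfolding extri_cat_def by blast
lemma ET4: "ET4_axioms X" using ec unfolding extri_cat_def by blast

lemmas E_bifunctor = biadditive[unfolded biadditive_E_def]

lemma Ex_group: "C \<in> Obj X \<Longrightarrow> A \<in> Obj X \<Longrightarrow>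
    ezero X C A \<in> Ex X C A \<and>
    (\<forall>d \<in> Ex X C A. \<forall>d' \<in> Ex X C A. eadd X C A d d' \<in> Ex X C A \<and> eadd X C A d d' = eadd X C A d' d) \<and>
    (\<forall>d \<in> Ex X C A. \<forall>d' \<in> Ex X C A. \<forall>d'' \<in> Ex X C A.
       eadd X C A (eadd X C A d d') d'' = eadd X C A d (eadd X C A d' d'')) \<and>
    (\<forall>d \<in> Ex X C A. eadd X C A d (ezero X C A) = d) \<and>
    (\<forall>d \<in> Ex X C A. \<exists>d' \<in> Ex X C A. eadd X C A d d' = ezero X C A) \<and>
    (\<forall>d \<in> Ex X C A. epush X C (idm X A) d = d \<and> epull X A (idm X C) d = d)"
  using E_bifunctor[THEN conjunct1] by blast

lemma ezero_Ex: "C \<in> Obj X \<Longrightarrow> A \<in> Obj X \<Longrightarrow> ezero X C A \<in> Ex X C A"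
  using Ex_group by blast
lemma eadd_assoc: "C \<in> Obj X \<Longrightarrow> A \<in> Obj X \<Longrightarrow> d \<in> Ex X C A \<Longrightarrow> d' \<in> Ex X C A \<Longrightarrow> d'' \<in> Ex X C A \<Longrightarrow>
    eadd X C A (eadd X C A d d') d'' = eadd X C A d (eadd X C A d' d'')"
  using Ex_group by blast
lemma eadd_zero: "C \<in> Obj X \<Longrightarrow> A \<in> Obj X \<Longrightarrow> d \<in> Ex X C A \<Longrightarrow> eadd X C A d (ezero X C A) = d"
  using Ex_group by blast
lemma eadd_inv: "C \<in> Obj X \<Longrightarrow> A \<in> Obj X \<Longrightarrow> d \<in> Ex X C A \<Longrightarrow> \<exists>d' \<in> Ex X C A. eadd X C A d d' = ezero X C A"
  using Ex_group by blast
lemma epush_id: "C \<in> Obj X \<Longrightarrow> A \<in> Obj X \<Longrightarrow> d \<in> Ex X C A \<Longrightarrow> epush X C (idm X A) d = d"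
  using Ex_group by blast
lemma epull_id: "C \<in> Obj X \<Longrightarrow> A \<in> Obj X \<Longrightarrow> d \<in> Ex X C A \<Longrightarrow> epull X A (idm X C) d = d"
  using Ex_group by blast

lemma epush_Ex: "C \<in> Obj X \<Longrightarrow> a \<in> Hom X A A' \<Longrightarrow> d \<in> Ex X C A \<Longrightarrow> epush X C a d \<in> Ex X C A'"
  using E_bifunctor[THEN conjunct2, THEN conjunct1] by blast
lemma epush_eadd: "C \<in> Obj X \<Longrightarrow> a \<in> Hom X A A' \<Longrightarrow> d \<in> Ex X C A \<Longrightarrow> d' \<in> Ex X C A \<Longrightarrow>
    epush X C a (eadd X C A d d') = eadd X C A' (epush X C a d) (epush X C a d')"
  using E_bifunctor[THEN conjunct2, THEN conjunct1] by blast
lemma epush_madd: "C \<in> Obj X \<Longrightarrow> a \<in> Hom X A A' \<Longrightarrow> a' \<in> Hom X A A' \<Longrightarrow> d \<in> Ex X C A \<Longrightarrow>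
    epush X C (madd X a a') d = eadd X C A' (epush X C a d) (epush X C a' d)"
  using E_bifunctor[THEN conjunct2, THEN conjunct1] by blast
lemma epull_Ex: "A \<in> Obj X \<Longrightarrow> c \<in> Hom X C' C \<Longrightarrow> d \<in> Ex X C A \<Longrightarrow> epull X A c d \<in> Ex X C' A"
  using E_bifunctor[THEN conjunct2, THEN conjunct2, THEN conjunct1] by blast
lemma epull_eadd: "A \<in> Obj X \<Longrightarrow> c \<in> Hom X C' C \<Longrightarrow> d \<in> Ex X C A \<Longrightarrow> d' \<in> Ex X C A \<Longrightarrow>
    epull X A c (eadd X C A d d') = eadd X C' A (epull X A c d) (epull X A c d')"
  using E_bifunctor[THEN conjunct2, THEN conjunct2, THEN conjunct1] by blast
lemma epull_madd: "A \<in> Obj X \<Longrightarrow> c \<in> Hom X C' C \<Longrightarrow> c' \<in> Hom X C' C \<Longrightarrow> d \<in> Ex X C A \<Longrightarrow>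
    epull X A (madd X c c') d = eadd X C' A (epull X A c d) (epull X A c' d)"
  using E_bifunctor[THEN conjunct2, THEN conjunct2, THEN conjunct1] by blast
lemma epush_cmp: "C \<in> Obj X \<Longrightarrow> a \<in> Hom X A A' \<Longrightarrow> b \<in> Hom X A' A'' \<Longrightarrow> d \<in> Ex X C A \<Longrightarrow>
    epush X C (cmp X b a) d = epush X C b (epush X C a d)"
  using E_bifunctor[THEN conjunct2, THEN conjunct2, THEN conjunct2, THEN conjunct1] by blast
lemma epull_cmp: "A \<in> Obj X \<Longrightarrow> c \<in> Hom X C' C \<Longrightarrow> e \<in> Hom X C'' C' \<Longrightarrow> d \<in> Ex X C A \<Longrightarrow>
    epull X A (cmp X c e) d = epull X A e (epull X A c d)"
  using E_bifunctor[THEN conjunct2, THEN conjunct2, THEN conjunct2, THEN conjunct2, THEN conjunct1] by blast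
lemma epush_epull: "a \<in> Hom X A A' \<Longrightarrow> c \<in> Hom X C' C \<Longrightarrow> d \<in> Ex X C A \<Longrightarrow>
    epush X C' a (epull X A c d) = epull X A' c (epush X C a d)"
  using E_bifunctor[THEN conjunct2, THEN conjunct2, THEN conjunct2, THEN conjunct2, THEN conjunct2] by blast

lemma eadd_idem_eq_zero: "C \<in> Obj X \<Longrightarrow> A \<in> Obj X \<Longrightarrow> e \<in> Ex X C A \<Longrightarrow> eadd X C A e e = e \<Longrightarrow> e = ezero X C A"
proof -
  assume o: "C \<in> Obj X" "A \<in> Obj X" and e: "e \<in> Ex X C A" and ee: "eadd X C A e e = e"
  obtain e' where e': "e' \<in> Ex X C A" "eadd X C A e e' = ezero X C A" using eadd_inv[OF o e] by blast
  have "e = eadd X C A e (eadd X C A e e')" using e' eadd_zero[OF o e] by simp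
  also have "\<dots> = eadd X C A (eadd X C A e e) e'" using eadd_assoc[OF o e e e'(1)] by simp
  also have "\<dots> = ezero X C A" using ee e' by simp
  finally show ?thesis .
qed

lemma epush_zero: "C \<in> Obj X \<Longrightarrow> A \<in> Obj X \<Longrightarrow> A' \<in> Obj X \<Longrightarrow> d \<in> Ex X C A \<Longrightarrow> epush X C (mzero X A A') d = ezero X C A'"
proof -
  assume o: "C \<in> Obj X" "A \<in> Obj X" "A' \<in> Obj X" and d: "d \<in> Ex X C A"
  have z: "mzero X A A' \<in> Hom X A A'" using zero_hom o by blast
  have "epush X C (mzero X A A') d = epush X C (madd X (mzero X A A') (mzero X A A')) d" using add_zero[OF z] by simp
  also have "\<dots> = eadd X C A' (epush X C (mzero X A A') d) (epush X C (mzero X A A') d)" using epush_madd[OF o(1) z z d] .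
  finally show ?thesis using eadd_idem_eq_zero[OF o(1) o(3) epush_Ex[OF o(1) z d]] by simp
qed

lemma epull_zero: "C \<in> Obj X \<Longrightarrow> A \<in> Obj X \<Longrightarrow> C' \<in> Obj X \<Longrightarrow> d \<in> Ex X C A \<Longrightarrow> epull X A (mzero X C' C) d = ezero X C' A"
proof -
  assume o: "C \<in> Obj X" "A \<in> Obj X" "C' \<in> Obj X" and d: "d \<in> Ex X C A"
  have z: "mzero X C' C \<in> Hom X C' C" using zero_hom o by blast
  have "epull X A (mzero X C' C) d = epull X A (madd X (mzero X C' C) (mzero X C' C)) d" using add_zero[OF z] by simp
  also have "\<dots> = eadd X C' A (epull X A (mzero X C' C) d) (epull X A (mzero X C' C) d)" using epull_madd[OF o(2) z z d] .
  finally show ?thesis using eadd_idem_eq_zero[OF o(3) o(2) epull_Ex[OF o(2) z d]] by simp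
qed

lemma epush_ezero: "C \<in> Obj X \<Longrightarrow> a \<in> Hom X A A' \<Longrightarrow> epush X C a (ezero X C A) = ezero X C A'"
proof -
  assume C: "C \<in> Obj X" and a: "a \<in> Hom X A A'"
  have o: "A \<in> Obj X" "A' \<in> Obj X" using hom_obj[OF a] by auto
  have z: "ezero X C A \<in> Ex X C A" using ezero_Ex[OF C o(1)] .
  have "epush X C a (ezero X C A) = epush X C a (eadd X C A (ezero X C A) (ezero X C A))" using eadd_zero[OF C o(1) z] by simp
  also have "\<dots> = eadd X C A' (epush X C a (ezero X C A)) (epush X C a (ezero X C A))" using epush_eadd[OF C a z z] .
  finally show ?thesis using eadd_idem_eq_zero[OF C o(2) epush_Ex[OF C a z]] by simp
qed

lemma epull_ezero: "A \<in> Obj X \<Longrightarrow> c \<in> Hom X C' C \<Longrightarrow> epull X A c (ezero X C A) = ezero X C' A"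
proof -
  assume A: "A \<in> Obj X" and c: "c \<in> Hom X C' C"
  have o: "C' \<in> Obj X" "C \<in> Obj X" using hom_obj[OF c] by auto
  have z: "ezero X C A \<in> Ex X C A" using ezero_Ex[OF o(2) A] .
  have "epull X A c (ezero X C A) = epull X A c (eadd X C A (ezero X C A) (ezero X C A))" using eadd_zero[OF o(2) A z] by simp
  also have "\<dots> = eadd X C' A (epull X A c (ezero X C A)) (epull X A c (ezero X C A))" using epull_eadd[OF A c z z] .
  finally show ?thesis using eadd_idem_eq_zero[OF o(1) A epull_Ex[OF A c z]] by simp
qed

lemma epush_id_minus_fixed: "C \<in> Obj X \<Longrightarrow> e \<in> Hom X A A \<Longrightarrow> d \<in> Ex X C A \<Longrightarrow> epush X C e d = d \<Longrightarrow>
   epush X C (madd X (idm X A) (neg e)) d = ezero X C A"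
proof -
  assume C: "C \<in> Obj X" and e: "e \<in> Hom X A A" and d: "d \<in> Ex X C A" and fx: "epush X C e d = d"
  have A: "A \<in> Obj X" using hom_obj e by blast
  have ne: "neg e \<in> Hom X A A" using neg_hom[OF e] .
  have "epush X C (madd X (idm X A) (neg e)) d = eadd X C A d (epush X C (neg e) d)"
    using epush_madd[OF C id_hom[OF A] ne d] epush_id[OF C A d] by simp
  also have "\<dots> = eadd X C A (epush X C e d) (epush X C (neg e) d)" using fx by simp
  also have "\<dots> = epush X C (madd X e (neg e)) d" using epush_madd[OF C e ne d] by simp
  also have "\<dots> = ezero X C A" using add_neg[OF e] epush_zero[OF C A A d] by simp
  finally show ?thesis .
qed

lemma epull_id_minus_fixed: "A \<in> Obj X \<Longrightarrow> e \<in> Hom X C C \<Longrightarrow> d \<in> Ex X C A \<Longrightarrow> epull X A e d = d \<Longrightarrow>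
   epull X A (madd X (idm X C) (neg e)) d = ezero X C A"
proof -
  assume A: "A \<in> Obj X" and e: "e \<in> Hom X C C" and d: "d \<in> Ex X C A" and fx: "epull X A e d = d"
  have C: "C \<in> Obj X" using hom_obj e by blast
  have ne: "neg e \<in> Hom X C C" using neg_hom[OF e] .
  have "epull X A (madd X (idm X C) (neg e)) d = eadd X C A d (epull X A (neg e) d)"
    using epull_madd[OF A id_hom[OF C] ne d] epull_id[OF C A d] by simp
  also have "\<dots> = eadd X C A (epull X A e d) (epull X A (neg e) d)" using fx by simp
  also have "\<dots> = epull X A (madd X e (neg e)) d" using epull_madd[OF A e ne d] by simp
  also have "\<dots> = ezero X C A" using add_neg[OF e] epull_zero[OF C A C d] by simp
  finally show ?thesis .
qed

lemma neg_add: "f \<in> Hom X A B \<Longrightarrow> g \<in> Hom X A B \<Longrightarrow> neg (madd X f g) = madd X (neg f) (neg g)"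
  unfolding neg_def using hom_kspace hom_obj by blast

lemma id_minus_id_minus: "e \<in> Hom X A A \<Longrightarrow> madd X (idm X A) (neg (madd X (idm X A) (neg e))) = e"
proof -
  assume e: "e \<in> Hom X A A"
  have A: "A \<in> Obj X" using hom_obj e by blast
  have "neg (madd X (idm X A) (neg e)) = madd X (neg (idm X A)) e"
    using neg_add[OF id_hom[OF A] neg_hom[OF e]] neg_neg[OF e] by simp
  then show ?thesis using e A add_assoc'[of "idm X A" "neg (idm X A)" e] by (simp add: Hom_iff)
qed

lemma etriD: "etri X A x B y C d \<Longrightarrow> A \<in> Obj X \<and> B \<in> Obj X \<and> C \<in> Obj X \<and>
     x \<in> Hom X A B \<and> y \<in> Hom X B C \<and> d \<in> Ex X C A \<and> rlz X C A d B x y"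
  unfolding etri_def by simp

lemmas realization' = realization[unfolded realization_axioms_def]

lemma rlz_etri: "rlz X C A d B x y \<Longrightarrow> etri X A x B y C d"
  using realization'[THEN conjunct1] by blast

lemma realize: "C \<in> Obj X \<Longrightarrow> A \<in> Obj X \<Longrightarrow> d \<in> Ex X C A \<Longrightarrow> \<exists>B x y. etri X A x B y C d"
  using realization'[THEN conjunct2, THEN conjunct1] rlz_etri by blast

lemma etri_equiv: "etri X A x B y C d \<Longrightarrow> etri X A x' B' y' C d \<Longrightarrow>
   \<exists>b. is_iso X B B' b \<and> cmp X b x = x' \<and> cmp X y' b = y"
  using realization'[THEN conjunct2, THEN conjunct2, THEN conjunct1]
  unfolding etri_def seq_equiv_def by blast

lemma etri_lift: "etri X A x B y C d \<Longrightarrow> etri X A' x' B' y' C' d' \<Longrightarrow> a \<in> Hom X A A' \<Longrightarrow> c \<in> Hom X C C' \<Longrightarrow>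
   epush X C a d = epull X A' c d' \<Longrightarrow> \<exists>b \<in> Hom X B B'. cmp X b x = cmp X x' a \<and> cmp X y' b = cmp X c y"
  using realization'[THEN conjunct2, THEN conjunct2, THEN conjunct2, THEN conjunct1] by blast

lemma etri_split: "is_biprod X A C P i1 i2 p1 p2 \<Longrightarrow> etri X A i1 P p2 C (ezero X C A)"
  using realization'[THEN conjunct2, THEN conjunct2, THEN conjunct2, THEN conjunct2, THEN conjunct1] rlz_etri
  by blast

lemma etri_biprod: "etri X A x B y C d \<Longrightarrow> etri X A' x' B' y' C' d' \<Longrightarrow>
   is_biprod X A A' PA iA1 iA2 pA1 pA2 \<Longrightarrow> is_biprod X B B' PB iB1 iB2 pB1 pB2 \<Longrightarrow>
   is_biprod X C C' PC iC1 iC2 pC1 pC2 \<Longrightarrow> \<exists>x'' y'' d''. etri X PA x'' PB y'' PC d''"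
  using realization'[THEN conjunct2, THEN conjunct2, THEN conjunct2, THEN conjunct2, THEN conjunct2] rlz_etri
  by meson

lemma etri_ET3: "etri X A x B y C d \<Longrightarrow> etri X A' x' B' y' C' d' \<Longrightarrow> a \<in> Hom X A A' \<Longrightarrow> b \<in> Hom X B B' \<Longrightarrow>
   cmp X x' a = cmp X b x \<Longrightarrow> \<exists>c \<in> Hom X C C'. cmp X c y = cmp X y' b \<and> epush X C a d = epull X A' c d'"
  using ET3[unfolded ET3_axioms_def, THEN conjunct1] by blast
lemma etri_ET3op: "etri X A x B y C d \<Longrightarrow> etri X A' x' B' y' C' d' \<Longrightarrow> b \<in> Hom X B B' \<Longrightarrow> c \<in> Hom X C C' \<Longrightarrow>
   cmp X c y = cmp X y' b \<Longrightarrow> \<exists>a \<in> Hom X A A'. cmp X x' a = cmp X b x \<and> epush X C a d = epull X A' c d'"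
  using ET3[unfolded ET3_axioms_def, THEN conjunct2] by blast

lemma etri_ET4: "etri X A f B f' D d \<Longrightarrow> etri X B g C g' F d' \<Longrightarrow>
        (\<exists>E h' dd e d''.
           etri X A (cmp X g f) C h' E d'' \<and>
           etri X D dd E e F (epush X F f' d') \<and>
           cmp X h' g = cmp X dd f' \<and> cmp X e h' = g' \<and>
           epull X A dd d'' = d \<and> epush X E f d'' = epull X B e d')"
  using ET4[unfolded ET4_axioms_def, THEN conjunct1] by blast

lemma etri_id_zero: "is_zero_obj X Z \<Longrightarrow> A \<in> Obj X \<Longrightarrow> etri X A (idm X A) A (mzero X A Z) Z (ezero X Z A)"
  using etri_split[OF biprod_zero_r] by blast
lemma etri_zero_id: "is_zero_obj X Z \<Longrightarrow> C \<in> Obj X \<Longrightarrow> etri X Z (mzero X Z C) C (idm X C) C (ezero X C Z)"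
  using etri_split[OF biprod_zero_l] by blast

lemma etri_cmp_zero: assumes t: "etri X A x B y C d" shows "cmp X y x = mzero X A C"
proof -
  note tt = etriD[OF t]
  obtain Z where Z: "is_zero_obj X Z" using has_zero by blast
  have zo: "Z \<in> Obj X" using zero_obj[OF Z] .
  obtain c where c: "c \<in> Hom X Z C" "cmp X c (mzero X A Z) = cmp X y x"
    using etri_ET3[OF etri_id_zero[OF Z tt[THEN conjunct1]] t id_hom[of A] tt[THEN conjunct2, THEN conjunct2, THEN conjunct2, THEN conjunct1]]
      tt by (auto simp: Hom_iff)
  then show ?thesis using tt zo by (simp add: Hom_iff)
qed

lemma etri_factor_inflation: assumes t: "etri X A x B y C d" and f: "f \<in> Hom X W B" and yf: "cmp X y f = mzero X W C"
  shows "\<exists>p \<in> Hom X W A. f = cmp X x p"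
proof -
  note tt = etriD[OF t]
  obtain Z where Z: "is_zero_obj X Z" using has_zero by blast
  have zo: "Z \<in> Obj X" using zero_obj[OF Z] .
  have W: "W \<in> Obj X" using hom_obj f by blast
  have "cmp X (mzero X Z C) (mzero X W Z) = cmp X y f" using yf zo W tt by (simp add: Hom_iff)
  then obtain a where "a \<in> Hom X W A" "cmp X x a = cmp X f (idm X W)"
    using etri_ET3op[OF etri_id_zero[OF Z W] t f zero_hom[OF zo, of C]] tt by blast
  then show ?thesis using f id_r by (metis)
qed

lemma etri_factor_deflation: assumes t: "etri X A x B y C d" and f: "f \<in> Hom X B W" and fx: "cmp X f x = mzero X A W"
  shows "\<exists>p \<in> Hom X C W. f = cmp X p y"
proof -
  note tt = etriD[OF t]
  obtain Z where Z: "is_zero_obj X Z" using has_zero by blast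
  have zo: "Z \<in> Obj X" using zero_obj[OF Z] .
  have W: "W \<in> Obj X" using hom_obj f by blast
  have "cmp X (mzero X Z W) (mzero X A Z) = cmp X f x" using fx zo W tt by (simp add: Hom_iff)
  then obtain c where "c \<in> Hom X C W" "cmp X c y = cmp X (idm X W) f"
    using etri_ET3[OF t etri_zero_id[OF Z W] zero_hom[OF _ zo, of A] f] tt by blast
  then show ?thesis using f id_l by (metis)
qed

lemma etri_extend_inflation: assumes t: "etri X A x B y C d" and f: "f \<in> Hom X A W" and fd: "epush X C f d = ezero X C W"
  shows "\<exists>g \<in> Hom X B W. f = cmp X g x"
proof -
  note tt = etriD[OF t]
  have W: "W \<in> Obj X" using hom_obj f by blast
  obtain P i1 i2 p1 p2 where P: "is_biprod X W C P i1 i2 p1 p2" using has_biprod W tt by blast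
  note pp = biprod_simps[OF P]
  have "epush X C f d = epull X W (idm X C) (ezero X C W)" using fd epull_id ezero_Ex W tt by metis
  then obtain b where b: "b \<in> Hom X B P" "cmp X b x = cmp X i1 f" "cmp X p2 b = cmp X (idm X C) y"
    using etri_lift[OF t etri_split[OF P] f id_hom] tt by blast
  have "cmp X (cmp X p1 b) x = f" using b f pp tt cmp_assoc'[of x b p1, symmetric] by (simp add: Hom_iff)
  moreover have "cmp X p1 b \<in> Hom X B W" using b pp by (simp add: Hom_iff)
  ultimately show ?thesis by metis
qed

lemma etri_lift_deflation: assumes t: "etri X A x B y C d" and c: "c \<in> Hom X W C" and cd: "epull X A c d = ezero X W A"
  shows "\<exists>h \<in> Hom X W B. c = cmp X y h"
proof -
  note tt = etriD[OF t]
  have W: "W \<in> Obj X" using hom_obj c by blast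
  obtain P i1 i2 p1 p2 where P: "is_biprod X A W P i1 i2 p1 p2" using has_biprod W tt by blast
  note pp = biprod_simps[OF P]
  have "epush X W (idm X A) (ezero X W A) = epull X A c d" using cd epush_id ezero_Ex W tt by metis
  then obtain b where b: "b \<in> Hom X P B" "cmp X b i1 = cmp X x (idm X A)" "cmp X y b = cmp X c p2"
    using etri_lift[OF etri_split[OF P] t id_hom c] tt by blast
  have "cmp X y (cmp X b i2) = c" using b c pp tt cmp_assoc'[of i2 b y] by (simp add: Hom_iff)
  moreover have "cmp X b i2 \<in> Hom X W B" using b pp by (simp add: Hom_iff)
  ultimately show ?thesis by metis
qed

(* In the three lemmas below, 1 - e annihilates the triangle on both sides, hence factors
   through it twice and squares to zero. *)
lemma etri_endo_mid_iso: assumes t: "etri X A x B y C d" and e: "e \<in> Hom X B B"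
  and ex: "cmp X e x = x" and ye: "cmp X y e = y" shows "is_iso X B B e"
proof -
  note tt = etriD[OF t]
  define f where "f = madd X (idm X B) (neg e)"
  have fh: "f \<in> Hom X B B" unfolding f_def using e tt by (simp add: Hom_iff)
  have "cmp X f x = mzero X A B" unfolding f_def using e tt ex by (simp add: Hom_iff)
  then obtain q where q: "q \<in> Hom X C B" "f = cmp X q y" using etri_factor_deflation[OF t fh] by blast
  have "cmp X y f = mzero X B C" unfolding f_def using e tt ye by (simp add: Hom_iff)
  then obtain p where p: "p \<in> Hom X B A" "f = cmp X x p" using etri_factor_inflation[OF t fh] by blast
  have "cmp X f f = cmp X (cmp X q (cmp X y x)) p"
    using p q tt cmp_assoc'[of p x "cmp X q y"] cmp_assoc'[of x y q] by (simp add: Hom_iff)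
  then have "cmp X f f = mzero X B B" using etri_cmp_zero[OF t] p q tt by (simp add: Hom_iff)
  then have "is_iso X B B (madd X (idm X B) (neg f))" using id_minus_nilpotent_iso fh by blast
  then show ?thesis unfolding f_def using id_minus_id_minus[OF e] by simp
qed

lemma etri_endo_fst_iso: assumes t: "etri X A x B y C d" and e: "e \<in> Hom X A A"
  and xe: "cmp X x e = x" and ed: "epush X C e d = d" shows "is_iso X A A e"
proof -
  note tt = etriD[OF t]
  define f where "f = madd X (idm X A) (neg e)"
  have fh: "f \<in> Hom X A A" unfolding f_def using e tt by (simp add: Hom_iff)
  have xf: "cmp X x f = mzero X A B" unfolding f_def using e tt xe by (simp add: Hom_iff)
  have "epush X C f d = ezero X C A" unfolding f_def using epush_id_minus_fixed e tt ed by blast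
  then obtain g where g: "g \<in> Hom X B A" "f = cmp X g x" using etri_extend_inflation[OF t fh] by blast
  have "cmp X f f = cmp X g (cmp X x f)" using g tt fh cmp_assoc'[of f x g] by (simp add: Hom_iff)
  then have "cmp X f f = mzero X A A" using xf g tt by (simp add: Hom_iff)
  then have "is_iso X A A (madd X (idm X A) (neg f))" using id_minus_nilpotent_iso fh by blast
  then show ?thesis unfolding f_def using id_minus_id_minus[OF e] by simp
qed

lemma etri_endo_trd_iso: assumes t: "etri X A x B y C d" and e: "e \<in> Hom X C C"
  and ey: "cmp X e y = y" and ed: "epull X A e d = d" shows "is_iso X C C e"
proof -
  note tt = etriD[OF t]
  define f where "f = madd X (idm X C) (neg e)"
  have fh: "f \<in> Hom X C C" unfolding f_def using e tt by (simp add: Hom_iff)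
  have fy: "cmp X f y = mzero X B C" unfolding f_def using e tt ey by (simp add: Hom_iff)
  have "epull X A f d = ezero X C A" unfolding f_def using epull_id_minus_fixed e tt ed by blast
  then obtain h where h: "h \<in> Hom X C B" "f = cmp X y h" using etri_lift_deflation[OF t fh] by blast
  have "cmp X f f = cmp X (cmp X f y) h" using h tt fh cmp_assoc'[of h y f] by (simp add: Hom_iff)
  then have "cmp X f f = mzero X C C" using fy h tt by (simp add: Hom_iff)
  then have "is_iso X C C (madd X (idm X C) (neg f))" using id_minus_nilpotent_iso fh by blast
  then show ?thesis unfolding f_def using id_minus_id_minus[OF e] by simp
qed

lemma Ex_zero_obj_snd: "is_zero_obj X A \<Longrightarrow> C \<in> Obj X \<Longrightarrow> d \<in> Ex X C A \<Longrightarrow> d = ezero X C A"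
  using epush_id epush_zero zero_obj unfolding is_zero_obj_def by metis
lemma Ex_zero_obj_fst: "is_zero_obj X C \<Longrightarrow> A \<in> Obj X \<Longrightarrow> d \<in> Ex X C A \<Longrightarrow> d = ezero X C A"
  using epull_id epull_zero zero_obj unfolding is_zero_obj_def by metis

lemma etri_fst_zero_iso: assumes t: "etri X Z x B y C d" and Z: "is_zero_obj X Z" shows "is_iso X B C y"
proof -
  note tt = etriD[OF t]
  have "d = ezero X C Z" using Ex_zero_obj_snd Z tt by blast
  then obtain b where "is_iso X B C b" "cmp X (idm X C) b = y"
    using etri_equiv[OF t] etri_zero_id[OF Z] tt by blast
  then show ?thesis using iso_hom tt by (metis id_l)
qed

lemma etri_trd_zero_iso: assumes t: "etri X A x B y Z d" and Z: "is_zero_obj X Z" shows "is_iso X A B x"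
proof -
  note tt = etriD[OF t]
  have "d = ezero X Z A" using Ex_zero_obj_fst Z tt by blast
  then obtain b where "is_iso X A B b" "cmp X b (idm X A) = x"
    using etri_equiv[OF etri_id_zero[OF Z] ] t tt by blast
  then show ?thesis using iso_hom tt by (metis id_r)
qed

lemma etri_inflation_iso_trd_zero: assumes t: "etri X A x B y C d" and x: "is_iso X A B x" shows "is_zero_obj X C"
proof -
  note tt = etriD[OF t]
  obtain Z where Z: "is_zero_obj X Z" using has_zero by blast
  obtain x' where x': "x' \<in> Hom X B A" "cmp X x' x = idm X A" using x unfolding is_iso_def by blast
  obtain c where c: "c \<in> Hom X C Z" "epush X C (idm X A) d = epull X A c (ezero X Z A)"
    using etri_ET3[OF t etri_id_zero[OF Z] id_hom x'(1)] tt x' by (auto simp: Hom_iff)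
  have d0: "d = ezero X C A" using c epush_id epull_ezero tt by metis
  obtain P i1 i2 p1 p2 where P: "is_biprod X A C P i1 i2 p1 p2" using has_biprod tt by blast
  note pp = biprod_simps[OF P]
  obtain b where b: "is_iso X B P b" "cmp X b x = i1" "cmp X p2 b = y"
    using etri_equiv[OF t] etri_split[OF P] d0 by blast
  have i1: "is_iso X A P i1" using iso_comp[OF x b(1)] b(2) by simp
  obtain i1' where i1': "is_iso X P A i1'" "cmp X i1' i1 = idm X A" "cmp X i1 i1' = idm X P" using iso_inv[OF i1] by blast
  have "p1 = cmp X (idm X A) i1'" using cmp_right_inverse[OF iso_hom[OF i1'(1)] iso_hom[OF i1] i1'(3), of p1 A] pp by (simp add: Hom_iff)
  then have "p1 = i1'" using iso_hom[OF i1'(1)] by (simp add: Hom_iff)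
  then have p1i: "is_iso X P A p1" using i1' by simp
  have "i2 \<in> Hom X C P" using pp by (simp add: Hom_iff)
  then have "i2 = mzero X C P" using iso_cancel_zero[OF p1i, of i2 C] pp(18) by simp
  then have "idm X C = mzero X C C" using pp by (simp add: Hom_iff)
  then show ?thesis using zero_by_id tt by blast
qed

lemma etri_deflation_iso_fst_zero: assumes t: "etri X A x B y C d" and y: "is_iso X B C y" shows "is_zero_obj X A"
proof -
  note tt = etriD[OF t]
  obtain Z where Z: "is_zero_obj X Z" using has_zero by blast
  obtain y' where y': "y' \<in> Hom X C B" "cmp X y y' = idm X C" using y unfolding is_iso_def by blast
  obtain a where a: "a \<in> Hom X Z A" "epush X C a (ezero X C Z) = epull X A (idm X C) d"
    using etri_ET3op[OF etri_zero_id[OF Z] t y'(1) id_hom] tt y' zero_obj[OF Z] by (auto simp: Hom_iff)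
  have d0: "d = ezero X C A" using a epull_id epush_ezero tt by metis
  obtain P i1 i2 p1 p2 where P: "is_biprod X A C P i1 i2 p1 p2" using has_biprod tt by blast
  note pp = biprod_simps[OF P]
  obtain b where b: "is_iso X B P b" "cmp X b x = i1" "cmp X p2 b = y"
    using etri_equiv[OF t] etri_split[OF P] d0 by blast
  obtain b' where b': "is_iso X P B b'" "cmp X b b' = idm X P" using iso_inv[OF b(1)] by blast
  have "cmp X y b' = p2" using b b' pp tt iso_hom cmp_assoc'[of b' b p2] by (simp add: Hom_iff)
  then have p2: "is_iso X P C p2" using iso_comp[OF b'(1) y] by simp
  have "i1 \<in> Hom X A P" using pp by (simp add: Hom_iff)
  then have "i1 = mzero X A P" using iso_cancel_zero[OF p2, of i1 A] pp(19) by simp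
  then have "idm X A = mzero X A A" using pp by (simp add: Hom_iff)
  then show ?thesis using zero_by_id tt by blast
qed

lemma etri_fst_zero: "etri X A x Z y Z' d \<Longrightarrow> is_zero_obj X Z \<Longrightarrow> is_zero_obj X Z' \<Longrightarrow> is_zero_obj X A"
  using etri_trd_zero_iso zero_iso_from by blast
lemma etri_trd_zero: "etri X Z x Z' y C d \<Longrightarrow> is_zero_obj X Z \<Longrightarrow> is_zero_obj X Z' \<Longrightarrow> is_zero_obj X C"
  using etri_fst_zero_iso zero_iso_to by blast

lemma etri_fst_cmp_iso:
  assumes t: "etri X A x B y C d" and t2: "etri X A2 x2 B2 y2 C2 d2"
    and a: "a \<in> Hom X A A2" "cmp X x2 a = cmp X b x" "epush X C a d = epull X A2 c d2"
    and a': "a' \<in> Hom X A2 A" "cmp X x a' = cmp X b' x2" "epush X C2 a' d2 = epull X A c' d"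
    and b: "b \<in> Hom X B B2" "b' \<in> Hom X B2 B" "cmp X b' b = idm X B"
    and c: "c \<in> Hom X C C2" "c' \<in> Hom X C2 C" "cmp X c' c = idm X C"
  shows "is_iso X A A (cmp X a' a)"
proof (rule etri_endo_fst_iso[OF t])
  note tt = etriD[OF t] and tt2 = etriD[OF t2]
  show "cmp X a' a \<in> Hom X A A" using a a' comp_hom by blast
  have "cmp X x (cmp X a' a) = cmp X (cmp X x a') a" using cmp_assoc[OF a(1) a'(1)] tt by blast
  also have "\<dots> = cmp X b' (cmp X x2 a)" using a'(2) cmp_assoc[OF a(1) _ b(2)] tt2 by metis
  also have "\<dots> = cmp X (cmp X b' b) x" using a(2) cmp_assoc[OF _ b(1) b(2)] tt by metis
  finally show "cmp X x (cmp X a' a) = x" using b(3) id_l tt by metis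
  have "epush X C (cmp X a' a) d = epush X C a' (epush X C a d)" using epush_cmp[OF _ a(1) a'(1)] tt by blast
  also have "\<dots> = epush X C a' (epull X A2 c d2)" using a(3) by simp
  also have "\<dots> = epull X A c (epush X C2 a' d2)" using epush_epull a'(1) c(1) tt2 by blast
  also have "\<dots> = epull X A c (epull X A c' d)" using a' by simp
  also have "\<dots> = epull X A (cmp X c' c) d" using epull_cmp[OF _ c(2) c(1)] tt by simp
  finally show "epush X C (cmp X a' a) d = d" using c(3) epull_id tt by simp
qed

lemma etri_fst_isomorphic: assumes t: "etri X A x B y C d" and t2: "etri X A2 x2 B2 y2 C2 d2"
  and b: "is_iso X B B2 b" and c: "is_iso X C C2 c" and com: "cmp X c y = cmp X y2 b"
  shows "isomorphic X A A2"
proof -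
  note tt = etriD[OF t] and tt2 = etriD[OF t2]
  obtain b' where b': "b' \<in> Hom X B2 B" "cmp X b' b = idm X B" "cmp X b b' = idm X B2" using b unfolding is_iso_def by blast
  obtain c' where c': "c' \<in> Hom X C2 C" "cmp X c' c = idm X C" "cmp X c c' = idm X C2" using c unfolding is_iso_def by blast
  have bh: "b \<in> Hom X B B2" and ch: "c \<in> Hom X C C2" using b c iso_hom by auto
  obtain a where a: "a \<in> Hom X A A2" "cmp X x2 a = cmp X b x" "epush X C a d = epull X A2 c d2"
    using etri_ET3op[OF t t2 bh ch com] by blast
  have com': "cmp X c' y2 = cmp X y b'"
  proof (rule cmp_right_inverse[OF b'(1) bh b'(3)])
    show "cmp X c' y2 \<in> Hom X B2 C" using c' tt2 comp_hom by blast
    have "cmp X (cmp X c' y2) b = cmp X c' (cmp X y2 b)" using c' tt2 bh cmp_assoc'[of b y2 c'] by (simp add: Hom_iff)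
    also have "\<dots> = cmp X (cmp X c' c) y" using com c' tt ch cmp_assoc'[of y c c'] by (simp add: Hom_iff)
    finally show "cmp X (cmp X c' y2) b = y" using c' tt by (simp add: Hom_iff)
  qed
  obtain a' where a': "a' \<in> Hom X A2 A" "cmp X x a' = cmp X b' x2" "epush X C2 a' d2 = epull X A c' d"
    using etri_ET3op[OF t2 t b'(1) c'(1) com'] by blast
  have "is_iso X A A (cmp X a' a)"
    by (rule etri_fst_cmp_iso[OF t t2 a a' bh b'(1,2) ch c'(1,2)])
  moreover have "is_iso X A2 A2 (cmp X a a')"
    by (rule etri_fst_cmp_iso[OF t2 t a' a b'(1) bh b'(3) c'(1) ch c'(3)])
  ultimately show ?thesis unfolding isomorphic_def using iso_of_iso_cmps[OF a(1) a'(1)] tt tt2 by blast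
qed

lemma etri_trd_cmp_iso:
  assumes t: "etri X A x B y C d" and t2: "etri X A2 x2 B2 y2 C2 d2"
    and c: "c \<in> Hom X C C2" "cmp X c y = cmp X y2 b" "epush X C a d = epull X A2 c d2"
    and c': "c' \<in> Hom X C2 C" "cmp X c' y2 = cmp X y b'" "epush X C2 a' d2 = epull X A c' d"
    and a: "a \<in> Hom X A A2" "a' \<in> Hom X A2 A" "cmp X a' a = idm X A"
    and b: "b \<in> Hom X B B2" "b' \<in> Hom X B2 B" "cmp X b' b = idm X B"
  shows "is_iso X C C (cmp X c' c)"
proof (rule etri_endo_trd_iso[OF t])
  note tt = etriD[OF t] and tt2 = etriD[OF t2]
  show "cmp X c' c \<in> Hom X C C" using c c' comp_hom by blast
  have "cmp X (cmp X c' c) y = cmp X c' (cmp X c y)" using cmp_assoc[OF _ c(1) c'(1)] tt by metis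
  also have "\<dots> = cmp X (cmp X c' y2) b" using c(2) cmp_assoc[OF b(1) _ c'(1)] tt2 by metis
  also have "\<dots> = cmp X y (cmp X b' b)" using c'(2) cmp_assoc[OF b(1) b(2)] tt by metis
  finally show "cmp X (cmp X c' c) y = y" using b(3) id_r tt by metis
  have "epull X A (cmp X c' c) d = epull X A c (epull X A c' d)" using epull_cmp[OF _ c'(1) c(1)] tt by blast
  also have "\<dots> = epull X A c (epush X C2 a' d2)" using c' by simp
  also have "\<dots> = epush X C a' (epull X A2 c d2)" using epush_epull a(2) c(1) tt2 by metis
  also have "\<dots> = epush X C a' (epush X C a d)" using c by simp
  also have "\<dots> = epush X C (cmp X a' a) d" using epush_cmp[OF _ a(1) a(2)] tt by simp
  finally show "epull X A (cmp X c' c) d = d" using a(3) epush_id tt by simp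
qed

lemma etri_trd_isomorphic: assumes t: "etri X A x B y C d" and t2: "etri X A2 x2 B2 y2 C2 d2"
  and a: "is_iso X A A2 a" and b: "is_iso X B B2 b" and com: "cmp X x2 a = cmp X b x"
  shows "isomorphic X C C2"
proof -
  note tt = etriD[OF t] and tt2 = etriD[OF t2]
  obtain b' where b': "b' \<in> Hom X B2 B" "cmp X b' b = idm X B" "cmp X b b' = idm X B2" using b unfolding is_iso_def by blast
  obtain a' where a': "a' \<in> Hom X A2 A" "cmp X a' a = idm X A" "cmp X a a' = idm X A2" using a unfolding is_iso_def by blast
  have bh: "b \<in> Hom X B B2" and ah: "a \<in> Hom X A A2" using b a iso_hom by auto
  obtain c where c: "c \<in> Hom X C C2" "cmp X c y = cmp X y2 b" "epush X C a d = epull X A2 c d2"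
    using etri_ET3[OF t t2 ah bh com] by blast
  have com': "cmp X x a' = cmp X b' x2"
  proof -
    have "cmp X x a' = cmp X (cmp X (cmp X b' b) x) a'" using b'(2) id_l tt by metis
    also have "\<dots> = cmp X (cmp X b' (cmp X b x)) a'" using cmp_assoc[OF _ bh b'(1)] tt by metis
    also have "\<dots> = cmp X b' (cmp X (cmp X x2 a) a')" using com cmp_assoc[OF a'(1) _ b'(1)] comp_hom[OF ah] tt2 by metis
    also have "\<dots> = cmp X b' (cmp X x2 (cmp X a a'))" using cmp_assoc[OF a'(1) ah] tt2 by metis
    finally show ?thesis using a'(3) id_r tt2 by metis
  qed
  obtain c' where c': "c' \<in> Hom X C2 C" "cmp X c' y2 = cmp X y b'" "epush X C2 a' d2 = epull X A c' d"
    using etri_ET3[OF t2 t a'(1) b'(1) com'] by blast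
  have "is_iso X C C (cmp X c' c)"
    by (rule etri_trd_cmp_iso[OF t t2 c c' ah a'(1,2) bh b'(1,2)])
  moreover have "is_iso X C2 C2 (cmp X c c')"
    by (rule etri_trd_cmp_iso[OF t2 t c' c a'(1) ah a'(3) b'(1) bh b'(3)])
  ultimately show ?thesis unfolding isomorphic_def using iso_of_iso_cmps[OF c(1) c'(1)] tt tt2 by blast
qed

(* Realize s_* d; comparing with r_* s_* d = d yields an endomorphism of Y fixing x and y,
   which is invertible. *)
lemma etri_summand_fst: assumes t: "etri X P x Y y Q d" and s: "s \<in> Hom X P Z" and r: "r \<in> Hom X Z P"
  and rs: "cmp X r s = idm X P"
  shows "\<exists>x' X' y' d'. etri X Z x' X' y' Q d' \<and> summand Y X'"
proof -
  note tt = etriD[OF t]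
  have Z: "Z \<in> Obj X" using hom_obj s by blast
  have d'E: "epush X Q s d \<in> Ex X Q Z" using epush_Ex[OF _ s] tt by blast
  obtain X' x' y' where t': "etri X Z x' X' y' Q (epush X Q s d)" using realize[OF _ Z d'E] tt by blast
  note tt' = etriD[OF t']
  have "epush X Q s d = epull X Z (idm X Q) (epush X Q s d)" using epull_id tt Z d'E by metis
  then obtain b where b: "b \<in> Hom X Y X'" "cmp X b x = cmp X x' s" "cmp X y' b = cmp X (idm X Q) y"
    using etri_lift[OF t t' s id_hom] tt by blast
  have "epush X Q r (epush X Q s d) = epull X P (idm X Q) d"
    using epush_cmp[OF _ s r, of Q d, symmetric] rs epush_id epull_id tt by metis
  then obtain c where c: "c \<in> Hom X X' Y" "cmp X c x' = cmp X x r" "cmp X y c = cmp X (idm X Q) y'"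
    using etri_lift[OF t' t r id_hom] tt by blast
  have eh: "cmp X c b \<in> Hom X Y Y" using comp_hom b c by blast
  have ex: "cmp X (cmp X c b) x = x"
  proof -
    have "cmp X (cmp X c b) x = cmp X c (cmp X b x)" using cmp_assoc[OF _ b(1) c(1)] tt by metis
    also have "\<dots> = cmp X (cmp X c x') s" using b(2) cmp_assoc[OF s _ c(1)] tt' by metis
    also have "\<dots> = cmp X x (cmp X r s)" using c(2) cmp_assoc[OF s r] tt by metis
    finally show ?thesis using rs id_r tt by metis
  qed
  have ye: "cmp X y (cmp X c b) = y"
  proof -
    have "cmp X y (cmp X c b) = cmp X (cmp X y c) b" using cmp_assoc[OF b(1) c(1)] tt by metis
    also have "\<dots> = cmp X y' b" using c(3) id_l tt' by metis
    finally show ?thesis using b(3) id_l tt by metis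
  qed
  have e: "is_iso X Y Y (cmp X c b)" using etri_endo_mid_iso[OF t eh ex ye] .
  obtain e' where e': "e' \<in> Hom X Y Y" "cmp X e' (cmp X c b) = idm X Y" using e unfolding is_iso_def by blast
  have "cmp X (cmp X e' c) b = idm X Y" using e' cmp_assoc[OF b(1) c(1) e'(1)] by simp
  then have "summand Y X'" unfolding summand_def using b(1) comp_hom[OF c(1) e'(1)] by blast
  then show ?thesis using t' by blast
qed

definition biprod_closed :: "'o set \<Rightarrow> bool" where
  "biprod_closed U \<longleftrightarrow> (\<forall>B1 B2 R j1 j2 q1 q2. B1 \<in> U \<and> B2 \<in> U \<and> is_biprod X B1 B2 R j1 j2 q1 q2 \<longrightarrow> R \<in> U)"

lemma ext_set_biprod:
  assumes c1: "biprod_closed U1"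
    and c2: "biprod_closed U2"
    and o1: "U1 \<subseteq> Obj X" and o2: "U2 \<subseteq> Obj X"
    and A1: "A1 \<in> ext_set U1 U2" and A2: "A2 \<in> ext_set U1 U2" and P: "is_biprod X A1 A2 P i1 i2 p1 p2"
  shows "P \<in> ext_set U1 U2"
proof -
  obtain V1 V2 x y d where t1: "V1 \<in> U1" "V2 \<in> U2" "etri X V1 x A1 y V2 d" using A1 unfolding ext_set_def by blast
  obtain V1' V2' x' y' d' where t2: "V1' \<in> U1" "V2' \<in> U2" "etri X V1' x' A2 y' V2' d'" using A2 unfolding ext_set_def by blast
  obtain PV1 a1 a2 a3 a4 where pv1: "is_biprod X V1 V1' PV1 a1 a2 a3 a4" using has_biprod o1 t1 t2 by blast
  obtain PV2 b1 b2 b3 b4 where pv2: "is_biprod X V2 V2' PV2 b1 b2 b3 b4" using has_biprod o2 t1 t2 by blast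
  obtain x'' y'' d'' where "etri X PV1 x'' P y'' PV2 d''" using etri_biprod[OF t1(3) t2(3) pv1 P pv2] by blast
  moreover have "PV1 \<in> U1" using c1 t1 t2 pv1 unfolding biprod_closed_def by blast
  moreover have "PV2 \<in> U2" using c2 t1 t2 pv2 unfolding biprod_closed_def by blast
  ultimately show ?thesis unfolding ext_set_def using biprodD[OF P] by blast
qed

lemma ext_set_zero: "is_zero_obj X Z \<Longrightarrow> (\<And>Z'. is_zero_obj X Z' \<Longrightarrow> Z' \<in> U1) \<Longrightarrow> (\<And>Z'. is_zero_obj X Z' \<Longrightarrow> Z' \<in> U2)
   \<Longrightarrow> Z \<in> ext_set U1 U2"
  unfolding ext_set_def using etri_id_zero zero_obj by blast

lemma fsums_ext_set:
  assumes c1: "biprod_closed U1"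
    and c2: "biprod_closed U2"
    and o1: "U1 \<subseteq> Obj X" and o2: "U2 \<subseteq> Obj X"
    and z1: "\<And>Z'. is_zero_obj X Z' \<Longrightarrow> Z' \<in> U1" and z2: "\<And>Z'. is_zero_obj X Z' \<Longrightarrow> Z' \<in> U2"
  shows "Z \<in> fsums X (ext_set U1 U2 \<inter> Obj X) \<Longrightarrow> Z \<in> ext_set U1 U2"
proof (induction rule: fsums.induct)
  case (zero Z) then show ?case using ext_set_zero z1 z2 by blast
next
  case (step Z U P i1 i2 p1 p2)
  have "U \<in> ext_set U1 U2" using step by blast
  then show ?case using ext_set_biprod[OF c1 c2 o1 o2] step by blast
qed

lemma gen_Suc_summand:
  assumes n: "n \<ge> 1" and A: "A \<in> gen X T (Suc n)"
  shows "\<exists>Z. summand A Z \<and> Z \<in> ext_set (addc X {T}) (gen X T n)"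
proof -
  have "A \<in> addc X (ext_set (addc X {T}) (gen X T n))" using A n diamond_ext_set by simp
  then obtain Z where Z: "Z \<in> fsums X (ext_set (addc X {T}) (gen X T n) \<inter> Obj X)" "summand A Z"
    unfolding addc_iff by blast
  have "Z \<in> ext_set (addc X {T}) (gen X T n)"
  proof (rule fsums_ext_set[OF _ _ _ _ _ _ Z(1)])
    show "biprod_closed (addc X {T})" unfolding biprod_closed_def using addc_biprod by blast
    show "biprod_closed (gen X T n)" unfolding biprod_closed_def using gen_biprod n by blast
    show "addc X {T} \<subseteq> Obj X" using addc_obj by blast
    show "gen X T n \<subseteq> Obj X" using gen_obj by blast
    show "\<And>Z'. is_zero_obj X Z' \<Longrightarrow> Z' \<in> addc X {T}" using addc_zero by blast
    show "\<And>Z'. is_zero_obj X Z' \<Longrightarrow> Z' \<in> gen X T n" using gen_zero n by blast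
  qed
  then show ?thesis using Z(2) by blast
qed

lemma ext_set_gen: "n \<ge> 1 \<Longrightarrow> ext_set (addc X {T}) (gen X T n) \<subseteq> gen X T (Suc n)"
proof
  fix A assume n: "n \<ge> 1" and A: "A \<in> ext_set (addc X {T}) (gen X T n)"
  have "A \<in> Obj X" using A unfolding ext_set_def by blast
  then have "A \<in> addc X (ext_set (addc X {T}) (gen X T n))" using addc_base A by blast
  then show "A \<in> gen X T (Suc n)" using n diamond_ext_set by simp
qed

(* gen T a diamond gen T b is contained in gen T (a + b); the induction step uses (ET4). *)
lemma gen_extension:
  assumes b: "b \<ge> 1" and Q: "Q \<in> gen X T b"
  shows "a \<ge> 1 \<Longrightarrow> P \<in> gen X T a \<Longrightarrow> etri X P x Y y Q d \<Longrightarrow> Y \<in> gen X T (a + b)"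
proof (induction a arbitrary: P x Y y d rule: nat_induct_at_least)
  case base
  then have "Y \<in> Obj X" "P \<in> addc X {T}" using etriD by auto
  then have "Y \<in> ext_set (addc X {T}) (gen X T b)" unfolding ext_set_def using Q base by blast
  then have "Y \<in> gen X T (Suc b)" using ext_set_gen[OF b] by blast
  then show ?case by simp
next
  case (Suc a)
  obtain Z where Z: "summand P Z" "Z \<in> ext_set (addc X {T}) (gen X T a)"
    using gen_Suc_summand[OF Suc.hyps(1)] Suc.prems(1) by blast
  obtain s r where sr: "s \<in> Hom X P Z" "r \<in> Hom X Z P" "cmp X r s = idm X P" using Z(1) unfolding summand_def by blast
  obtain x' X' y' d' where t': "etri X Z x' X' y' Q d'" "summand Y X'" using etri_summand_fst[OF Suc.prems(2) sr] by blast
  obtain V P' v w e where V: "V \<in> addc X {T}" "P' \<in> gen X T a" "etri X V v Z w P' e"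
    using Z(2) unfolding ext_set_def by blast
  obtain E h' dd e' d'' where E: "etri X V (cmp X x' v) X' h' E d''" "etri X P' dd E e' Q (epush X Q w d')"
    using etri_ET4[OF V(3) t'(1)] by blast
  have "E \<in> gen X T (a + b)" using Suc.IH[OF V(2) E(2)] .
  then have "X' \<in> ext_set (addc X {T}) (gen X T (a + b))" unfolding ext_set_def using V(1) E(1) etriD by blast
  then have "X' \<in> gen X T (Suc (a + b))" using ext_set_gen[of "a+b"] Suc.hyps by auto
  then have "Y \<in> gen X T (Suc (a + b))" using gen_summand[OF _ t'(2), of "Suc (a+b)"] by simp
  then show ?case by simp
qed

end

section \<open>Functors and extension dimension\<close>

locale additive_fun = X: additive_kcat X + Y: additive_kcat Y
  for X :: "('o1,'m1,'e1,'k::field) ecat" and Y :: "('o2,'m2,'e2,'k) ecat" +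
  fixes Fo :: "'o1 \<Rightarrow> 'o2" and Fm :: "'m1 \<Rightarrow> 'm2"
  assumes af: "additive_functor X Y Fo Fm"
begin

lemma F_obj: "A \<in> Obj X \<Longrightarrow> Fo A \<in> Obj Y" using af unfolding additive_functor_def by blast
lemma F_id: "A \<in> Obj X \<Longrightarrow> Fm (idm X A) = idm Y (Fo A)" using af unfolding additive_functor_def by blast
lemma F_hom: "f \<in> Hom X A B \<Longrightarrow> Fm f \<in> Hom Y (Fo A) (Fo B)" using af unfolding additive_functor_def by blast
lemma F_cmp: "f \<in> Hom X A B \<Longrightarrow> g \<in> Hom X B C \<Longrightarrow> Fm (cmp X g f) = cmp Y (Fm g) (Fm f)"
  using af unfolding additive_functor_def by blast
lemma F_add: "f \<in> Hom X A B \<Longrightarrow> g \<in> Hom X A B \<Longrightarrow> Fm (madd X f g) = madd Y (Fm f) (Fm g)"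
  using af unfolding additive_functor_def by blast

lemma F_zero: "A \<in> Obj X \<Longrightarrow> B \<in> Obj X \<Longrightarrow> Fm (mzero X A B) = mzero Y (Fo A) (Fo B)"
proof -
  assume o: "A \<in> Obj X" "B \<in> Obj X"
  have z: "mzero X A B \<in> Hom X A B" using X.zero_hom o by blast
  have fz: "Fm (mzero X A B) \<in> Hom Y (Fo A) (Fo B)" using F_hom[OF z] .
  have z': "mzero Y (Fo A) (Fo B) \<in> Hom Y (Fo A) (Fo B)" using Y.zero_hom F_obj o by blast
  have "madd Y (Fm (mzero X A B)) (Fm (mzero X A B)) = Fm (mzero X A B)"
    using F_add[OF z z] X.add_zero[OF z] by simp
  also have "\<dots> = madd Y (mzero Y (Fo A) (Fo B)) (Fm (mzero X A B))" using Y.zero_add[OF fz] by simp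
  finally show ?thesis using Y.add_cancel[OF fz z' fz] by blast
qed

lemma F_zero_obj: "is_zero_obj X Z \<Longrightarrow> is_zero_obj Y (Fo Z)"
  unfolding is_zero_obj_def using F_id F_zero F_obj by metis

lemma F_iso: "is_iso X A B f \<Longrightarrow> is_iso Y (Fo A) (Fo B) (Fm f)"
proof -
  assume f: "is_iso X A B f"
  then obtain g where g: "g \<in> Hom X B A" "cmp X g f = idm X A" "cmp X f g = idm X B" "f \<in> Hom X A B"
    unfolding is_iso_def by blast
  have "cmp Y (Fm g) (Fm f) = idm Y (Fo A)" "cmp Y (Fm f) (Fm g) = idm Y (Fo B)"
    using F_cmp g F_id X.hom_obj by metis+
  then show ?thesis unfolding is_iso_def using F_hom g by blast
qed

lemma F_isomorphic: "isomorphic X A B \<Longrightarrow> isomorphic Y (Fo A) (Fo B)"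
  unfolding isomorphic_def using F_iso F_obj by blast

lemma F_biprod: "is_biprod X A B P i1 i2 p1 p2 \<Longrightarrow> is_biprod Y (Fo A) (Fo B) (Fo P) (Fm i1) (Fm i2) (Fm p1) (Fm p2)"
proof -
  assume b: "is_biprod X A B P i1 i2 p1 p2"
  note bb = X.biprodD[OF b]
  have h: "i1 \<in> Hom X A P" "i2 \<in> Hom X B P" "p1 \<in> Hom X P A" "p2 \<in> Hom X P B" using bb by auto
  have "Fm (madd X (cmp X i1 p1) (cmp X i2 p2)) = madd Y (Fm (cmp X i1 p1)) (Fm (cmp X i2 p2))"
    using F_add[OF X.comp_hom[OF h(3) h(1)] X.comp_hom[OF h(4) h(2)]] .
  also have "\<dots> = madd Y (cmp Y (Fm i1) (Fm p1)) (cmp Y (Fm i2) (Fm p2))"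
    using F_cmp[OF h(3) h(1)] F_cmp[OF h(4) h(2)] by simp
  finally have 1: "madd Y (cmp Y (Fm i1) (Fm p1)) (cmp Y (Fm i2) (Fm p2)) = idm Y (Fo P)"
    using bb F_id by simp
  have "cmp Y (Fm p1) (Fm i1) = idm Y (Fo A)" using F_cmp[OF h(1) h(3)] bb F_id by simp
  moreover have "cmp Y (Fm p2) (Fm i2) = idm Y (Fo B)" using F_cmp[OF h(2) h(4)] bb F_id by simp
  moreover have "cmp Y (Fm p1) (Fm i2) = mzero Y (Fo B) (Fo A)" using F_cmp[OF h(2) h(3)] bb F_zero by simp
  moreover have "cmp Y (Fm p2) (Fm i1) = mzero Y (Fo A) (Fo B)" using F_cmp[OF h(1) h(4)] bb F_zero by simp
  ultimately show ?thesis unfolding is_biprod_def using 1 bb F_obj F_hom h by blast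
qed

lemma F_summand: "X.summand A B \<Longrightarrow> Y.summand (Fo A) (Fo B)"
proof -
  assume "X.summand A B"
  then obtain s r where sr: "s \<in> Hom X A B" "r \<in> Hom X B A" "cmp X r s = idm X A" unfolding X.summand_def by blast
  have "cmp Y (Fm r) (Fm s) = idm Y (Fo A)" using F_cmp[OF sr(1) sr(2)] sr(3) F_id X.hom_obj[OF sr(1)] by simp
  then show ?thesis unfolding Y.summand_def using F_hom sr by blast
qed

lemma fsums_mono: "Z \<in> fsums Y S \<Longrightarrow> S \<subseteq> S' \<Longrightarrow> Z \<in> fsums Y S'"
proof (induction rule: fsums.induct)
  case (zero Z) show ?case by (rule fsums.zero[OF zero(1)])
next
  case (step Z U P i1 i2 p1 p2)
  have "U \<in> S'" using step by blast
  show ?case by (rule fsums.step[OF step.IH[OF step.prems] \<open>U \<in> S'\<close> step(3)])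
qed

lemma F_fsums: "Z \<in> fsums X S \<Longrightarrow> Fo Z \<in> fsums Y (Fo ` S)"
proof (induction rule: fsums.induct)
  case (zero Z) show ?case by (rule fsums.zero[OF F_zero_obj[OF zero]])
next
  case (step Z U P i1 i2 p1 p2)
  have "Fo U \<in> Fo ` S" using step(2) by blast
  show ?case by (rule fsums.step[OF step.IH \<open>Fo U \<in> Fo ` S\<close> F_biprod[OF step(3)]])
qed

lemma F_addc: "A \<in> addc X S \<Longrightarrow> Fo A \<in> addc Y (Fo ` S)"
proof -
  assume A: "A \<in> addc X S"
  obtain Z where Z: "Z \<in> fsums X (S \<inter> Obj X)" "X.summand A Z" using A unfolding X.addc_iff by blast
  have "Fo Z \<in> fsums Y (Fo ` (S \<inter> Obj X))" using F_fsums[OF Z(1)] .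
  moreover have "Fo ` (S \<inter> Obj X) \<subseteq> Fo ` S \<inter> Obj Y" using F_obj by blast
  ultimately have "Fo Z \<in> fsums Y (Fo ` S \<inter> Obj Y)" using fsums_mono by blast
  moreover have "Fo A \<in> Obj Y" using F_obj X.addc_obj[OF A] by blast
  ultimately show ?thesis unfolding Y.addc_iff using F_summand[OF Z(2)] by blast
qed

end

definition iso_closed :: "('o,'m,'e,'k) ecat \<Rightarrow> 'o set \<Rightarrow> bool" where
  "iso_closed Y U \<longleftrightarrow> (\<forall>A B. isomorphic Y A B \<longrightarrow> B \<in> U \<longrightarrow> A \<in> U)"

locale weakly_exact_fun = X: extriangulated X + Y: extriangulated Y + additive_fun X Y Fo Fm
  for X :: "('o1,'m1,'e1,'k::field) ecat" and Y :: "('o2,'m2,'e2,'k) ecat"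
  and Fo :: "'o1 \<Rightarrow> 'o2" and Fm :: "'m1 \<Rightarrow> 'm2" +
  assumes etri_image: "\<And>A x B y C d. etri X A x B y C d \<Longrightarrow>
     \<exists>A' x' y' C' d'. etri Y A' x' (Fo B) y' C' d' \<and> isomorphic Y A' (Fo A) \<and> isomorphic Y C' (Fo C)"
begin

lemma F_ext_set: "Fo ` U1 \<subseteq> U1' \<Longrightarrow> Fo ` U2 \<subseteq> U2' \<Longrightarrow> iso_closed Y U1' \<Longrightarrow> iso_closed Y U2' \<Longrightarrow>
   Fo ` X.ext_set U1 U2 \<subseteq> Y.ext_set U1' U2'"
proof
  fix B' assume a: "Fo ` U1 \<subseteq> U1'" "Fo ` U2 \<subseteq> U2'" "iso_closed Y U1'" "iso_closed Y U2'" and "B' \<in> Fo ` X.ext_set U1 U2"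
  then obtain B where B: "B' = Fo B" "B \<in> X.ext_set U1 U2" by blast
  then obtain V1 V2 x y d where t: "V1 \<in> U1" "V2 \<in> U2" "etri X V1 x B y V2 d" unfolding X.ext_set_def by blast
  obtain A' x' y' C' d' where t': "etri Y A' x' (Fo B) y' C' d'" "isomorphic Y A' (Fo V1)" "isomorphic Y C' (Fo V2)"
    using etri_image[OF t(3)] by blast
  have "A' \<in> U1'" using a t t'(2) unfolding iso_closed_def by blast
  moreover have "C' \<in> U2'" using a t t'(3) unfolding iso_closed_def by blast
  ultimately show "B' \<in> Y.ext_set U1' U2'" unfolding Y.ext_set_def using t'(1) B(1) Y.etriD by blast
qed

lemma iso_closed_addc: "iso_closed Y (addc Y S)" unfolding iso_closed_def using Y.addc_iso by blast
lemma iso_closed_gen: "n \<ge> 1 \<Longrightarrow> iso_closed Y (gen Y T n)" unfolding iso_closed_def using Y.gen_iso by blast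

lemma F_gen: "A \<in> gen X T n \<Longrightarrow> Fo A \<in> gen Y (Fo T) n"
proof (induction n arbitrary: A)
  case 0 then show ?case by simp
next
  case (Suc n)
  show ?case
  proof (cases "n = 0")
    case True
    then have "A \<in> addc X {T}" using Suc.prems by simp
    then have "Fo A \<in> addc Y (Fo ` {T})" by (rule F_addc)
    then show ?thesis using True by (simp add: image_insert)
  next
    case False
    then have n: "n \<ge> 1" by simp
    have A: "A \<in> addc X (X.ext_set (addc X {T}) (gen X T n))" using Suc.prems n X.diamond_ext_set by simp
    have "Fo ` addc X {T} \<subseteq> addc Y {Fo T}"
    proof
      fix B assume "B \<in> Fo ` addc X {T}"
      then obtain A' where "A' \<in> addc X {T}" "B = Fo A'" by blast
      then show "B \<in> addc Y {Fo T}" using F_addc[of A' "{T}"] by simp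
    qed
    moreover have "Fo ` gen X T n \<subseteq> gen Y (Fo T) n" using Suc.IH by blast
    ultimately have "Fo ` X.ext_set (addc X {T}) (gen X T n) \<subseteq> Y.ext_set (addc Y {Fo T}) (gen Y (Fo T) n)"
      by (rule F_ext_set[OF _ _ iso_closed_addc iso_closed_gen[OF n]])
    then have "addc Y (Fo ` X.ext_set (addc X {T}) (gen X T n)) \<subseteq> addc Y (Y.ext_set (addc Y {Fo T}) (gen Y (Fo T) n))"
      by (rule Y.addc_mono)
    then have "Fo A \<in> addc Y (Y.ext_set (addc Y {Fo T}) (gen Y (Fo T) n))" using F_addc[OF A] by blast
    then show ?thesis using n Y.diamond_ext_set by simp
  qed
qed

lemma image_in_gen:
  assumes "ext_dim X = enat n"
  obtains T where "T \<in> Obj X" "\<And>A. A \<in> Obj X \<Longrightarrow> Fo A \<in> gen Y (Fo T) (Suc n)"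
  using X.ext_dim_enat_gen[OF assms] F_gen by blast

end

lemma extriangulatedI: "extri_cat X \<Longrightarrow> extriangulated X"
proof -
  assume e: "extri_cat X"
  have "klinear_additive_cat X" using e unfolding extri_cat_def by (elim conjE)
  then show ?thesis using e unfolding extriangulated_def extriangulated_axioms_def additive_kcat_def by blast
qed

lemma additive_funI: "klinear_additive_cat X \<Longrightarrow> klinear_additive_cat Y \<Longrightarrow> additive_functor X Y Fo Fm \<Longrightarrow> additive_fun X Y Fo Fm"
  unfolding additive_fun_def additive_fun_axioms_def additive_kcat_def by blast

lemma exact_functor_etri:
  assumes eY: "extri_cat Y" and ef: "exact_functor X Y Fo Fm" and t: "etri X A x B y C d"
  shows "\<exists>d'. etri Y (Fo A) (Fm x) (Fo B) (Fm y) (Fo C) d'"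
proof -
  interpret Y: extriangulated Y using extriangulatedI[OF eY] .
  from ef obtain \<eta> where "\<forall>A x B y C d. etri X A x B y C d \<longrightarrow> rlz Y (Fo C) (Fo A) (\<eta> C A d) (Fo B) (Fm x) (Fm y)"
    unfolding exact_functor_def by (elim conjE exE) blast
  then show ?thesis using t Y.rlz_etri by blast
qed

lemma exact_weakly_exact:
  assumes eX: "extri_cat X" and eY: "extri_cat Y" and ef: "exact_functor X Y Fo Fm"
  shows "weakly_exact_fun X Y Fo Fm"
proof -
  interpret X: extriangulated X using extriangulatedI[OF eX] .
  interpret Y: extriangulated Y using extriangulatedI[OF eY] .
  have "additive_functor X Y Fo Fm" using ef unfolding exact_functor_def by (elim conjE)
  then interpret F: additive_fun X Y Fo Fm using additive_funI[OF X.kl Y.kl] by blast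
  show ?thesis
  proof (intro weakly_exact_fun.intro weakly_exact_fun_axioms.intro)
    show "extriangulated X" "extriangulated Y" "additive_fun X Y Fo Fm" by unfold_locales
    fix A x B y C d assume t: "etri X A x B y C d"
    then obtain d' where "etri Y (Fo A) (Fm x) (Fo B) (Fm y) (Fo C) d'" using exact_functor_etri[OF eY ef] by blast
    moreover have "isomorphic Y (Fo A) (Fo A)" "isomorphic Y (Fo C) (Fo C)"
      using t X.etriD F.F_obj Y.isomorphic_refl by blast+
    ultimately show "\<exists>A' x' y' C' d'. etri Y A' x' (Fo B) y' C' d' \<and> isomorphic Y A' (Fo A) \<and> isomorphic Y C' (Fo C)"
      by blast
  qed
qed

locale adjoint_pair = X: additive_kcat X + Y: additive_kcat Y
  for X :: "('o1,'m1,'e1,'k::field) ecat" and Y :: "('o2,'m2,'e2,'k) ecat" +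
  fixes Fo :: "'o1 \<Rightarrow> 'o2" and Fm :: "'m1 \<Rightarrow> 'm2" and Go :: "'o2 \<Rightarrow> 'o1" and Gm :: "'m2 \<Rightarrow> 'm1"
    and unit :: "'o1 \<Rightarrow> 'm1" and counit :: "'o2 \<Rightarrow> 'm2"
  assumes Fa: "additive_functor X Y Fo Fm" and Ga: "additive_functor Y X Go Gm"
    and ad: "adjunction X Y Fo Fm Go Gm unit counit"
begin

sublocale F: additive_fun X Y Fo Fm using additive_funI[OF X.kl Y.kl Fa] .
sublocale G: additive_fun Y X Go Gm using additive_funI[OF Y.kl X.kl Ga] .

lemma unit_hom: "A \<in> Obj X \<Longrightarrow> unit A \<in> Hom X A (Go (Fo A))" using ad unfolding adjunction_def by blast
lemma counit_hom: "B \<in> Obj Y \<Longrightarrow> counit B \<in> Hom Y (Fo (Go B)) B" using ad unfolding adjunction_def by blast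
lemma unit_nat: "f \<in> Hom X A A' \<Longrightarrow> cmp X (unit A') f = cmp X (Gm (Fm f)) (unit A)"
  using ad unfolding adjunction_def by blast
lemma counit_nat: "g \<in> Hom Y B B' \<Longrightarrow> cmp Y g (counit B) = cmp Y (counit B') (Fm (Gm g))"
  using ad unfolding adjunction_def by blast
lemma triangle_unit: "A \<in> Obj X \<Longrightarrow> cmp Y (counit (Fo A)) (Fm (unit A)) = idm Y (Fo A)"
  using ad unfolding adjunction_def by blast
lemma triangle_counit: "B \<in> Obj Y \<Longrightarrow> cmp X (Gm (counit B)) (unit (Go B)) = idm X (Go B)"
  using ad unfolding adjunction_def by blast

lemma unit_iso_fully_faithful: assumes ff: "fully_faithful X Y Fo Fm" and A: "A \<in> Obj X"
  shows "is_iso X A (Go (Fo A)) (unit A)"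
proof -
  have FA: "Fo A \<in> Obj Y" using F.F_obj A by blast
  have GFA: "Go (Fo A) \<in> Obj X" using G.F_obj FA by blast
  have bij: "bij_betw Fm (Hom X (Go (Fo A)) A) (Hom Y (Fo (Go (Fo A))) (Fo A))" using ff GFA A unfolding fully_faithful_def by blast
  have c: "counit (Fo A) \<in> Hom Y (Fo (Go (Fo A))) (Fo A)" using counit_hom FA by blast
  have "counit (Fo A) \<in> Fm ` Hom X (Go (Fo A)) A" using bij c unfolding bij_betw_def by simp
  then obtain v where v: "v \<in> Hom X (Go (Fo A)) A" "Fm v = counit (Fo A)" by (metis imageE)
  have bij2: "bij_betw Fm (Hom X A A) (Hom Y (Fo A) (Fo A))" using ff A unfolding fully_faithful_def by blast
  have u: "unit A \<in> Hom X A (Go (Fo A))" using unit_hom A by blast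
  have "Fm (cmp X v (unit A)) = Fm (idm X A)"
    using F.F_cmp[OF u v(1)] v(2) triangle_unit[OF A] F.F_id[OF A] by simp
  moreover have "cmp X v (unit A) \<in> Hom X A A" using X.comp_hom u v by blast
  ultimately have l: "cmp X v (unit A) = idm X A" using inj_onD[OF bij_betw_imp_inj_on[OF bij2]] X.id_hom[OF A] by blast
  have "cmp X (unit A) v = cmp X (Gm (Fm v)) (unit (Go (Fo A)))" using unit_nat[OF v(1)] .
  also have "\<dots> = idm X (Go (Fo A))" using v(2) triangle_counit[OF FA] by simp
  finally show ?thesis using X.iso_from_inverses[OF u v(1) v(1) l] by blast
qed

lemma counit_iso_fully_faithful: assumes ff: "fully_faithful Y X Go Gm" and B: "B \<in> Obj Y"
  shows "is_iso Y (Fo (Go B)) B (counit B)"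
proof -
  have GB: "Go B \<in> Obj X" using G.F_obj B by blast
  have FGB: "Fo (Go B) \<in> Obj Y" using F.F_obj GB by blast
  have bij: "bij_betw Gm (Hom Y B (Fo (Go B))) (Hom X (Go B) (Go (Fo (Go B))))" using ff FGB B unfolding fully_faithful_def by blast
  have u: "unit (Go B) \<in> Hom X (Go B) (Go (Fo (Go B)))" using unit_hom GB by blast
  have "unit (Go B) \<in> Gm ` Hom Y B (Fo (Go B))" using bij u unfolding bij_betw_def by simp
  then obtain w where w: "w \<in> Hom Y B (Fo (Go B))" "Gm w = unit (Go B)" by (metis imageE)
  have bij2: "bij_betw Gm (Hom Y B B) (Hom X (Go B) (Go B))" using ff B unfolding fully_faithful_def by blast
  have c: "counit B \<in> Hom Y (Fo (Go B)) B" using counit_hom B by blast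
  have "Gm (cmp Y (counit B) w) = Gm (idm Y B)"
    using G.F_cmp[OF w(1) c] w(2) triangle_counit[OF B] G.F_id[OF B] by simp
  moreover have "cmp Y (counit B) w \<in> Hom Y B B" using Y.comp_hom c w by blast
  ultimately have r: "cmp Y (counit B) w = idm Y B" using inj_onD[OF bij_betw_imp_inj_on[OF bij2]] Y.id_hom[OF B] by blast
  have "cmp Y w (counit B) = cmp Y (counit (Fo (Go B))) (Fm (Gm w))" using counit_nat[OF w(1)] .
  also have "\<dots> = idm Y (Fo (Go B))" using w(2) triangle_unit[OF GB] by simp
  finally show ?thesis using Y.iso_from_inverses[OF c w(1) w(1)] r by blast
qed

lemma transpose_zero_l: assumes A: "A \<in> Obj X" and g: "g \<in> Hom Y (Fo A) B"
  and z: "cmp X (Gm g) (unit A) = mzero X A (Go B)" shows "g = mzero Y (Fo A) B"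
proof -
  have FA: "Fo A \<in> Obj Y" using F.F_obj A by blast
  have B: "B \<in> Obj Y" using Y.hom_obj g by blast
  have u: "unit A \<in> Hom X A (Go (Fo A))" using unit_hom A by blast
  have cFA: "counit (Fo A) \<in> Hom Y (Fo (Go (Fo A))) (Fo A)" using counit_hom FA by blast
  have cB: "counit B \<in> Hom Y (Fo (Go B)) B" using counit_hom B by blast
  have Gg: "Gm g \<in> Hom X (Go (Fo A)) (Go B)" using G.F_hom g by blast
  have FGg: "Fm (Gm g) \<in> Hom Y (Fo (Go (Fo A))) (Fo (Go B))" using F.F_hom Gg by blast
  have Fu: "Fm (unit A) \<in> Hom Y (Fo A) (Fo (Go (Fo A)))" using F.F_hom u by blast
  have "g = cmp Y g (cmp Y (counit (Fo A)) (Fm (unit A)))" using triangle_unit[OF A] Y.id_r[OF g] by simp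
  also have "\<dots> = cmp Y (cmp Y g (counit (Fo A))) (Fm (unit A))" using Y.cmp_assoc[OF Fu cFA g] .
  also have "\<dots> = cmp Y (cmp Y (counit B) (Fm (Gm g))) (Fm (unit A))" using counit_nat[OF g] by simp
  also have "\<dots> = cmp Y (counit B) (Fm (cmp X (Gm g) (unit A)))" using Y.cmp_assoc[OF Fu FGg cB] F.F_cmp[OF u Gg] by simp
  also have "\<dots> = cmp Y (counit B) (mzero Y (Fo A) (Fo (Go B)))" using z F.F_zero A G.F_obj B by simp
  also have "\<dots> = mzero Y (Fo A) B" using Y.cmp_zero_r[OF cB FA] .
  finally show ?thesis .
qed

lemma transpose_zero_r: assumes f: "f \<in> Hom X A (Go B)" and B: "B \<in> Obj Y"
  and z: "cmp Y (counit B) (Fm f) = mzero Y (Fo A) B" shows "f = mzero X A (Go B)"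
proof -
  have A: "A \<in> Obj X" using X.hom_obj f by blast
  have GB: "Go B \<in> Obj X" using G.F_obj B by blast
  have uGB: "unit (Go B) \<in> Hom X (Go B) (Go (Fo (Go B)))" using unit_hom GB by blast
  have uA: "unit A \<in> Hom X A (Go (Fo A))" using unit_hom A by blast
  have cB: "counit B \<in> Hom Y (Fo (Go B)) B" using counit_hom B by blast
  have Gc: "Gm (counit B) \<in> Hom X (Go (Fo (Go B))) (Go B)" using G.F_hom cB by blast
  have Ff: "Fm f \<in> Hom Y (Fo A) (Fo (Go B))" using F.F_hom f by blast
  have GFf: "Gm (Fm f) \<in> Hom X (Go (Fo A)) (Go (Fo (Go B)))" using G.F_hom Ff by blast
  have "f = cmp X (cmp X (Gm (counit B)) (unit (Go B))) f" using triangle_counit[OF B] X.id_l[OF f] by simp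
  also have "\<dots> = cmp X (Gm (counit B)) (cmp X (unit (Go B)) f)" using X.cmp_assoc[OF f uGB Gc] by simp
  also have "\<dots> = cmp X (Gm (counit B)) (cmp X (Gm (Fm f)) (unit A))" using unit_nat[OF f] by simp
  also have "\<dots> = cmp X (Gm (cmp Y (counit B) (Fm f))) (unit A)" using X.cmp_assoc[OF uA GFf Gc] G.F_cmp[OF Ff cB] by simp
  also have "\<dots> = cmp X (mzero X (Go (Fo A)) (Go B)) (unit A)" using z G.F_zero F.F_obj A B by simp
  also have "\<dots> = mzero X A (Go B)" using X.cmp_zero_l[OF uA GB] .
  finally show ?thesis .
qed

end

declare gen.simps[simp del]

lemma ext_dim_le_of_dense:
  assumes w: "weakly_exact_fun Y X Fo Fm"
    and dense: "\<And>A. A \<in> Obj X \<Longrightarrow> \<exists>B \<in> Obj Y. isomorphic X A (Fo B)"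
  shows "ext_dim X \<le> ext_dim Y"
proof (cases "ext_dim Y")
  case infinity then show ?thesis by simp
next
  case (enat n)
  interpret w: weakly_exact_fun Y X Fo Fm using w .
  obtain T where T: "T \<in> Obj Y" "\<And>B. B \<in> Obj Y \<Longrightarrow> Fo B \<in> gen X (Fo T) (Suc n)"
    using w.image_in_gen[OF enat] by blast
  have "gen X (Fo T) (Suc n) = Obj X"
  proof
    show "gen X (Fo T) (Suc n) \<subseteq> Obj X" by (rule w.Y.gen_obj)
    show "Obj X \<subseteq> gen X (Fo T) (Suc n)"
    proof
      fix A assume "A \<in> Obj X"
      then obtain B' where "B' \<in> Obj Y" "isomorphic X A (Fo B')" using dense by blast
      then show "A \<in> gen X (Fo T) (Suc n)" using T(2) w.Y.gen_iso[of "Suc n"] by auto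
    qed
  qed
  then have "ext_dim X \<le> enat n" using w.Y.ext_dim_le_enat w.F_obj T(1) by blast
  then show ?thesis using enat by simp
qed

lemma ext_dim_le_of_extensions:
  assumes w1: "weakly_exact_fun X1 B F1o F1m" and w2: "weakly_exact_fun X2 B F2o F2m"
    and ext: "\<And>X. X \<in> Obj B \<Longrightarrow> \<exists>P x Q y d A1 A2. etri B P x X y Q d \<and> A1 \<in> Obj X1 \<and> A2 \<in> Obj X2 \<and>
                 isomorphic B P (F1o A1) \<and> isomorphic B Q (F2o A2)"
  shows "ext_dim B \<le> ext_dim X1 + ext_dim X2 + 1"
proof (cases "ext_dim X1 = \<infinity> \<or> ext_dim X2 = \<infinity>")
  case True then show ?thesis by auto
next
  case False
  then obtain m n where mn: "ext_dim X1 = enat m" "ext_dim X2 = enat n" by auto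
  interpret w1: weakly_exact_fun X1 B F1o F1m using w1 .
  interpret w2: weakly_exact_fun X2 B F2o F2m using w2 .
  obtain T1 where T1: "T1 \<in> Obj X1" "\<And>A. A \<in> Obj X1 \<Longrightarrow> F1o A \<in> gen B (F1o T1) (Suc m)"
    using w1.image_in_gen[OF mn(1)] by blast
  obtain T2 where T2: "T2 \<in> Obj X2" "\<And>A. A \<in> Obj X2 \<Longrightarrow> F2o A \<in> gen B (F2o T2) (Suc n)"
    using w2.image_in_gen[OF mn(2)] by blast
  obtain U i1 i2 p1 p2 where U: "is_biprod B (F1o T1) (F2o T2) U i1 i2 p1 p2"
    using w1.Y.has_biprod w1.F_obj T1(1) w2.F_obj T2(1) by blast
  have U1: "gen B (F1o T1) (Suc m) \<subseteq> gen B U (Suc m)"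
    using w1.Y.gen_mono_generator w1.Y.biprod_in_addc[OF U] by blast
  have U2: "gen B (F2o T2) (Suc n) \<subseteq> gen B U (Suc n)"
    using w1.Y.gen_mono_generator w1.Y.biprod_in_addc[OF U] by blast
  have "gen B U (Suc m + Suc n) = Obj B"
  proof
    show "gen B U (Suc m + Suc n) \<subseteq> Obj B" by (rule w1.Y.gen_obj)
    show "Obj B \<subseteq> gen B U (Suc m + Suc n)"
    proof
      fix X assume X: "X \<in> Obj B"
      obtain P x Q y d A1 A2 where t: "etri B P x X y Q d" "A1 \<in> Obj X1" "A2 \<in> Obj X2"
        "isomorphic B P (F1o A1)" "isomorphic B Q (F2o A2)" using ext[OF X] by blast
      have P: "P \<in> gen B U (Suc m)" using w1.Y.gen_iso[OF _ t(4)] T1(2)[OF t(2)] U1 by auto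
      have Q: "Q \<in> gen B U (Suc n)" using w1.Y.gen_iso[OF _ t(5)] T2(2)[OF t(3)] U2 by auto
      show "X \<in> gen B U (Suc m + Suc n)" using w1.Y.gen_extension[OF _ Q _ P t(1)] by simp
    qed
  qed
  then have "gen B U (Suc (m + n + 1)) = Obj B" by simp
  then have "ext_dim B \<le> enat (m + n + 1)" using w1.Y.ext_dim_le_enat w1.Y.biprodD[OF U] by blast
  then show ?thesis using mn by (simp add: one_enat_def)
qed

section \<open>Recollements\<close>

(* The adjunction data: u1, c1 for i^* -| i_*; u2, c2 for i_* -| i^!; u3, c3 for j_! -| j^*;
   u4, c4 for j^* -| j_*. *)
locale recollement_data =
  fixes A :: "('a, 'am, 'ae, 'k::field) ecat"
    and B :: "('b, 'bm, 'be, 'k) ecat"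
    and C :: "('c, 'cm, 'ce, 'k) ecat"
    and iUo iUm iLo iLm iSo iSm jUo jUm jLo jLm jSo jSm u1 c1 u2 c2 u3 c3 u4 c4
  assumes eA: "extri_cat A" and eB: "extri_cat B" and eC: "extri_cat C"
    and iLe: "exact_functor A B iLo iLm" and jLe: "exact_functor B C jLo jLm"
    and iUr: "right_exact_functor B A iUo iUm" and jUr: "right_exact_functor C B jUo jUm"
    and iSl: "left_exact_functor B A iSo iSm" and jSl: "left_exact_functor C B jSo jSm"
    and ad1: "adjunction B A iUo iUm iLo iLm u1 c1" and ad2: "adjunction A B iLo iLm iSo iSm u2 c2"
    and ad3: "adjunction C B jUo jUm jLo jLm u3 c3" and ad4: "adjunction B C jLo jLm jSo jSm u4 c4"
    and R4: "\<forall>X \<in> Obj B. \<exists>Y \<in> Obj A. \<exists>h.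
            left_exact_4seq B (iLo (iSo X)) (c2 X) X (u4 X) (jSo (jLo X)) h (iLo Y)"
    and R5: "\<forall>X \<in> Obj B. \<exists>Y \<in> Obj A. \<exists>h.
            right_exact_4seq B (iLo Y) h (jUo (jLo X)) (c3 X) X (u1 X) (iLo (iUo X))"
    and R2: "{X \<in> Obj B. \<exists>Y \<in> Obj A. isomorphic B (iLo Y) X} = {X \<in> Obj B. is_zero_obj C (jLo X)}"
    and ffi: "fully_faithful A B iLo iLm" and ffjU: "fully_faithful C B jUo jUm" and ffjS: "fully_faithful C B jSo jSm"
begin

sublocale A: extriangulated A using extriangulatedI[OF eA] .
sublocale B: extriangulated B using extriangulatedI[OF eB] .
sublocale C: extriangulated C using extriangulatedI[OF eC] .

lemma additive_functors: "additive_functor A B iLo iLm" "additive_functor B C jLo jLm" "additive_functor B A iUo iUm"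
  "additive_functor C B jUo jUm" "additive_functor B A iSo iSm" "additive_functor C B jSo jSm"
proof -
  show "additive_functor A B iLo iLm" using iLe unfolding exact_functor_def by (rule conjunct1)
  show "additive_functor B C jLo jLm" using jLe unfolding exact_functor_def by (rule conjunct1)
  show "additive_functor B A iUo iUm" using iUr unfolding right_exact_functor_def by (rule conjunct1)
  show "additive_functor C B jUo jUm" using jUr unfolding right_exact_functor_def by (rule conjunct1)
  show "additive_functor B A iSo iSm" using iSl unfolding left_exact_functor_def by (rule conjunct1)
  show "additive_functor C B jSo jSm" using jSl unfolding left_exact_functor_def by (rule conjunct1)
qed

sublocale iL: additive_fun A B iLo iLm using additive_funI[OF A.kl B.kl additive_functors(1)] .
sublocale jL: additive_fun B C jLo jLm using additive_funI[OF B.kl C.kl additive_functors(2)] .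
sublocale iU: additive_fun B A iUo iUm using additive_funI[OF B.kl A.kl additive_functors(3)] .
sublocale jU: additive_fun C B jUo jUm using additive_funI[OF C.kl B.kl additive_functors(4)] .
sublocale iS: additive_fun B A iSo iSm using additive_funI[OF B.kl A.kl additive_functors(5)] .
sublocale jS: additive_fun C B jSo jSm using additive_funI[OF C.kl B.kl additive_functors(6)] .

sublocale a1: adjoint_pair B A iUo iUm iLo iLm u1 c1
  by (rule adjoint_pair.intro[OF B.additive_kcat_axioms A.additive_kcat_axioms
        adjoint_pair_axioms.intro[OF additive_functors(3) additive_functors(1) ad1]])
sublocale a2: adjoint_pair A B iLo iLm iSo iSm u2 c2
  by (rule adjoint_pair.intro[OF A.additive_kcat_axioms B.additive_kcat_axioms
        adjoint_pair_axioms.intro[OF additive_functors(1) additive_functors(5) ad2]])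
sublocale a3: adjoint_pair C B jUo jUm jLo jLm u3 c3
  by (rule adjoint_pair.intro[OF C.additive_kcat_axioms B.additive_kcat_axioms
        adjoint_pair_axioms.intro[OF additive_functors(4) additive_functors(2) ad3]])
sublocale a4: adjoint_pair B C jLo jLm jSo jSm u4 c4
  by (rule adjoint_pair.intro[OF B.additive_kcat_axioms C.additive_kcat_axioms
        adjoint_pair_axioms.intro[OF additive_functors(2) additive_functors(6) ad4]])

lemma iU_iL_counit_iso: "W \<in> Obj A \<Longrightarrow> is_iso A (iUo (iLo W)) W (c1 W)" using a1.counit_iso_fully_faithful ffi by blast
lemma iS_iL_unit_iso: "W \<in> Obj A \<Longrightarrow> is_iso A W (iSo (iLo W)) (u2 W)" using a2.unit_iso_fully_faithful ffi by blast
lemma jL_jU_unit_iso: "Y \<in> Obj C \<Longrightarrow> is_iso C Y (jLo (jUo Y)) (u3 Y)" using a3.unit_iso_fully_faithful ffjU by blast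
lemma jL_jS_counit_iso: "Y \<in> Obj C \<Longrightarrow> is_iso C (jLo (jSo Y)) Y (c4 Y)" using a4.counit_iso_fully_faithful ffjS by blast

lemma jL_iL_zero: "W \<in> Obj A \<Longrightarrow> is_zero_obj C (jLo (iLo W))"
proof -
  assume W: "W \<in> Obj A"
  have "iLo W \<in> {X \<in> Obj B. \<exists>Y \<in> Obj A. isomorphic B (iLo Y) X}" using W iL.F_obj B.isomorphic_refl by blast
  then show ?thesis using R2 by blast
qed

lemma iU_jU_zero: assumes Y: "Y \<in> Obj C" shows "is_zero_obj A (iUo (jUo Y))"
proof -
  let ?P = "jUo Y" let ?W = "iUo ?P"
  have P: "?P \<in> Obj B" using jU.F_obj Y by blast
  have W: "?W \<in> Obj A" using iU.F_obj P by blast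
  have e: "idm A ?W \<in> Hom A (iUo ?P) ?W" using A.id_hom W by blast
  let ?g = "cmp B (iLm (idm A ?W)) (u1 ?P)"
  have g: "?g \<in> Hom B (jUo Y) (iLo ?W)" using B.comp_hom[OF a1.unit_hom[OF P] iL.F_hom[OF e]] .
  have z: "is_zero_obj C (jLo (iLo ?W))" using jL_iL_zero W by blast
  have "cmp C (jLm ?g) (u3 Y) \<in> Hom C Y (jLo (iLo ?W))" using C.comp_hom[OF a3.unit_hom[OF Y] jL.F_hom[OF g]] .
  then have "cmp C (jLm ?g) (u3 Y) = mzero C Y (jLo (iLo ?W))" using C.zero_in z by blast
  then have "?g = mzero B (jUo Y) (iLo ?W)" using a3.transpose_zero_l[OF Y g] by blast
  then have "idm A ?W = mzero A (iUo ?P) ?W" using a1.transpose_zero_l[OF P e] by blast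
  then show ?thesis using A.zero_by_id W by blast
qed

lemma iS_jS_zero: assumes Y: "Y \<in> Obj C" shows "is_zero_obj A (iSo (jSo Y))"
proof -
  let ?P = "jSo Y" let ?W = "iSo ?P"
  have P: "?P \<in> Obj B" using jS.F_obj Y by blast
  have W: "?W \<in> Obj A" using iS.F_obj P by blast
  have e: "idm A ?W \<in> Hom A ?W (iSo ?P)" using A.id_hom W by blast
  let ?f = "cmp B (c2 ?P) (iLm (idm A ?W))"
  have f: "?f \<in> Hom B (iLo ?W) (jSo Y)" using B.comp_hom[OF iL.F_hom[OF e] a2.counit_hom[OF P]] .
  have z: "is_zero_obj C (jLo (iLo ?W))" using jL_iL_zero W by blast
  have "cmp C (c4 Y) (jLm ?f) \<in> Hom C (jLo (iLo ?W)) Y" using C.comp_hom[OF jL.F_hom[OF f] a4.counit_hom[OF Y]] .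
  then have "cmp C (c4 Y) (jLm ?f) = mzero C (jLo (iLo ?W)) Y" using C.zero_out z by blast
  then have "?f = mzero B (iLo ?W) (jSo Y)" using a4.transpose_zero_r[OF f Y] by blast
  then have "idm A ?W = mzero A ?W (iSo ?P)" using a2.transpose_zero_r[OF e P] by blast
  then show ?thesis using A.zero_by_id W by blast
qed

lemma etri_iU_unit: assumes iUe: "exact_functor B A iUo iUm" and X: "X \<in> Obj B"
  shows "\<exists>K g d. etri B K g X (u1 X) (iLo (iUo X)) d \<and> isomorphic B K (jUo (jLo X))"
proof -
  obtain Y h where Y: "Y \<in> Obj A" "right_exact_4seq B (iLo Y) h (jUo (jLo X)) (c3 X) X (u1 X) (iLo (iUo X))"
    using R5 X by blast
  then obtain K g1 g2 d1 d2 where t1: "etri B (iLo Y) h (jUo (jLo X)) g1 K d1"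
    and t2: "etri B K g2 X (u1 X) (iLo (iUo X)) d2" unfolding right_exact_4seq_def by blast
  obtain d2' where t2': "etri A (iUo K) (iUm g2) (iUo X) (iUm (u1 X)) (iUo (iLo (iUo X))) d2'"
    using exact_functor_etri[OF eA iUe t2] by blast
  have iUX: "iUo X \<in> Obj A" using iU.F_obj X by blast
  have "is_iso A (iUo X) (iUo (iLo (iUo X))) (iUm (u1 X))"
    using A.iso_of_left_inverse[OF iU_iL_counit_iso[OF iUX] iU.F_hom[OF a1.unit_hom[OF X]] a1.triangle_unit[OF X]] .
  then have zK: "is_zero_obj A (iUo K)" using A.etri_deflation_iso_fst_zero[OF t2'] by blast
  obtain d1' where t1': "etri A (iUo (iLo Y)) (iUm h) (iUo (jUo (jLo X))) (iUm g1) (iUo K) d1'"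
    using exact_functor_etri[OF eA iUe t1] by blast
  have "is_zero_obj A (iUo (jUo (jLo X)))" using iU_jU_zero jL.F_obj X by blast
  then have "is_zero_obj A (iUo (iLo Y))" using A.etri_fst_zero[OF t1'] zK by blast
  then have "is_zero_obj A Y" using A.zero_iso_to iU_iL_counit_iso[OF Y(1)] by blast
  then have "is_zero_obj B (iLo Y)" using iL.F_zero_obj by blast
  then have "is_iso B (jUo (jLo X)) K g1" using B.etri_fst_zero_iso[OF t1] by blast
  then have "isomorphic B K (jUo (jLo X))" using B.isomorphic_sym B.etriD[OF t1] unfolding isomorphic_def by blast
  then show ?thesis using t2 by blast
qed

lemma iU_zero_isomorphic:
  assumes iUe: "exact_functor B A iUo iUm" and X: "X \<in> Obj B" and z: "is_zero_obj A (iUo X)"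
  shows "isomorphic B X (jUo (jLo X))"
proof -
  obtain K g d where K: "etri B K g X (u1 X) (iLo (iUo X)) d" "isomorphic B K (jUo (jLo X))"
    using etri_iU_unit[OF iUe X] by blast
  have "is_iso B K X g" using B.etri_trd_zero_iso[OF K(1) iL.F_zero_obj[OF z]] .
  then have "isomorphic B K X" unfolding isomorphic_def using B.etriD[OF K(1)] by blast
  then show ?thesis using K(2) B.isomorphic_sym B.isomorphic_trans by blast
qed

lemma jU_etri: "etri C A0 x B0 y C0 d \<Longrightarrow> \<exists>A' x' d'. etri B A' x' (jUo B0) (jUm y) (jUo C0) d'"
  using jUr unfolding right_exact_functor_def by (elim conjE exE) blast

lemma jU_weakly_exact: assumes iUe: "exact_functor B A iUo iUm" shows "weakly_exact_fun C B jUo jUm"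
proof (intro weakly_exact_fun.intro weakly_exact_fun_axioms.intro)
  show "extriangulated C" "extriangulated B" "additive_fun C B jUo jUm" by unfold_locales
  fix A0 x B0 y C0 d assume t: "etri C A0 x B0 y C0 d"
  note tt = C.etriD[OF t]
  obtain A' x' d' where t': "etri B A' x' (jUo B0) (jUm y) (jUo C0) d'" using jU_etri[OF t] by blast
  obtain e where te: "etri A (iUo A') (iUm x') (iUo (jUo B0)) (iUm (jUm y)) (iUo (jUo C0)) e"
    using exact_functor_etri[OF eA iUe t'] by blast
  have "is_zero_obj A (iUo A')" using A.etri_fst_zero[OF te] iU_jU_zero tt by blast
  then have i1: "isomorphic B A' (jUo (jLo A'))" using iU_zero_isomorphic[OF iUe] B.etriD[OF t'] by blast
  obtain d'' where t2: "etri C (jLo A') (jLm x') (jLo (jUo B0)) (jLm (jUm y)) (jLo (jUo C0)) d''"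
    using exact_functor_etri[OF eC jLe t'] by blast
  have "isomorphic C A0 (jLo A')"
    using C.etri_fst_isomorphic[OF t t2 jL_jU_unit_iso jL_jU_unit_iso a3.unit_nat] tt by blast
  then have "isomorphic B (jUo A0) (jUo (jLo A'))" using jU.F_isomorphic by blast
  then have "isomorphic B A' (jUo A0)" using i1 B.isomorphic_sym B.isomorphic_trans by blast
  moreover have "isomorphic B (jUo C0) (jUo C0)" using B.isomorphic_refl jU.F_obj tt by blast
  ultimately show "\<exists>A' x' y' C' d'. etri B A' x' (jUo B0) y' C' d' \<and>
      isomorphic B A' (jUo A0) \<and> isomorphic B C' (jUo C0)"
    using t' by blast
qed

lemma etri_iS_counit: assumes iSe: "exact_functor B A iSo iSm" and X: "X \<in> Obj B"
  shows "\<exists>g K d. etri B (iLo (iSo X)) (c2 X) X g K d \<and> isomorphic B K (jSo (jLo X))"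
proof -
  obtain Y h where Y: "Y \<in> Obj A" "left_exact_4seq B (iLo (iSo X)) (c2 X) X (u4 X) (jSo (jLo X)) h (iLo Y)"
    using R4 X by blast
  then obtain K g1 g2 d1 d2 where t1: "etri B (iLo (iSo X)) (c2 X) X g1 K d1"
    and t2: "etri B K g2 (jSo (jLo X)) h (iLo Y) d2" unfolding left_exact_4seq_def by blast
  obtain d1' where t1': "etri A (iSo (iLo (iSo X))) (iSm (c2 X)) (iSo X) (iSm g1) (iSo K) d1'"
    using exact_functor_etri[OF eA iSe t1] by blast
  have iSX: "iSo X \<in> Obj A" using iS.F_obj X by blast
  have "is_iso A (iSo (iLo (iSo X))) (iSo X) (iSm (c2 X))"
    using A.iso_of_right_inverse[OF iS_iL_unit_iso[OF iSX] iS.F_hom[OF a2.counit_hom[OF X]] a2.triangle_counit[OF X]] .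
  then have zK: "is_zero_obj A (iSo K)" using A.etri_inflation_iso_trd_zero[OF t1'] by blast
  obtain d2' where t2': "etri A (iSo K) (iSm g2) (iSo (jSo (jLo X))) (iSm h) (iSo (iLo Y)) d2'"
    using exact_functor_etri[OF eA iSe t2] by blast
  have "is_zero_obj A (iSo (jSo (jLo X)))" using iS_jS_zero jL.F_obj X by blast
  then have "is_zero_obj A (iSo (iLo Y))" using A.etri_trd_zero[OF t2'] zK by blast
  then have "is_zero_obj A Y" using A.zero_iso_from iS_iL_unit_iso[OF Y(1)] by blast
  then have "is_zero_obj B (iLo Y)" using iL.F_zero_obj by blast
  then have "is_iso B K (jSo (jLo X)) g2" using B.etri_trd_zero_iso[OF t2] by blast
  then have "isomorphic B K (jSo (jLo X))" using B.etriD[OF t2] unfolding isomorphic_def by blast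
  then show ?thesis using t1 by blast
qed

lemma iS_zero_isomorphic:
  assumes iSe: "exact_functor B A iSo iSm" and X: "X \<in> Obj B" and z: "is_zero_obj A (iSo X)"
  shows "isomorphic B X (jSo (jLo X))"
proof -
  obtain g K d where K: "etri B (iLo (iSo X)) (c2 X) X g K d" "isomorphic B K (jSo (jLo X))"
    using etri_iS_counit[OF iSe X] by blast
  have "is_iso B X K g" using B.etri_fst_zero_iso[OF K(1) iL.F_zero_obj[OF z]] .
  then have "isomorphic B X K" unfolding isomorphic_def using B.etriD[OF K(1)] by blast
  then show ?thesis using K(2) B.isomorphic_trans by blast
qed

lemma jS_etri: "etri C A0 x B0 y C0 d \<Longrightarrow> \<exists>x' C' d'. etri B (jSo A0) (jSm x) (jSo B0) x' C' d'"
  using jSl unfolding left_exact_functor_def by (elim conjE exE) blast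

lemma jS_weakly_exact: assumes iSe: "exact_functor B A iSo iSm" shows "weakly_exact_fun C B jSo jSm"
proof (intro weakly_exact_fun.intro weakly_exact_fun_axioms.intro)
  show "extriangulated C" "extriangulated B" "additive_fun C B jSo jSm" by unfold_locales
  fix A0 x B0 y C0 d assume t: "etri C A0 x B0 y C0 d"
  note tt = C.etriD[OF t]
  obtain C' x' d' where t': "etri B (jSo A0) (jSm x) (jSo B0) x' C' d'" using jS_etri[OF t] by blast
  obtain e where te: "etri A (iSo (jSo A0)) (iSm (jSm x)) (iSo (jSo B0)) (iSm x') (iSo C') e"
    using exact_functor_etri[OF eA iSe t'] by blast
  have "is_zero_obj A (iSo C')" using A.etri_trd_zero[OF te] iS_jS_zero tt by blast
  then have i1: "isomorphic B C' (jSo (jLo C'))" using iS_zero_isomorphic[OF iSe] B.etriD[OF t'] by blast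
  obtain d'' where t2: "etri C (jLo (jSo A0)) (jLm (jSm x)) (jLo (jSo B0)) (jLm x') (jLo C') d''"
    using exact_functor_etri[OF eC jLe t'] by blast
  have "isomorphic C (jLo C') C0"
    using C.etri_trd_isomorphic[OF t2 t jL_jS_counit_iso jL_jS_counit_iso a4.counit_nat] tt by blast
  then have "isomorphic B (jSo (jLo C')) (jSo C0)" using jS.F_isomorphic by blast
  then have "isomorphic B C' (jSo C0)" using i1 B.isomorphic_trans by blast
  moreover have "isomorphic B (jSo A0) (jSo A0)" using B.isomorphic_refl jS.F_obj tt by blast
  ultimately show "\<exists>A' x' y' C'' d'. etri B A' x' (jSo B0) y' C'' d' \<and>
      isomorphic B A' (jSo A0) \<and> isomorphic B C'' (jSo C0)"
    using t' by blast
qed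

lemma ext_dim_C_le_B: "ext_dim C \<le> ext_dim B"
proof (rule ext_dim_le_of_dense[OF exact_weakly_exact[OF eB eC jLe]])
  fix Y assume Y: "Y \<in> Obj C"
  have "isomorphic C Y (jLo (jUo Y))" unfolding isomorphic_def using jL_jU_unit_iso[OF Y] Y jL.F_obj jU.F_obj by blast
  then show "\<exists>X \<in> Obj B. isomorphic C Y (jLo X)" using jU.F_obj Y by blast
qed

lemma ext_dim_A_le_B_iS:
  assumes "exact_functor B A iSo iSm" shows "ext_dim A \<le> ext_dim B"
proof (rule ext_dim_le_of_dense[OF exact_weakly_exact[OF eB eA assms]])
  fix W assume W: "W \<in> Obj A"
  have "isomorphic A W (iSo (iLo W))" unfolding isomorphic_def using iS_iL_unit_iso[OF W] W iS.F_obj iL.F_obj by blast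
  then show "\<exists>X \<in> Obj B. isomorphic A W (iSo X)" using iL.F_obj W by blast
qed

lemma ext_dim_A_le_B_iU:
  assumes "exact_functor B A iUo iUm" shows "ext_dim A \<le> ext_dim B"
proof (rule ext_dim_le_of_dense[OF exact_weakly_exact[OF eB eA assms]])
  fix W assume W: "W \<in> Obj A"
  have "isomorphic A (iUo (iLo W)) W" unfolding isomorphic_def using iU_iL_counit_iso[OF W] W iU.F_obj iL.F_obj by blast
  then have "isomorphic A W (iUo (iLo W))" using A.isomorphic_sym by blast
  then show "\<exists>X \<in> Obj B. isomorphic A W (iUo X)" using iL.F_obj W by blast
qed

lemma ext_dim_B_le_iS:
  assumes iSe: "exact_functor B A iSo iSm" shows "ext_dim B \<le> ext_dim A + ext_dim C + 1"
proof (rule ext_dim_le_of_extensions[OF exact_weakly_exact[OF eA eB iLe] jS_weakly_exact[OF iSe]])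
  fix X assume X: "X \<in> Obj B"
  obtain g K d where K: "etri B (iLo (iSo X)) (c2 X) X g K d" "isomorphic B K (jSo (jLo X))"
    using etri_iS_counit[OF iSe X] by blast
  have "isomorphic B (iLo (iSo X)) (iLo (iSo X))" using B.isomorphic_refl iL.F_obj iS.F_obj X by blast
  moreover have "iSo X \<in> Obj A" "jLo X \<in> Obj C" using iS.F_obj jL.F_obj X by auto
  ultimately show "\<exists>P x Q y d A1 A2. etri B P x X y Q d \<and> A1 \<in> Obj A \<and> A2 \<in> Obj C \<and>
      isomorphic B P (iLo A1) \<and> isomorphic B Q (jSo A2)"
    using K by blast
qed

lemma ext_dim_B_le_iU:
  assumes iUe: "exact_functor B A iUo iUm" shows "ext_dim B \<le> ext_dim A + ext_dim C + 1"
proof -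
  have "ext_dim B \<le> ext_dim C + ext_dim A + 1"
  proof (rule ext_dim_le_of_extensions[OF jU_weakly_exact[OF iUe] exact_weakly_exact[OF eA eB iLe]])
    fix X assume X: "X \<in> Obj B"
    obtain K g d where K: "etri B K g X (u1 X) (iLo (iUo X)) d" "isomorphic B K (jUo (jLo X))"
      using etri_iU_unit[OF iUe X] by blast
    have "isomorphic B (iLo (iUo X)) (iLo (iUo X))" using B.isomorphic_refl iL.F_obj iU.F_obj X by blast
    moreover have "iUo X \<in> Obj A" "jLo X \<in> Obj C" using iU.F_obj jL.F_obj X by auto
    ultimately show "\<exists>P x Q y d A1 A2. etri B P x X y Q d \<and> A1 \<in> Obj C \<and> A2 \<in> Obj A \<and>
        isomorphic B P (jUo A1) \<and> isomorphic B Q (iLo A2)"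
      using K by blast
  qed
  then show ?thesis by (simp add: add.commute)
qed

theorem ext_dim_bounds:
  assumes "exact_functor B A iSo iSm \<or> exact_functor B A iUo iUm"
  shows "max (ext_dim A) (ext_dim C) \<le> ext_dim B \<and> ext_dim B \<le> ext_dim A + ext_dim C + 1"
  using assms ext_dim_C_le_B ext_dim_A_le_B_iS ext_dim_A_le_B_iU ext_dim_B_le_iS ext_dim_B_le_iU
  by auto

end

lemma recollement_dataE:
  assumes "extri_cat A" and "extri_cat B" and "extri_cat C"
    and "recollement A B C iUo iUm iLo iLm iSo iSm jUo jUm jLo jLm jSo jSm"
  obtains u1 c1 u2 c2 u3 c3 u4 c4 where
    "recollement_data A B C iUo iUm iLo iLm iSo iSm jUo jUm jLo jLm jSo jSm u1 c1 u2 c2 u3 c3 u4 c4"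
  using assms unfolding recollement_def recollement_data_def by blast

theorem mainTheorem8:
  fixes A :: "('a, 'am, 'ae, 'k::field) ecat"
    and B :: "('b, 'bm, 'be, 'k) ecat"
    and C :: "('c, 'cm, 'ce, 'k) ecat"
  assumes "extri_cat A" and "extri_cat B" and "extri_cat C"
    and "recollement A B C iUo iUm iLo iLm iSo iSm jUo jUm jLo jLm jSo jSm"
    and "exact_functor B A iSo iSm \<or> exact_functor B A iUo iUm"
  shows "max (ext_dim A) (ext_dim C) \<le> ext_dim B \<and> ext_dim B \<le> ext_dim A + ext_dim C + 1"
proof -
  obtain u1 c1 u2 c2 u3 c3 u4 c4 where
    "recollement_data A B C iUo iUm iLo iLm iSo iSm jUo jUm jLo jLm jSo jSm u1 c1 u2 c2 u3 c3 u4 c4"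
    using assms(1-4) by (rule recollement_dataE)
  then show ?thesis using assms(5) by (rule recollement_data.ext_dim_bounds)
qed

end
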